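(* Let $n\ge 2$ and $N\in\mathbf{Z}$. For all $r\in M_n(\mathbf{Q}\langle t\rangle)$, $g_1,g_2\in\mathrm{GL}_n(\mathbf{Q}\langle t\rangle_+)$ and $m\in M_n(\mathbf{Q}\langle t\rangle_+)$, we have $r\in C_N$ if and only if $g_1rg_2+t^Nm\in C_N$.
   Context: $\mathbf{A}$ is the adele ring of $\mathbf{Q}$. $\mathbf{A}\langle t\rangle$ is the set of $(a_v)\in\prod_v\mathbf{Q}_v((t))$ with $a_p\in\mathbf{Z}_p((t))$ for almost all primes $p$; $\mathbf{A}\langle t\rangle_+=\mathbf{A}\langle t\rangle\cap\prod_v\mathbf{Q}_v[[t]]$; $\mathbf{Q}\langle t\rangle=\mathbf{Q}((t))\cap\mathbf{A}\langle t\rangle$ (diagonal embedding) and $\mathbf{Q}\langle t\rangle_+=\mathbf{Q}\langle t\rangle\cap\mathbf{Q}[[t]]$. Definition: $C_N$ is the set of $r\in M_n(\mathbf{Q}\langle t\rangle)$ for which there does not exist a unipotent radical $U'$ of a proper parabolic subgroup of $\mathrm{GL}_n$ defined over $\mathbf{Q}$ such that $ru-r\in r\,t\,M_n(\mathbf{A}\langle t\rangle_+)+t^NM_n(\mathbf{A}\langle t\rangle_+)$ for all $u\in U'(\mathbf{A})$ (here $U'(\mathbf{A})\subset\mathrm{GL}_n(\mathbf{A})\subset\mathrm{GL}_n(\mathbf{A}\langle t\rangle)$). *)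

theory Defs
  imports Complex_Main "HOL-Computational_Algebra.Primes" "HOL-Algebra.Ring"
begin

text \<open>Formal Laurent series over a ring R: coefficient functions int => carrier R
  with support bounded below; Cauchy product.\<close>
definition ls_ring :: "('a, 'm) ring_scheme \<Rightarrow> (int \<Rightarrow> 'a) ring" where
  "ls_ring R = \<lparr>carrier = {f. (\<forall>i. f i \<in> carrier R) \<and> (\<exists>M. \<forall>i<M. f i = \<zero>\<^bsub>R\<^esub>)},
     mult = (\<lambda>f g k. finsum R (\<lambda>i. f i \<otimes>\<^bsub>R\<^esub> g (k - i))
                        {i. f i \<noteq> \<zero>\<^bsub>R\<^esub> \<and> g (k - i) \<noteq> \<zero>\<^bsub>R\<^esub>}),
     one = (\<lambda>i. if i = 0 then \<one>\<^bsub>R\<^esub> else \<zero>\<^bsub>R\<^esub>),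
     zero = (\<lambda>i. \<zero>\<^bsub>R\<^esub>),
     add = (\<lambda>f g i. f i \<oplus>\<^bsub>R\<^esub> g i)\<rparr>"

definition ps_carrier :: "('a, 'm) ring_scheme \<Rightarrow> (int \<Rightarrow> 'a) set" where
  "ps_carrier R = {f \<in> carrier (ls_ring R). \<forall>i<0. f i = \<zero>\<^bsub>R\<^esub>}"

text \<open>n x n matrices over R, as functions nat => nat => 'a, zero outside the index range.\<close>
definition mats :: "('a, 'm) ring_scheme \<Rightarrow> nat \<Rightarrow> 'a set \<Rightarrow> (nat \<Rightarrow> nat \<Rightarrow> 'a) set" where
  "mats R n S = {A. (\<forall>i j. i < n \<longrightarrow> j < n \<longrightarrow> A i j \<in> carrier R \<and> A i j \<in> S)
                  \<and> (\<forall>i j. \<not> (i < n \<and> j < n) \<longrightarrow> A i j = \<zero>\<^bsub>R\<^esub>)}"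

definition mmul :: "('a, 'm) ring_scheme \<Rightarrow> nat \<Rightarrow> (nat \<Rightarrow> nat \<Rightarrow> 'a) \<Rightarrow> (nat \<Rightarrow> nat \<Rightarrow> 'a) \<Rightarrow> (nat \<Rightarrow> nat \<Rightarrow> 'a)" where
  "mmul R n A B = (\<lambda>i j. if i < n \<and> j < n then finsum R (\<lambda>k. A i k \<otimes>\<^bsub>R\<^esub> B k j) {..<n} else \<zero>\<^bsub>R\<^esub>)"

definition madd :: "('a, 'm) ring_scheme \<Rightarrow> nat \<Rightarrow> (nat \<Rightarrow> nat \<Rightarrow> 'a) \<Rightarrow> (nat \<Rightarrow> nat \<Rightarrow> 'a) \<Rightarrow> (nat \<Rightarrow> nat \<Rightarrow> 'a)" where
  "madd R n A B = (\<lambda>i j. if i < n \<and> j < n then A i j \<oplus>\<^bsub>R\<^esub> B i j else \<zero>\<^bsub>R\<^esub>)"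

definition msub :: "('a, 'm) ring_scheme \<Rightarrow> nat \<Rightarrow> (nat \<Rightarrow> nat \<Rightarrow> 'a) \<Rightarrow> (nat \<Rightarrow> nat \<Rightarrow> 'a) \<Rightarrow> (nat \<Rightarrow> nat \<Rightarrow> 'a)" where
  "msub R n A B = (\<lambda>i j. if i < n \<and> j < n then A i j \<ominus>\<^bsub>R\<^esub> B i j else \<zero>\<^bsub>R\<^esub>)"

definition msmul :: "('a, 'm) ring_scheme \<Rightarrow> nat \<Rightarrow> 'a \<Rightarrow> (nat \<Rightarrow> nat \<Rightarrow> 'a) \<Rightarrow> (nat \<Rightarrow> nat \<Rightarrow> 'a)" where
  "msmul R n c A = (\<lambda>i j. if i < n \<and> j < n then c \<otimes>\<^bsub>R\<^esub> A i j else \<zero>\<^bsub>R\<^esub>)"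

definition mone :: "('a, 'm) ring_scheme \<Rightarrow> nat \<Rightarrow> (nat \<Rightarrow> nat \<Rightarrow> 'a)" where
  "mone R n = (\<lambda>i j. if i < n \<and> j < n then (if i = j then \<one>\<^bsub>R\<^esub> else \<zero>\<^bsub>R\<^esub>) else \<zero>\<^bsub>R\<^esub>)"

definition gl :: "('a, 'm) ring_scheme \<Rightarrow> nat \<Rightarrow> 'a set \<Rightarrow> (nat \<Rightarrow> nat \<Rightarrow> 'a) set" where
  "gl R n S = {A \<in> mats R n S. \<exists>B \<in> mats R n S. mmul R n A B = mone R n \<and> mmul R n B A = mone R n}"

definition mmap :: "'b \<Rightarrow> nat \<Rightarrow> ('a \<Rightarrow> 'b) \<Rightarrow> (nat \<Rightarrow> nat \<Rightarrow> 'a) \<Rightarrow> (nat \<Rightarrow> nat \<Rightarrow> 'b)" where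
  "mmap z n f A = (\<lambda>i j. if i < n \<and> j < n then f (A i j) else z)"

definition ratR :: "rat ring" where
  "ratR = \<lparr>carrier = UNIV, mult = (*), one = 1, zero = 0, add = (+)\<rparr>"

datatype place = Arch | Fin nat

definition places :: "place set" where
  "places = {Arch} \<union> Fin ` {p. prime p}"

definition padic_val :: "nat \<Rightarrow> rat \<Rightarrow> int" where
  "padic_val p q = int (multiplicity (int p) (fst (quotient_of q)))
                 - int (multiplicity (int p) (snd (quotient_of q)))"

fun rat_absv :: "place \<Rightarrow> rat \<Rightarrow> real" where
  "rat_absv Arch q = \<bar>real_of_rat q\<bar>"
| "rat_absv (Fin p) q = (if q = 0 then 0 else real p powr (- real_of_int (padic_val p q)))"

definition vcauchy :: "place \<Rightarrow> (nat \<Rightarrow> rat) \<Rightarrow> bool" where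
  "vcauchy v X = (\<forall>e>0. \<exists>M. \<forall>m\<ge>M. \<forall>k\<ge>M. rat_absv v (X m - X k) < e)"

definition vnull :: "place \<Rightarrow> (nat \<Rightarrow> rat) \<Rightarrow> bool" where
  "vnull v X = (\<forall>e>0. \<exists>M. \<forall>m\<ge>M. rat_absv v (X m) < e)"

text \<open>Q_v as the completion of Q: classes of |.|_v-Cauchy sequences modulo null sequences.\<close>
definition vclass :: "place \<Rightarrow> (nat \<Rightarrow> rat) \<Rightarrow> (nat \<Rightarrow> rat) set" where
  "vclass v X = {Y. vcauchy v Y \<and> vnull v (\<lambda>k. X k - Y k)}"

definition Qv :: "place \<Rightarrow> (nat \<Rightarrow> rat) set ring" where
  "Qv v = \<lparr>carrier = vclass v ` {X. vcauchy v X},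
     mult = (\<lambda>a b. vclass v (\<lambda>k. (SOME X. X \<in> a) k * (SOME Y. Y \<in> b) k)),
     one = vclass v (\<lambda>_. 1),
     zero = vclass v (\<lambda>_. 0),
     add = (\<lambda>a b. vclass v (\<lambda>k. (SOME X. X \<in> a) k + (SOME Y. Y \<in> b) k))\<rparr>"

definition vrat :: "place \<Rightarrow> rat \<Rightarrow> (nat \<Rightarrow> rat) set" where
  "vrat v q = vclass v (\<lambda>_. q)"

definition Zv :: "place \<Rightarrow> (nat \<Rightarrow> rat) set set" where
  "Zv v = {a \<in> carrier (Qv v). \<exists>X\<in>a. \<forall>k. rat_absv v (X k) \<le> 1}"

definition LSv :: "place \<Rightarrow> (int \<Rightarrow> (nat \<Rightarrow> rat) set) ring" where
  "LSv v = ls_ring (Qv v)"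

type_synonym adt = "place \<Rightarrow> int \<Rightarrow> (nat \<Rightarrow> rat) set"

text \<open>A<t>: restricted product of the Q_v((t)) w.r.t. the Z_p((t)).\<close>
definition At :: "adt ring" where
  "At = \<lparr>carrier = {a. (\<forall>v\<in>places. a v \<in> carrier (LSv v))
                     \<and> (\<forall>v. v \<notin> places \<longrightarrow> a v = \<zero>\<^bsub>LSv v\<^esub>)
                     \<and> finite {p. prime p \<and> \<not> (\<forall>i. a (Fin p) i \<in> Zv (Fin p))}},
     mult = (\<lambda>a b v. if v \<in> places then a v \<otimes>\<^bsub>LSv v\<^esub> b v else \<zero>\<^bsub>LSv v\<^esub>),
     one = (\<lambda>v. if v \<in> places then \<one>\<^bsub>LSv v\<^esub> else \<zero>\<^bsub>LSv v\<^esub>),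
     zero = (\<lambda>v. \<zero>\<^bsub>LSv v\<^esub>),
     add = (\<lambda>a b v. if v \<in> places then a v \<oplus>\<^bsub>LSv v\<^esub> b v else \<zero>\<^bsub>LSv v\<^esub>)\<rparr>"

definition At_plus :: "adt set" where
  "At_plus = {a \<in> carrier At. \<forall>v\<in>places. a v \<in> ps_carrier (Qv v)}"

text \<open>The adele ring A, embedded in A<t> as the constant series.\<close>
definition Adeles :: "adt set" where
  "Adeles = {a \<in> carrier At. \<forall>v\<in>places. \<forall>i. i \<noteq> 0 \<longrightarrow> a v i = \<zero>\<^bsub>Qv v\<^esub>}"

definition QLS :: "(int \<Rightarrow> rat) ring" where
  "QLS = ls_ring ratR"

definition diagQ :: "(int \<Rightarrow> rat) \<Rightarrow> adt" where
  "diagQ f = (\<lambda>v. if v \<in> places then (\<lambda>i. vrat v (f i)) else \<zero>\<^bsub>LSv v\<^esub>)"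

definition Qt :: "(int \<Rightarrow> rat) set" where
  "Qt = {f \<in> carrier QLS. diagQ f \<in> carrier At}"

definition Qt_plus :: "(int \<Rightarrow> rat) set" where
  "Qt_plus = Qt \<inter> ps_carrier ratR"

definition tpow :: "int \<Rightarrow> (int \<Rightarrow> rat)" where
  "tpow N = (\<lambda>i. if i = N then 1 else 0)"

definition const_ls :: "rat \<Rightarrow> (int \<Rightarrow> rat)" where
  "const_ls q = (\<lambda>i. if i = 0 then q else 0)"

text \<open>A standard parabolic is given by a monotone block-labelling b of the indices {0..<n};
  it is proper iff there are at least two blocks.\<close>
definition proper_blocks :: "nat \<Rightarrow> (nat \<Rightarrow> nat) \<Rightarrow> bool" where
  "proper_blocks n b = ((\<forall>i j. i \<le> j \<longrightarrow> j < n \<longrightarrow> b i \<le> b j) \<and> (\<exists>i<n. \<exists>j<n. b i \<noteq> b j))"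

definition std_unip :: "nat \<Rightarrow> (nat \<Rightarrow> nat) \<Rightarrow> adt set \<Rightarrow> (nat \<Rightarrow> nat \<Rightarrow> adt) set" where
  "std_unip n b S = {u \<in> mats At n S. \<forall>i<n. \<forall>j<n.
      (b i = b j \<longrightarrow> u i j = (if i = j then \<one>\<^bsub>At\<^esub> else \<zero>\<^bsub>At\<^esub>)) \<and>
      (b j < b i \<longrightarrow> u i j = \<zero>\<^bsub>At\<^esub>)}"

text \<open>Every unipotent radical U' of a proper parabolic Q-subgroup is x U_b x^{-1} for some
  x in GL_n(Q) and proper b; its group of A-points is x U_b(A) x^{-1}.\<close>
definition unip_A :: "nat \<Rightarrow> (nat \<Rightarrow> nat \<Rightarrow> rat) \<Rightarrow> (nat \<Rightarrow> nat) \<Rightarrow> (nat \<Rightarrow> nat \<Rightarrow> adt) set" where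
  "unip_A n x b = {mmul At n (mmul At n (mmap \<zero>\<^bsub>At\<^esub> n (diagQ \<circ> const_ls) x) u)
                              (mmap \<zero>\<^bsub>At\<^esub> n (diagQ \<circ> const_ls) y)
                   | u y. u \<in> std_unip n b Adeles \<and> y \<in> mats ratR n UNIV
                          \<and> mmul ratR n x y = mone ratR n}"

definition C_N :: "nat \<Rightarrow> int \<Rightarrow> (nat \<Rightarrow> nat \<Rightarrow> (int \<Rightarrow> rat)) set" where
  "C_N n N = {r \<in> mats QLS n Qt.
     \<not> (\<exists>x b. x \<in> gl ratR n UNIV \<and> proper_blocks n b \<and>
          (\<forall>u \<in> unip_A n x b.
             (let R = mmap \<zero>\<^bsub>At\<^esub> n diagQ r in
              msub At n (mmul At n R u) R \<in>
                {madd At n (mmul At n R (msmul At n (diagQ (tpow 1)) X))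
                           (msmul At n (diagQ (tpow N)) Y)
                 | X Y. X \<in> mats At n At_plus \<and> Y \<in> mats At n At_plus})))}"

end

theory Submission
  imports Defs "HOL-Computational_Algebra.Squarefree"
begin

text \<open>
  For a set \<open>U\<close> of matrices, say that \<open>U\<close> stabilises \<open>R \<in> M\<^sub>n(\<bbbA>\<langle>t\<rangle>)\<close> if the defect
  \<open>R u - R\<close> lies in \<open>R t M\<^sub>n(\<bbbA>\<langle>t\<rangle>\<^sub>+) + t\<^sup>N M\<^sub>n(\<bbbA>\<langle>t\<rangle>\<^sub>+)\<close> for all \<open>u \<in> U\<close>; so \<open>r \<in> C\<^sub>N\<close> means that
  no \<open>U'(\<bbbA>)\<close> stabilises \<open>r\<close>. Stabilisation is a purely ring-theoretic condition, and it is
  invariant under the three operations of the lemma. Left multiplication by \<open>g \<in> M\<^sub>n(\<bbbA>\<langle>t\<rangle>\<^sub>+)\<close>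
  simply multiplies the defect by \<open>g\<close>; adding \<open>t\<^sup>N m\<close> changes the defect only by elements of
  \<open>t\<^sup>N M\<^sub>n(\<bbbA>\<langle>t\<rangle>\<^sub>+)\<close>, because \<open>U'(\<bbbA>)\<close> consists of integral matrices. For right multiplication
  by \<open>g \<in> GL\<^sub>n(\<rat>\<langle>t\<rangle>\<^sub>+)\<close> write \<open>g = g\<^sub>0 + t h\<close> with \<open>g\<^sub>0 = g(0) \<in> GL\<^sub>n(\<rat>)\<close>: then \<open>r g\<close> is
  stabilised by \<open>g\<^sub>0\<^sup>-\<^sup>1 U'(\<bbbA>) g\<^sub>0\<close>, which is again the group of \<open>\<bbbA>\<close>-points of the unipotent
  radical of a proper parabolic \<open>\<rat>\<close>-subgroup. All three operations are invertible within
  their class, which gives the equivalence.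
\<close>

section \<open>The absolute values of \<open>\<rat>\<close>\<close>

lemma rat_int_fraction:
  fixes q :: rat
  obtains a b where "a \<noteq> 0 \<or> q = 0" "b > 0" "q = of_int a / of_int b"
proof -
  obtain a b where ab: "quotient_of q = (a, b)" by (cases "quotient_of q")
  show ?thesis
    using that[of a b] quotient_of_div[OF ab] quotient_of_denom_pos[OF ab] by auto
qed

lemma padic_val_of_int_div:
  assumes p: "prime p" and a: "a \<noteq> 0" and b: "b \<noteq> 0"
  shows "padic_val p (of_int a / of_int b) = int (multiplicity (int p) a) - int (multiplicity (int p) b)"
proof -
  obtain c d where cd: "quotient_of (of_int a / of_int b) = (c, d)"
    by (cases "quotient_of (of_int a / of_int b)")
  have d: "d > 0" using quotient_of_denom_pos[OF cd] .
  have "(of_int a / of_int b :: rat) = of_int c / of_int d" using quotient_of_div[OF cd] .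
  then have "(of_int a :: rat) * of_int d = of_int c * of_int b" using b d
    by (simp add: field_simps)
  then have e: "a * d = c * b" by (metis of_int_eq_iff of_int_mult)
  have c: "c \<noteq> 0" using e a d by auto
  have pe: "prime_elem (int p)" using p by simp
  have "multiplicity (int p) (a * d) = multiplicity (int p) (c * b)" using e by simp
  then have "multiplicity (int p) a + multiplicity (int p) d = multiplicity (int p) c + multiplicity (int p) b"
    using prime_elem_multiplicity_mult_distrib[OF pe] a b c d by (metis less_irrefl)
  then show ?thesis unfolding padic_val_def cd by simp
qed

lemma padic_val_mult:
  assumes p: "prime p" and x: "x \<noteq> 0" and y: "y \<noteq> 0"
  shows "padic_val p (x * y) = padic_val p x + padic_val p y"
proof -
  obtain a b where ab: "a \<noteq> 0" "b > 0" "x = of_int a / of_int b" using rat_int_fraction[of x] x by metis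
  obtain c d where cd: "c \<noteq> 0" "d > 0" "y = of_int c / of_int d" using rat_int_fraction[of y] y by metis
  have xy: "x * y = of_int (a * c) / of_int (b * d)" using ab cd by simp
  have pe: "prime_elem (int p)" using p by simp
  have "padic_val p (x * y) = int (multiplicity (int p) (a * c)) - int (multiplicity (int p) (b * d))"
    unfolding xy by (rule padic_val_of_int_div[OF p]) (use ab cd in auto)
  moreover have "padic_val p x = int (multiplicity (int p) a) - int (multiplicity (int p) b)"
    unfolding ab(3) by (rule padic_val_of_int_div[OF p]) (use ab in auto)
  moreover have "padic_val p y = int (multiplicity (int p) c) - int (multiplicity (int p) d)"
    unfolding cd(3) by (rule padic_val_of_int_div[OF p]) (use cd in auto)
  ultimately show ?thesis
    using prime_elem_multiplicity_mult_distrib[OF pe, of a c] prime_elem_multiplicity_mult_distrib[OF pe, of b d]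
      ab cd by simp
qed

lemma padic_val_uminus:
  assumes p: "prime p"
  shows "padic_val p (- x) = padic_val p x"
proof (cases "x = 0")
  case False
  obtain a b where ab: "a \<noteq> 0" "b > 0" "x = of_int a / of_int b" using rat_int_fraction[of x] False by metis
  have "- x = of_int (- a) / of_int b" using ab by simp
  then have "padic_val p (- x) = int (multiplicity (int p) (- a)) - int (multiplicity (int p) b)"
    using padic_val_of_int_div[OF p, of "- a" b] ab by simp
  then show ?thesis unfolding ab(3) using padic_val_of_int_div[OF p, of a b] ab by simp
qed simp

lemma multiplicity_add_ge_min:
  assumes p: "prime (p :: int)" and "x + y \<noteq> 0"
  shows "min (multiplicity p x) (multiplicity p y) \<le> multiplicity p (x + y)"
proof -
  let ?k = "min (multiplicity p x) (multiplicity p y)"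
  have "p ^ ?k dvd x" "p ^ ?k dvd y" by (simp_all add: multiplicity_dvd')
  then have "p ^ ?k dvd x + y" by (rule dvd_add)
  moreover have "\<not> is_unit p" using p by (metis not_prime_unit)
  ultimately show ?thesis using multiplicity_geI[of "x + y" p ?k] assms(2) by blast
qed

lemma padic_val_add_ge_min:
  assumes p: "prime p" and x: "x \<noteq> 0" and y: "y \<noteq> 0" and xy: "x + y \<noteq> 0"
  shows "min (padic_val p x) (padic_val p y) \<le> padic_val p (x + y)"
proof -
  obtain a b where ab: "a \<noteq> 0" "b > 0" "x = of_int a / of_int b" using rat_int_fraction[of x] x by metis
  obtain c d where cd: "c \<noteq> 0" "d > 0" "y = of_int c / of_int d" using rat_int_fraction[of y] y by metis
  have e: "x + y = of_int (a * d + c * b) / of_int (b * d)" using ab cd by (simp add: field_simps)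
  have nz: "a * d + c * b \<noteq> 0" using e xy by (metis div_0 of_int_0)
  have pe: "prime_elem (int p)" using p by simp
  have "min (multiplicity (int p) (a * d)) (multiplicity (int p) (c * b)) \<le> multiplicity (int p) (a * d + c * b)"
    using multiplicity_add_ge_min[of "int p"] p nz by simp
  moreover have "padic_val p (x + y) = int (multiplicity (int p) (a * d + c * b)) - int (multiplicity (int p) (b * d))"
    unfolding e by (rule padic_val_of_int_div[OF p]) (use ab cd nz in auto)
  moreover have "padic_val p x = int (multiplicity (int p) a) - int (multiplicity (int p) b)"
    unfolding ab(3) by (rule padic_val_of_int_div[OF p]) (use ab in auto)
  moreover have "padic_val p y = int (multiplicity (int p) c) - int (multiplicity (int p) d)"
    unfolding cd(3) by (rule padic_val_of_int_div[OF p]) (use cd in auto)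
  ultimately show ?thesis
    using prime_elem_multiplicity_mult_distrib[OF pe] ab cd by simp
qed

definition is_absval :: "(rat \<Rightarrow> real) \<Rightarrow> bool" where
  "is_absval f \<longleftrightarrow> f 0 = 0 \<and> f 1 = 1 \<and> (\<forall>x. 0 \<le> f x) \<and> (\<forall>x. f (- x) = f x)
     \<and> (\<forall>x y. f (x + y) \<le> f x + f y) \<and> (\<forall>x y. f (x * y) = f x * f y)"

lemma rat_absv_Fin_ultrametric:
  assumes p: "prime p"
  shows "rat_absv (Fin p) (x + y) \<le> max (rat_absv (Fin p) x) (rat_absv (Fin p) y)"
proof (cases "x = 0 \<or> y = 0 \<or> x + y = 0")
  case False
  have p1: "real p > 1" using p prime_gt_1_nat by simp
  have "min (padic_val p x) (padic_val p y) \<le> padic_val p (x + y)"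
    using padic_val_add_ge_min[OF p] False by auto
  then have "- real_of_int (padic_val p (x + y))
      \<le> max (- real_of_int (padic_val p x)) (- real_of_int (padic_val p y))"
    by linarith
  then have "real p powr (- real_of_int (padic_val p (x + y)))
      \<le> real p powr max (- real_of_int (padic_val p x)) (- real_of_int (padic_val p y))"
    using p1 by (intro powr_mono) auto
  also have "\<dots> = max (real p powr (- real_of_int (padic_val p x))) (real p powr (- real_of_int (padic_val p y)))"
    using p1 by (simp add: max_def)
  finally show ?thesis using False by simp
qed (auto simp: max_def)

lemma is_absval_rat_absv: "v \<in> places \<Longrightarrow> is_absval (rat_absv v)"
proof -
  assume "v \<in> places"
  then consider "v = Arch" | p where "prime p" "v = Fin p" unfolding places_def by auto
  then show ?thesis
  proof cases
    case 1
    have "\<bar>real_of_rat (x + y)\<bar> \<le> \<bar>real_of_rat x\<bar> + \<bar>real_of_rat y\<bar>" for x y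
      by (metis abs_triangle_ineq of_rat_add)
    then show ?thesis unfolding is_absval_def using 1 by (auto simp: abs_mult of_rat_mult)
  next
    case 2
    have "padic_val p 1 = 0" unfolding padic_val_def by simp
    moreover have "rat_absv (Fin p) (x + y) \<le> rat_absv (Fin p) x + rat_absv (Fin p) y" for x y
      using rat_absv_Fin_ultrametric[OF 2(1), of x y] by (smt (verit) rat_absv.simps(2) powr_ge_zero)
    moreover have "rat_absv (Fin p) (x * y) = rat_absv (Fin p) x * rat_absv (Fin p) y" for x y
      using padic_val_mult[OF 2(1), of x y] by (auto simp: powr_add[symmetric])
    ultimately show ?thesis unfolding is_absval_def using 2 padic_val_uminus[OF 2(1)] by auto
  qed
qed

lemma finite_primes_rat_absv_gt_1: "finite {p. prime p \<and> 1 < rat_absv (Fin p) q}"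
proof (cases "q = 0")
  case False
  obtain a b where ab: "a \<noteq> 0" "b > 0" "q = of_int a / of_int b" using rat_int_fraction[of q] False by metis
  have "p \<le> nat b" if p: "prime p" and gt: "1 < rat_absv (Fin p) q" for p
  proof (rule ccontr)
    assume "\<not> p \<le> nat b"
    then have "b < int p" using ab(2) by linarith
    then have "\<not> int p dvd b" using ab(2) zdvd_imp_le by (meson not_le)
    then have "multiplicity (int p) b = 0" by (rule not_dvd_imp_multiplicity_0)
    moreover have "padic_val p q = int (multiplicity (int p) a) - int (multiplicity (int p) b)"
      unfolding ab(3) by (rule padic_val_of_int_div[OF p]) (use ab in auto)
    ultimately have "padic_val p q \<ge> 0" by simp
    moreover have "real p > 1" using p prime_gt_1_nat by simp
    ultimately have "real p powr (- real_of_int (padic_val p q)) \<le> real p powr 0"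
      by (intro powr_mono) auto
    then show False using gt False \<open>real p > 1\<close> by simp
  qed
  then have "{p. prime p \<and> 1 < rat_absv (Fin p) q} \<subseteq> {..nat b}" by auto
  then show ?thesis by (rule finite_subset) simp
qed simp

section \<open>The completions \<open>\<rat>\<^sub>v\<close>\<close>

context
  fixes v :: place
  assumes av: "is_absval (rat_absv v)"
begin

private abbreviation "A \<equiv> rat_absv v"

lemma absval_0: "A 0 = 0" and absval_1: "A 1 = 1" and absval_nonneg: "0 \<le> A x" and absval_minus: "A (-x) = A x"
  and absval_triangle: "A (x + y) \<le> A x + A y" and absval_mult: "A (x * y) = A x * A y"
  using av unfolding is_absval_def by auto

lemma absval_diff_commute: "A (x - y) = A (y - x)"
  using absval_minus[of "x - y"] by simp

lemma vnull_zero: "vnull v (\<lambda>k. 0)"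
  unfolding vnull_def using absval_0 by auto

lemma vnull_add: "vnull v X \<Longrightarrow> vnull v Y \<Longrightarrow> vnull v (\<lambda>k. X k + Y k)"
  unfolding vnull_def
proof (intro allI impI)
  fix e :: real assume X: "\<forall>e>0. \<exists>M. \<forall>m\<ge>M. A (X m) < e" and Y: "\<forall>e>0. \<exists>M. \<forall>m\<ge>M. A (Y m) < e"
    and e: "0 < e"
  obtain M1 where M1: "\<forall>m\<ge>M1. A (X m) < e/2" using X e by (meson half_gt_zero)
  obtain M2 where M2: "\<forall>m\<ge>M2. A (Y m) < e/2" using Y e by (meson half_gt_zero)
  show "\<exists>M. \<forall>m\<ge>M. A (X m + Y m) < e"
  proof (intro exI allI impI)
    fix m assume "max M1 M2 \<le> m"
    then have "A (X m) < e/2" "A (Y m) < e/2" using M1 M2 by auto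
    then show "A (X m + Y m) < e" using absval_triangle[of "X m" "Y m"] by linarith
  qed
qed

lemma vnull_diff_commute: "vnull v (\<lambda>k. X k - Y k) \<Longrightarrow> vnull v (\<lambda>k. Y k - X k)"
  unfolding vnull_def using absval_diff_commute by simp

lemma vnull_trans: "vnull v (\<lambda>k. X k - Y k) \<Longrightarrow> vnull v (\<lambda>k. Y k - Z k) \<Longrightarrow> vnull v (\<lambda>k. X k - Z k)"
  using vnull_add[of "\<lambda>k. X k - Y k" "\<lambda>k. Y k - Z k"] by simp

lemma vcauchy_bounded:
  assumes "vcauchy v X" shows "\<exists>B>0. \<forall>k. A (X k) \<le> B"
proof -
  obtain M where M: "\<forall>m\<ge>M. \<forall>k\<ge>M. A (X m - X k) < 1"
    using assms unfolding vcauchy_def by (meson zero_less_one)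
  define B where "B = Max ((\<lambda>k. A (X k)) ` {..M}) + 1"
  have "A (X k) \<le> B" for k
  proof (cases "k \<le> M")
    case True
    then have "A (X k) \<le> Max ((\<lambda>k. A (X k)) ` {..M})" by (intro Max_ge) auto
    then show ?thesis unfolding B_def by simp
  next
    case False
    have "A (X k) = A ((X k - X M) + X M)" by simp
    also have "\<dots> \<le> A (X k - X M) + A (X M)" by (rule absval_triangle)
    also have "A (X k - X M) < 1" using M False by auto
    also have "A (X M) \<le> Max ((\<lambda>k. A (X k)) ` {..M})" by (intro Max_ge) auto
    finally show ?thesis unfolding B_def by simp
  qed
  moreover have "B > 0"
  proof -
    have "A (X 0) \<le> Max ((\<lambda>k. A (X k)) ` {..M})" by (intro Max_ge) auto
    then show ?thesis using absval_nonneg[of "X 0"] unfolding B_def by linarith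
  qed
  ultimately show ?thesis by blast
qed

lemma vnull_mult_bounded:
  assumes X: "vnull v X" and B: "B > 0" "\<forall>k. A (Y k) \<le> B"
  shows "vnull v (\<lambda>k. X k * Y k)"
  unfolding vnull_def
proof (intro allI impI)
  fix e :: real assume e: "e > 0"
  obtain M where M: "\<forall>m\<ge>M. A (X m) < e / B" using X e B unfolding vnull_def by (meson divide_pos_pos)
  show "\<exists>M. \<forall>m\<ge>M. A (X m * Y m) < e"
  proof (intro exI allI impI)
    fix m assume "M \<le> m"
    then have "A (X m) < e / B" using M by auto
    then have "A (X m) * A (Y m) \<le> e / B * B"
      using B absval_nonneg[of "Y m"] absval_nonneg[of "X m"] by (intro mult_mono) auto
    moreover have "A (X m) * A (Y m) < e / B * B \<or> A (Y m) = 0"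
    proof (cases "A (Y m) = 0")
      case False
      then have "A (Y m) > 0" using absval_nonneg[of "Y m"] by simp
      then have "A (X m) * A (Y m) < e / B * A (Y m)" using \<open>A (X m) < e / B\<close> by (intro mult_strict_right_mono) auto
      also have "\<dots> \<le> e / B * B" using B e by (intro mult_left_mono) auto
      finally show ?thesis by simp
    qed simp
    ultimately show "A (X m * Y m) < e" using B e by (auto simp: absval_mult)
  qed
qed

lemma vcauchy_const: "vcauchy v (\<lambda>k. c)"
  unfolding vcauchy_def using absval_0 by auto

lemma vcauchy_add: "vcauchy v X \<Longrightarrow> vcauchy v Y \<Longrightarrow> vcauchy v (\<lambda>k. X k + Y k)"
  unfolding vcauchy_def
proof (intro allI impI)
  fix e :: real assume X: "\<forall>e>0. \<exists>M. \<forall>m\<ge>M. \<forall>k\<ge>M. A (X m - X k) < e"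
    and Y: "\<forall>e>0. \<exists>M. \<forall>m\<ge>M. \<forall>k\<ge>M. A (Y m - Y k) < e" and e: "0 < e"
  obtain M1 where M1: "\<forall>m\<ge>M1. \<forall>k\<ge>M1. A (X m - X k) < e/2" using X e by (meson half_gt_zero)
  obtain M2 where M2: "\<forall>m\<ge>M2. \<forall>k\<ge>M2. A (Y m - Y k) < e/2" using Y e by (meson half_gt_zero)
  show "\<exists>M. \<forall>m\<ge>M. \<forall>k\<ge>M. A (X m + Y m - (X k + Y k)) < e"
  proof (intro exI allI impI)
    fix m k assume "max M1 M2 \<le> m" "max M1 M2 \<le> k"
    then have "A (X m - X k) < e/2" "A (Y m - Y k) < e/2" using M1 M2 by auto
    moreover have eq: "X m + Y m - (X k + Y k) = (X m - X k) + (Y m - Y k)" by simp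
    ultimately show "A (X m + Y m - (X k + Y k)) < e" unfolding eq using absval_triangle[of "X m - X k" "Y m - Y k"] by linarith
  qed
qed

lemma vcauchy_neg: "vcauchy v X \<Longrightarrow> vcauchy v (\<lambda>k. - X k)"
  unfolding vcauchy_def using absval_diff_commute by simp

lemma vcauchy_mult:
  assumes X: "vcauchy v X" and Y: "vcauchy v Y" shows "vcauchy v (\<lambda>k. X k * Y k)"
  unfolding vcauchy_def
proof (intro allI impI)
  fix e :: real assume e: "0 < e"
  obtain BX where BX: "BX > 0" "\<forall>k. A (X k) \<le> BX" using vcauchy_bounded[OF X] by blast
  obtain BY where BY: "BY > 0" "\<forall>k. A (Y k) \<le> BY" using vcauchy_bounded[OF Y] by blast
  have e1: "e / (2 * BX) > 0" and e2: "e / (2 * BY) > 0" using e BX BY by auto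
  obtain M1 where M1: "\<forall>m\<ge>M1. \<forall>k\<ge>M1. A (Y m - Y k) < e / (2 * BX)" using Y e1 unfolding vcauchy_def by blast
  obtain M2 where M2: "\<forall>m\<ge>M2. \<forall>k\<ge>M2. A (X m - X k) < e / (2 * BY)" using X e2 unfolding vcauchy_def by blast
  show "\<exists>M. \<forall>m\<ge>M. \<forall>k\<ge>M. A (X m * Y m - X k * Y k) < e"
  proof (intro exI allI impI)
    fix m k assume "max M1 M2 \<le> m" "max M1 M2 \<le> k"
    then have a: "A (Y m - Y k) < e / (2 * BX)" "A (X m - X k) < e / (2 * BY)" using M1 M2 by auto
    have eq: "X m * Y m - X k * Y k = X m * (Y m - Y k) + (X m - X k) * Y k" by (simp add: algebra_simps)
    have "A (X m * (Y m - Y k)) \<le> BX * (e / (2 * BX))"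
      unfolding absval_mult using a BX absval_nonneg e by (intro mult_mono) auto
    moreover have "A ((X m - X k) * Y k) \<le> (e / (2 * BY)) * BY"
      unfolding absval_mult using a BY absval_nonneg e by (intro mult_mono) auto
    moreover have "A (X m * (Y m - Y k)) < BX * (e / (2 * BX)) \<or> A ((X m - X k) * Y k) < (e / (2 * BY)) * BY"
    proof (cases "A (Y m - Y k) = 0")
      case True then show ?thesis using absval_mult BX e by simp
    next
      case False
      then have "A (Y m - Y k) > 0" using absval_nonneg by (simp add: order_less_le)
      have "A (X m * (Y m - Y k)) = A (X m) * A (Y m - Y k)" by (rule absval_mult)
      also have "\<dots> \<le> BX * A (Y m - Y k)" using BX absval_nonneg by (intro mult_right_mono) auto
      also have "\<dots> < BX * (e / (2 * BX))" using a BX by (intro mult_strict_left_mono) auto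
      finally show ?thesis by simp
    qed
    moreover have "BX * (e / (2 * BX)) = e/2" "(e / (2 * BY)) * BY = e/2" using BX BY by auto
    ultimately show "A (X m * Y m - X k * Y k) < e"
      unfolding eq using absval_triangle[of "X m * (Y m - Y k)" "(X m - X k) * Y k"] by linarith
  qed
qed

lemma vclass_self: "vcauchy v X \<Longrightarrow> X \<in> vclass v X"
  unfolding vclass_def using vnull_zero by simp

lemma vclass_eqI:
  assumes "vcauchy v X" "vcauchy v Y" and n: "vnull v (\<lambda>k. X k - Y k)"
  shows "vclass v X = vclass v Y"
proof -
  have n': "vnull v (\<lambda>k. Y k - X k)" using n by (rule vnull_diff_commute)
  have 1: "vnull v (\<lambda>k. Y k - Z k)" if "vnull v (\<lambda>k. X k - Z k)" for Z
    using vnull_trans[of Y X Z, OF n' that] .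
  have 2: "vnull v (\<lambda>k. X k - Z k)" if "vnull v (\<lambda>k. Y k - Z k)" for Z
    using vnull_trans[of X Y Z, OF n that] .
  show ?thesis unfolding vclass_def using 1 2 by auto
qed

lemma vclass_mem_eq: "Y \<in> vclass v X \<Longrightarrow> vcauchy v X \<Longrightarrow> vclass v Y = vclass v X"
  by (rule vclass_eqI) (auto simp: vclass_def intro: vnull_diff_commute)

definition vclass_rep :: "(nat \<Rightarrow> rat) set \<Rightarrow> nat \<Rightarrow> rat" where
  "vclass_rep a = (SOME X. X \<in> a)"

lemma vclass_rep_props:
  assumes "vcauchy v X"
  shows "vclass_rep (vclass v X) \<in> vclass v X" "vcauchy v (vclass_rep (vclass v X))"
    "vnull v (\<lambda>k. X k - vclass_rep (vclass v X) k)"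
proof -
  show 1: "vclass_rep (vclass v X) \<in> vclass v X" unfolding vclass_rep_def using vclass_self[OF assms] by (rule someI[where P="\<lambda>Y. Y \<in> vclass v X"])
  then show "vcauchy v (vclass_rep (vclass v X))" "vnull v (\<lambda>k. X k - vclass_rep (vclass v X) k)"
    unfolding vclass_def by auto
qed

lemma Qv_add_vclass:
  assumes X: "vcauchy v X" and Y: "vcauchy v Y"
  shows "add (Qv v) (vclass v X) (vclass v Y) = vclass v (\<lambda>k. X k + Y k)"
proof -
  let ?X = "vclass_rep (vclass v X)" and ?Y = "vclass_rep (vclass v Y)"
  have "add (Qv v) (vclass v X) (vclass v Y) = vclass v (\<lambda>k. ?X k + ?Y k)"
    unfolding Qv_def vclass_rep_def by simp
  also have "\<dots> = vclass v (\<lambda>k. X k + Y k)"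
  proof (rule vclass_eqI)
    show "vcauchy v (\<lambda>k. ?X k + ?Y k)" using vclass_rep_props(2)[OF X] vclass_rep_props(2)[OF Y] by (rule vcauchy_add)
    show "vcauchy v (\<lambda>k. X k + Y k)" using X Y by (rule vcauchy_add)
    have 1: "vnull v (\<lambda>k. ?X k - X k)" using vclass_rep_props(3)[OF X] by (rule vnull_diff_commute)
    have 2: "vnull v (\<lambda>k. ?Y k - Y k)" using vclass_rep_props(3)[OF Y] by (rule vnull_diff_commute)
    have "vnull v (\<lambda>k. (?X k - X k) + (?Y k - Y k))" using 1 2 by (rule vnull_add)
    moreover have "(\<lambda>k. (?X k - X k) + (?Y k - Y k)) = (\<lambda>k. ?X k + ?Y k - (X k + Y k))"
      by (rule ext) simp
    ultimately show "vnull v (\<lambda>k. ?X k + ?Y k - (X k + Y k))" by simp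
  qed
  finally show ?thesis .
qed

lemma Qv_mult_vclass:
  assumes X: "vcauchy v X" and Y: "vcauchy v Y"
  shows "mult (Qv v) (vclass v X) (vclass v Y) = vclass v (\<lambda>k. X k * Y k)"
proof -
  let ?X = "vclass_rep (vclass v X)" and ?Y = "vclass_rep (vclass v Y)"
  have "mult (Qv v) (vclass v X) (vclass v Y) = vclass v (\<lambda>k. ?X k * ?Y k)"
    unfolding Qv_def vclass_rep_def by simp
  also have "\<dots> = vclass v (\<lambda>k. X k * Y k)"
  proof (rule vclass_eqI)
    show "vcauchy v (\<lambda>k. ?X k * ?Y k)" using vclass_rep_props(2)[OF X] vclass_rep_props(2)[OF Y] by (rule vcauchy_mult)
    show "vcauchy v (\<lambda>k. X k * Y k)" using X Y by (rule vcauchy_mult)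
    obtain BY where BY: "BY > 0" "\<forall>k. A (?Y k) \<le> BY" using vcauchy_bounded[OF vclass_rep_props(2)[OF Y]] by blast
    obtain BX where BX: "BX > 0" "\<forall>k. A (X k) \<le> BX" using vcauchy_bounded[OF X] by blast
    have 1: "vnull v (\<lambda>k. (?X k - X k) * ?Y k)"
      by (rule vnull_mult_bounded[OF vnull_diff_commute[OF vclass_rep_props(3)[OF X]] BY])
    have 2: "vnull v (\<lambda>k. (?Y k - Y k) * X k)"
      by (rule vnull_mult_bounded[OF vnull_diff_commute[OF vclass_rep_props(3)[OF Y]] BX])
    have "vnull v (\<lambda>k. (?X k - X k) * ?Y k + (?Y k - Y k) * X k)" using 1 2 by (rule vnull_add)
    moreover have "(\<lambda>k. (?X k - X k) * ?Y k + (?Y k - Y k) * X k) = (\<lambda>k. ?X k * ?Y k - X k * Y k)"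
      by (rule ext) (simp add: algebra_simps)
    ultimately show "vnull v (\<lambda>k. ?X k * ?Y k - X k * Y k)" by simp
  qed
  finally show ?thesis .
qed

lemma Qv_carrier: "carrier (Qv v) = vclass v ` {X. vcauchy v X}"
  unfolding Qv_def by simp

lemma Qv_carrierE:
  assumes "a \<in> carrier (Qv v)" obtains X where "vcauchy v X" "a = vclass v X"
  using assms unfolding Qv_carrier by auto

lemma vclass_in_Qv: "vcauchy v X \<Longrightarrow> vclass v X \<in> carrier (Qv v)"
  unfolding Qv_carrier by auto

lemma Qv_zero: "zero (Qv v) = vclass v (\<lambda>k. 0)" and Qv_one: "one (Qv v) = vclass v (\<lambda>k. 1)"
  unfolding Qv_def by auto

lemma cring_Qv: "cring (Qv v)"
proof (rule cringI)
  show "abelian_group (Qv v)"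
  proof (rule abelian_groupI)
    fix x y z assume x: "x \<in> carrier (Qv v)" and y: "y \<in> carrier (Qv v)" and z: "z \<in> carrier (Qv v)"
    obtain X where X: "vcauchy v X" "x = vclass v X" using x by (rule Qv_carrierE)
    obtain Y where Y: "vcauchy v Y" "y = vclass v Y" using y by (rule Qv_carrierE)
    obtain Z where Z: "vcauchy v Z" "z = vclass v Z" using z by (rule Qv_carrierE)
    show "x \<oplus>\<^bsub>Qv v\<^esub> y \<in> carrier (Qv v)" using X Y by (simp add: Qv_add_vclass vclass_in_Qv vcauchy_add)
    show "x \<oplus>\<^bsub>Qv v\<^esub> y \<oplus>\<^bsub>Qv v\<^esub> z = x \<oplus>\<^bsub>Qv v\<^esub> (y \<oplus>\<^bsub>Qv v\<^esub> z)"
      using X Y Z by (simp add: Qv_add_vclass vcauchy_add add.assoc)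
    show "x \<oplus>\<^bsub>Qv v\<^esub> y = y \<oplus>\<^bsub>Qv v\<^esub> x"
      using X Y by (simp add: Qv_add_vclass add.commute)
    show "\<zero>\<^bsub>Qv v\<^esub> \<oplus>\<^bsub>Qv v\<^esub> x = x"
      using X by (simp add: Qv_zero Qv_add_vclass vcauchy_const)
    show "\<exists>y\<in>carrier (Qv v). y \<oplus>\<^bsub>Qv v\<^esub> x = \<zero>\<^bsub>Qv v\<^esub>"
      using X by (intro bexI[of _ "vclass v (\<lambda>k. - X k)"])
        (simp_all add: Qv_zero Qv_add_vclass vcauchy_neg vclass_in_Qv)
  next
    show "\<zero>\<^bsub>Qv v\<^esub> \<in> carrier (Qv v)" by (simp add: Qv_zero vclass_in_Qv vcauchy_const)
  qed
  show "comm_monoid (Qv v)"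
  proof (rule comm_monoidI)
    fix x y z assume x: "x \<in> carrier (Qv v)" and y: "y \<in> carrier (Qv v)" and z: "z \<in> carrier (Qv v)"
    obtain X where X: "vcauchy v X" "x = vclass v X" using x by (rule Qv_carrierE)
    obtain Y where Y: "vcauchy v Y" "y = vclass v Y" using y by (rule Qv_carrierE)
    obtain Z where Z: "vcauchy v Z" "z = vclass v Z" using z by (rule Qv_carrierE)
    show "x \<otimes>\<^bsub>Qv v\<^esub> y \<in> carrier (Qv v)" using X Y by (simp add: Qv_mult_vclass vclass_in_Qv vcauchy_mult)
    show "x \<otimes>\<^bsub>Qv v\<^esub> y \<otimes>\<^bsub>Qv v\<^esub> z = x \<otimes>\<^bsub>Qv v\<^esub> (y \<otimes>\<^bsub>Qv v\<^esub> z)"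
      using X Y Z by (simp add: Qv_mult_vclass vcauchy_mult mult.assoc)
    show "x \<otimes>\<^bsub>Qv v\<^esub> y = y \<otimes>\<^bsub>Qv v\<^esub> x"
      using X Y by (simp add: Qv_mult_vclass mult.commute)
    show "\<one>\<^bsub>Qv v\<^esub> \<otimes>\<^bsub>Qv v\<^esub> x = x"
      using X by (simp add: Qv_one Qv_mult_vclass vcauchy_const)
  next
    show "\<one>\<^bsub>Qv v\<^esub> \<in> carrier (Qv v)" by (simp add: Qv_one vclass_in_Qv vcauchy_const)
  qed
  fix x y z assume x: "x \<in> carrier (Qv v)" and y: "y \<in> carrier (Qv v)" and z: "z \<in> carrier (Qv v)"
  obtain X where X: "vcauchy v X" "x = vclass v X" using x by (rule Qv_carrierE)
  obtain Y where Y: "vcauchy v Y" "y = vclass v Y" using y by (rule Qv_carrierE)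
  obtain Z where Z: "vcauchy v Z" "z = vclass v Z" using z by (rule Qv_carrierE)
  show "(x \<oplus>\<^bsub>Qv v\<^esub> y) \<otimes>\<^bsub>Qv v\<^esub> z = x \<otimes>\<^bsub>Qv v\<^esub> z \<oplus>\<^bsub>Qv v\<^esub> y \<otimes>\<^bsub>Qv v\<^esub> z"
    using X Y Z by (simp add: Qv_mult_vclass Qv_add_vclass vcauchy_mult vcauchy_add distrib_right)
qed

lemma Qv_uminus_vclass: "vcauchy v X \<Longrightarrow> a_inv (Qv v) (vclass v X) = vclass v (\<lambda>k. - X k)"
proof -
  assume X: "vcauchy v X"
  interpret Q: cring "Qv v" by (rule cring_Qv)
  show ?thesis
    by (rule Q.minus_equality) (simp_all add: X vclass_in_Qv vcauchy_neg Qv_add_vclass Qv_zero)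
qed

lemma vrat_hom: "vrat v \<in> ring_hom ratR (Qv v)"
  by (rule ring_hom_memI)
     (simp_all add: vrat_def ratR_def vclass_in_Qv vcauchy_const Qv_add_vclass Qv_mult_vclass Qv_one)

end

lemma vrat_zero: "vrat v 0 = \<zero>\<^bsub>Qv v\<^esub>" and vrat_one: "vrat v 1 = \<one>\<^bsub>Qv v\<^esub>"
  unfolding vrat_def Qv_def by simp_all

section \<open>Laurent series over a commutative ring\<close>

context cring begin

lemma finsum_swap:
  assumes A: "finite A" and B: "finite B" and F: "\<And>i j. i \<in> A \<Longrightarrow> j \<in> B \<Longrightarrow> F i j \<in> carrier R"
  shows "(\<Oplus>i\<in>A. \<Oplus>j\<in>B. F i j) = (\<Oplus>j\<in>B. \<Oplus>i\<in>A. F i j)"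
  using A F
proof (induction A rule: finite_induct)
  case empty then show ?case by (simp add: finsum_zero)
next
  case (insert a A)
  have "(\<Oplus>i\<in>insert a A. \<Oplus>j\<in>B. F i j) = (\<Oplus>j\<in>B. F a j) \<oplus> (\<Oplus>i\<in>A. \<Oplus>j\<in>B. F i j)"
    using insert by (intro finsum_insert) (auto intro!: finsum_closed)
  also have "(\<Oplus>i\<in>A. \<Oplus>j\<in>B. F i j) = (\<Oplus>j\<in>B. \<Oplus>i\<in>A. F i j)" using insert by auto
  also have "(\<Oplus>j\<in>B. F a j) \<oplus> (\<Oplus>j\<in>B. \<Oplus>i\<in>A. F i j) = (\<Oplus>j\<in>B. F a j \<oplus> (\<Oplus>i\<in>A. F i j))"
    using insert by (intro finsum_addf[symmetric]) (auto intro!: finsum_closed)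
  also have "\<dots> = (\<Oplus>j\<in>B. \<Oplus>i\<in>insert a A. F i j)"
    using insert by (intro finsum_cong') (auto intro!: finsum_insert[symmetric])
  finally show ?case .
qed

lemma finsum_eq_support:
  assumes "finite A" "S \<subseteq> A" "\<And>i. i \<in> A - S \<Longrightarrow> F i = \<zero>" "\<And>i. i \<in> A \<Longrightarrow> F i \<in> carrier R"
  shows "finsum R F S = finsum R F A"
  by (rule add.finprod_mono_neutral_cong_left) (use assms in auto)

lemma ls_carrier: "carrier (ls_ring R) = {f. (\<forall>i. f i \<in> carrier R) \<and> (\<exists>M. \<forall>i<M. f i = \<zero>)}"
  unfolding ls_ring_def by simp

lemma ls_mult: "f \<otimes>\<^bsub>ls_ring R\<^esub> g = (\<lambda>k. \<Oplus>i\<in>{i. f i \<noteq> \<zero> \<and> g (k - i) \<noteq> \<zero>}. f i \<otimes> g (k - i))"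
  unfolding ls_ring_def by simp

lemma ls_add: "f \<oplus>\<^bsub>ls_ring R\<^esub> g = (\<lambda>i. f i \<oplus> g i)"
  and ls_zero: "\<zero>\<^bsub>ls_ring R\<^esub> = (\<lambda>i. \<zero>)"
  and ls_one: "\<one>\<^bsub>ls_ring R\<^esub> = (\<lambda>i. if i = 0 then \<one> else \<zero>)"
  unfolding ls_ring_def by simp_all

lemma ls_coeff_closed: "f \<in> carrier (ls_ring R) \<Longrightarrow> f i \<in> carrier R"
  unfolding ls_carrier by auto

lemma ls_bounded_below: "f \<in> carrier (ls_ring R) \<Longrightarrow> \<exists>M. \<forall>i<M. f i = \<zero>"
  unfolding ls_carrier by auto

lemma ls_carrierI: "(\<And>i. f i \<in> carrier R) \<Longrightarrow> (\<And>i. i < M \<Longrightarrow> f i = \<zero>) \<Longrightarrow> f \<in> carrier (ls_ring R)"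
  unfolding ls_carrier by auto

lemma ls_mult_coeff:
  assumes f: "f \<in> carrier (ls_ring R)" and g: "g \<in> carrier (ls_ring R)" and A: "finite A"
    and z: "\<And>i. i \<notin> A \<Longrightarrow> f i = \<zero> \<or> g (k - i) = \<zero>"
  shows "(f \<otimes>\<^bsub>ls_ring R\<^esub> g) k = (\<Oplus>i\<in>A. f i \<otimes> g (k - i))"
  unfolding ls_mult
proof (rule finsum_eq_support[OF A])
  show "{i. f i \<noteq> \<zero> \<and> g (k - i) \<noteq> \<zero>} \<subseteq> A" using z by auto
  show "\<And>i. i \<in> A - {i. f i \<noteq> \<zero> \<and> g (k - i) \<noteq> \<zero>} \<Longrightarrow> f i \<otimes> g (k - i) = \<zero>"
    using ls_coeff_closed[OF f] ls_coeff_closed[OF g] by auto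
  show "\<And>i. i \<in> A \<Longrightarrow> f i \<otimes> g (k - i) \<in> carrier R" using ls_coeff_closed[OF f] ls_coeff_closed[OF g] by auto
qed

lemma ls_mult_coeff_below:
  assumes f: "f \<in> carrier (ls_ring R)" and g: "g \<in> carrier (ls_ring R)"
    and Mf: "\<forall>i<Mf. f i = \<zero>" and Mg: "\<forall>i<Mg. g i = \<zero>" and k: "k < Mf + Mg"
  shows "(f \<otimes>\<^bsub>ls_ring R\<^esub> g) k = \<zero>"
proof -
  have "(f \<otimes>\<^bsub>ls_ring R\<^esub> g) k = (\<Oplus>i\<in>{}. f i \<otimes> g (k - i))"
    using Mf Mg k by (intro ls_mult_coeff f g) (auto, smt (verit))
  then show ?thesis by simp
qed

lemma ls_mult_closed:
  assumes f: "f \<in> carrier (ls_ring R)" and g: "g \<in> carrier (ls_ring R)"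
  shows "f \<otimes>\<^bsub>ls_ring R\<^esub> g \<in> carrier (ls_ring R)"
proof -
  obtain Mf where Mf: "\<forall>i<Mf. f i = \<zero>" using ls_bounded_below[OF f] by blast
  obtain Mg where Mg: "\<forall>i<Mg. g i = \<zero>" using ls_bounded_below[OF g] by blast
  show ?thesis
  proof (rule ls_carrierI)
    show "(f \<otimes>\<^bsub>ls_ring R\<^esub> g) i \<in> carrier R" for i
      unfolding ls_mult using ls_coeff_closed[OF f] ls_coeff_closed[OF g] by (auto intro!: finsum_closed)
    show "i < Mf + Mg \<Longrightarrow> (f \<otimes>\<^bsub>ls_ring R\<^esub> g) i = \<zero>" for i
      by (rule ls_mult_coeff_below[OF f g Mf Mg])
  qed
qed

lemma ls_add_closed:
  assumes f: "f \<in> carrier (ls_ring R)" and g: "g \<in> carrier (ls_ring R)"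
  shows "f \<oplus>\<^bsub>ls_ring R\<^esub> g \<in> carrier (ls_ring R)"
proof -
  obtain Mf where Mf: "\<forall>i<Mf. f i = \<zero>" using ls_bounded_below[OF f] by blast
  obtain Mg where Mg: "\<forall>i<Mg. g i = \<zero>" using ls_bounded_below[OF g] by blast
  show ?thesis unfolding ls_add
    by (rule ls_carrierI[of _ "min Mf Mg"]) (use Mf Mg ls_coeff_closed[OF f] ls_coeff_closed[OF g] in auto)
qed

lemma ls_mult_coeff_shifted:
  assumes g: "g \<in> carrier (ls_ring R)" and h: "h \<in> carrier (ls_ring R)" and J: "finite J"
    and z: "\<And>j. j \<notin> J \<Longrightarrow> g (j - i) = \<zero> \<or> h (k - j) = \<zero>"
  shows "(g \<otimes>\<^bsub>ls_ring R\<^esub> h) (k - i) = (\<Oplus>j\<in>J. g (j - i) \<otimes> h (k - j))"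
proof -
  have inj: "inj_on (\<lambda>j. j - i) J" by (auto simp: inj_on_def)
  have "(g \<otimes>\<^bsub>ls_ring R\<^esub> h) (k - i) = (\<Oplus>l\<in>(\<lambda>j. j - i) ` J. g l \<otimes> h (k - i - l))"
  proof (rule ls_mult_coeff[OF g h])
    show "finite ((\<lambda>j. j - i) ` J)" using J by simp
    fix l assume "l \<notin> (\<lambda>j. j - i) ` J"
    then have "l + i \<notin> J" by (metis add_diff_cancel_right' image_eqI)
    then show "g l = \<zero> \<or> h (k - i - l) = \<zero>" using z[of "l + i"] by (simp add: algebra_simps)
  qed
  also have "\<dots> = (\<Oplus>j\<in>J. g (j - i) \<otimes> h (k - i - (j - i)))"
    by (rule finsum_reindex) (use ls_coeff_closed[OF g] ls_coeff_closed[OF h] inj in auto)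
  finally show ?thesis by simp
qed

lemma ls_mult_mult_coeff_left:
  assumes f: "f \<in> carrier (ls_ring R)" and g: "g \<in> carrier (ls_ring R)" and h: "h \<in> carrier (ls_ring R)"
    and Mf: "\<forall>i<Mf. f i = \<zero>" and Mg: "\<forall>i<Mg. g i = \<zero>" and Mh: "\<forall>i<Mh. h i = \<zero>"
  shows "((f \<otimes>\<^bsub>ls_ring R\<^esub> g) \<otimes>\<^bsub>ls_ring R\<^esub> h) k
    = (\<Oplus>j\<in>{Mf + Mg..k - Mh}. \<Oplus>i\<in>{Mf..k - Mg - Mh}. f i \<otimes> g (j - i) \<otimes> h (k - j))"
proof -
  let ?I = "{Mf..k - Mg - Mh}" and ?J = "{Mf + Mg..k - Mh}"
  have fg: "f \<otimes>\<^bsub>ls_ring R\<^esub> g \<in> carrier (ls_ring R)" by (rule ls_mult_closed[OF f g])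
  have fR: "f i \<in> carrier R" and gR: "g i \<in> carrier R" and hR: "h i \<in> carrier R" for i
    using ls_coeff_closed f g h by auto
  have "((f \<otimes>\<^bsub>ls_ring R\<^esub> g) \<otimes>\<^bsub>ls_ring R\<^esub> h) k = (\<Oplus>j\<in>?J. (f \<otimes>\<^bsub>ls_ring R\<^esub> g) j \<otimes> h (k - j))"
  proof (rule ls_mult_coeff[OF fg h finite_atLeastAtMost])
    fix j assume "j \<notin> ?J"
    then have "j < Mf + Mg \<or> k - j < Mh" by auto
    then show "(f \<otimes>\<^bsub>ls_ring R\<^esub> g) j = \<zero> \<or> h (k - j) = \<zero>"
      using ls_mult_coeff_below[OF f g Mf Mg] Mh by auto
  qed
  also have "\<dots> = (\<Oplus>j\<in>?J. (\<Oplus>i\<in>?I. f i \<otimes> g (j - i)) \<otimes> h (k - j))"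
  proof (rule finsum_cong')
    fix j assume j: "j \<in> ?J"
    have "(f \<otimes>\<^bsub>ls_ring R\<^esub> g) j = (\<Oplus>i\<in>?I. f i \<otimes> g (j - i))"
    proof (rule ls_mult_coeff[OF f g finite_atLeastAtMost])
      fix i assume "i \<notin> ?I"
      then have "i < Mf \<or> j - i < Mg" using j by auto
      then show "f i = \<zero> \<or> g (j - i) = \<zero>" using Mf Mg by auto
    qed
    then show "(f \<otimes>\<^bsub>ls_ring R\<^esub> g) j \<otimes> h (k - j) = (\<Oplus>i\<in>?I. f i \<otimes> g (j - i)) \<otimes> h (k - j)" by simp
  qed (use fR gR hR in \<open>auto intro!: finsum_closed\<close>)
  also have "\<dots> = (\<Oplus>j\<in>?J. \<Oplus>i\<in>?I. f i \<otimes> g (j - i) \<otimes> h (k - j))"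
    by (rule finsum_cong') (use fR gR hR in \<open>auto intro!: finsum_closed finsum_ldistr\<close>)
  finally show ?thesis .
qed

lemma ls_mult_mult_coeff_right:
  assumes f: "f \<in> carrier (ls_ring R)" and g: "g \<in> carrier (ls_ring R)" and h: "h \<in> carrier (ls_ring R)"
    and Mf: "\<forall>i<Mf. f i = \<zero>" and Mg: "\<forall>i<Mg. g i = \<zero>" and Mh: "\<forall>i<Mh. h i = \<zero>"
  shows "(f \<otimes>\<^bsub>ls_ring R\<^esub> (g \<otimes>\<^bsub>ls_ring R\<^esub> h)) k
    = (\<Oplus>i\<in>{Mf..k - Mg - Mh}. \<Oplus>j\<in>{Mf + Mg..k - Mh}. f i \<otimes> (g (j - i) \<otimes> h (k - j)))"
proof -
  let ?I = "{Mf..k - Mg - Mh}" and ?J = "{Mf + Mg..k - Mh}"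
  have gh: "g \<otimes>\<^bsub>ls_ring R\<^esub> h \<in> carrier (ls_ring R)" by (rule ls_mult_closed[OF g h])
  have fR: "f i \<in> carrier R" and gR: "g i \<in> carrier R" and hR: "h i \<in> carrier R" for i
    using ls_coeff_closed f g h by auto
  have "(f \<otimes>\<^bsub>ls_ring R\<^esub> (g \<otimes>\<^bsub>ls_ring R\<^esub> h)) k = (\<Oplus>i\<in>?I. f i \<otimes> (g \<otimes>\<^bsub>ls_ring R\<^esub> h) (k - i))"
  proof (rule ls_mult_coeff[OF f gh finite_atLeastAtMost])
    fix i assume "i \<notin> ?I"
    then have "i < Mf \<or> k - i < Mg + Mh" by auto
    then show "f i = \<zero> \<or> (g \<otimes>\<^bsub>ls_ring R\<^esub> h) (k - i) = \<zero>"
      using Mf ls_mult_coeff_below[OF g h Mg Mh] by auto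
  qed
  also have "\<dots> = (\<Oplus>i\<in>?I. f i \<otimes> (\<Oplus>j\<in>?J. g (j - i) \<otimes> h (k - j)))"
  proof (rule finsum_cong')
    fix i assume i: "i \<in> ?I"
    have "(g \<otimes>\<^bsub>ls_ring R\<^esub> h) (k - i) = (\<Oplus>j\<in>?J. g (j - i) \<otimes> h (k - j))"
    proof (rule ls_mult_coeff_shifted[OF g h finite_atLeastAtMost])
      fix j assume "j \<notin> ?J"
      then have "j - i < Mg \<or> k - j < Mh" using i by auto
      then show "g (j - i) = \<zero> \<or> h (k - j) = \<zero>" using Mg Mh by auto
    qed
    then show "f i \<otimes> (g \<otimes>\<^bsub>ls_ring R\<^esub> h) (k - i) = f i \<otimes> (\<Oplus>j\<in>?J. g (j - i) \<otimes> h (k - j))" by simp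
  qed (use fR gR hR ls_coeff_closed[OF gh] in \<open>auto intro!: finsum_closed\<close>)
  also have "\<dots> = (\<Oplus>i\<in>?I. \<Oplus>j\<in>?J. f i \<otimes> (g (j - i) \<otimes> h (k - j)))"
    by (rule finsum_cong') (use fR gR hR in \<open>auto intro!: finsum_closed finsum_rdistr\<close>)
  finally show ?thesis .
qed

lemma ls_mult_assoc:
  assumes f: "f \<in> carrier (ls_ring R)" and g: "g \<in> carrier (ls_ring R)" and h: "h \<in> carrier (ls_ring R)"
  shows "(f \<otimes>\<^bsub>ls_ring R\<^esub> g) \<otimes>\<^bsub>ls_ring R\<^esub> h = f \<otimes>\<^bsub>ls_ring R\<^esub> (g \<otimes>\<^bsub>ls_ring R\<^esub> h)"
proof
  fix k
  obtain Mf where Mf: "\<forall>i<Mf. f i = \<zero>" using ls_bounded_below[OF f] by blast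
  obtain Mg where Mg: "\<forall>i<Mg. g i = \<zero>" using ls_bounded_below[OF g] by blast
  obtain Mh where Mh: "\<forall>i<Mh. h i = \<zero>" using ls_bounded_below[OF h] by blast
  have fR: "f i \<in> carrier R" and gR: "g i \<in> carrier R" and hR: "h i \<in> carrier R" for i
    using ls_coeff_closed f g h by auto
  show "((f \<otimes>\<^bsub>ls_ring R\<^esub> g) \<otimes>\<^bsub>ls_ring R\<^esub> h) k = (f \<otimes>\<^bsub>ls_ring R\<^esub> (g \<otimes>\<^bsub>ls_ring R\<^esub> h)) k"
    unfolding ls_mult_mult_coeff_left[OF f g h Mf Mg Mh] ls_mult_mult_coeff_right[OF f g h Mf Mg Mh]
    by (subst finsum_swap) (use fR gR hR in \<open>auto intro!: finsum_cong' simp: m_assoc\<close>)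
qed

lemma ls_mult_comm:
  assumes f: "f \<in> carrier (ls_ring R)" and g: "g \<in> carrier (ls_ring R)"
  shows "f \<otimes>\<^bsub>ls_ring R\<^esub> g = g \<otimes>\<^bsub>ls_ring R\<^esub> f"
proof
  fix k
  obtain Mf where Mf: "\<forall>i<Mf. f i = \<zero>" using ls_bounded_below[OF f] by blast
  obtain Mg where Mg: "\<forall>i<Mg. g i = \<zero>" using ls_bounded_below[OF g] by blast
  have fR: "f i \<in> carrier R" and gR: "g i \<in> carrier R" for i using ls_coeff_closed f g by auto
  define I where "I = {Mg..k - Mf}"
  have inj: "inj_on (\<lambda>i. k - i) I" by (auto simp: inj_on_def)
  have "(f \<otimes>\<^bsub>ls_ring R\<^esub> g) k = (\<Oplus>i\<in>(\<lambda>i. k - i) ` I. f i \<otimes> g (k - i))"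
  proof (rule ls_mult_coeff[OF f g])
    show "finite ((\<lambda>i. k - i) ` I)" unfolding I_def by simp
    fix i assume "i \<notin> (\<lambda>i. k - i) ` I"
    then have "k - i \<notin> I" using image_eqI[of i "\<lambda>i. k - i" "k - i" I] by auto
    then have "k - i < Mg \<or> i < Mf" unfolding I_def by auto
    then show "f i = \<zero> \<or> g (k - i) = \<zero>" using Mf Mg by auto
  qed
  also have "\<dots> = (\<Oplus>i\<in>I. f (k - i) \<otimes> g (k - (k - i)))"
    by (rule finsum_reindex) (use fR gR inj in auto)
  also have "\<dots> = (\<Oplus>i\<in>I. g i \<otimes> f (k - i))"
    by (rule finsum_cong') (use fR gR in \<open>auto simp: m_comm\<close>)
  also have "\<dots> = (g \<otimes>\<^bsub>ls_ring R\<^esub> f) k"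
  proof (rule ls_mult_coeff[OF g f, symmetric])
    show "finite I" unfolding I_def by simp
    fix i assume "i \<notin> I"
    then have "i < Mg \<or> k - i < Mf" unfolding I_def by auto
    then show "g i = \<zero> \<or> f (k - i) = \<zero>" using Mf Mg by auto
  qed
  finally show "(f \<otimes>\<^bsub>ls_ring R\<^esub> g) k = (g \<otimes>\<^bsub>ls_ring R\<^esub> f) k" .
qed

lemma ls_one_closed: "\<one>\<^bsub>ls_ring R\<^esub> \<in> carrier (ls_ring R)"
  unfolding ls_one by (rule ls_carrierI[of _ 0]) auto

lemma ls_zero_closed: "\<zero>\<^bsub>ls_ring R\<^esub> \<in> carrier (ls_ring R)"
  unfolding ls_zero by (rule ls_carrierI[of _ 0]) auto

lemma ls_l_one:
  assumes f: "f \<in> carrier (ls_ring R)"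
  shows "\<one>\<^bsub>ls_ring R\<^esub> \<otimes>\<^bsub>ls_ring R\<^esub> f = f"
proof
  fix k
  have "(\<one>\<^bsub>ls_ring R\<^esub> \<otimes>\<^bsub>ls_ring R\<^esub> f) k = (\<Oplus>i\<in>{0}. \<one>\<^bsub>ls_ring R\<^esub> i \<otimes> f (k - i))"
    by (rule ls_mult_coeff[OF ls_one_closed f]) (auto simp: ls_one)
  then show "(\<one>\<^bsub>ls_ring R\<^esub> \<otimes>\<^bsub>ls_ring R\<^esub> f) k = f k" using ls_coeff_closed[OF f] by (simp add: ls_one)
qed

lemma ls_l_distr:
  assumes f: "f \<in> carrier (ls_ring R)" and g: "g \<in> carrier (ls_ring R)" and h: "h \<in> carrier (ls_ring R)"
  shows "(f \<oplus>\<^bsub>ls_ring R\<^esub> g) \<otimes>\<^bsub>ls_ring R\<^esub> h = f \<otimes>\<^bsub>ls_ring R\<^esub> h \<oplus>\<^bsub>ls_ring R\<^esub> g \<otimes>\<^bsub>ls_ring R\<^esub> h"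
proof
  fix k
  obtain Mf where Mf: "\<forall>i<Mf. f i = \<zero>" using ls_bounded_below[OF f] by blast
  obtain Mg where Mg: "\<forall>i<Mg. g i = \<zero>" using ls_bounded_below[OF g] by blast
  obtain Mh where Mh: "\<forall>i<Mh. h i = \<zero>" using ls_bounded_below[OF h] by blast
  have fR: "f i \<in> carrier R" and gR: "g i \<in> carrier R" and hR: "h i \<in> carrier R" for i
    using ls_coeff_closed f g h by auto
  define I where "I = {min Mf Mg..k - Mh}"
  have fI: "finite I" unfolding I_def by simp
  have z: "i \<notin> I \<Longrightarrow> (i < Mf \<and> i < Mg) \<or> h (k - i) = \<zero>" for i using Mh unfolding I_def by auto
  have "((f \<oplus>\<^bsub>ls_ring R\<^esub> g) \<otimes>\<^bsub>ls_ring R\<^esub> h) k = (\<Oplus>i\<in>I. (f \<oplus>\<^bsub>ls_ring R\<^esub> g) i \<otimes> h (k - i))"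
  proof (rule ls_mult_coeff[OF ls_add_closed[OF f g] h fI])
    fix i assume "i \<notin> I"
    then have "(i < Mf \<and> i < Mg) \<or> h (k - i) = \<zero>" by (rule z)
    then show "(f \<oplus>\<^bsub>ls_ring R\<^esub> g) i = \<zero> \<or> h (k - i) = \<zero>" using Mf Mg by (auto simp: ls_add)
  qed
  also have "\<dots> = (\<Oplus>i\<in>I. (f i \<oplus> g i) \<otimes> h (k - i))" by (simp add: ls_add)
  also have "\<dots> = (\<Oplus>i\<in>I. f i \<otimes> h (k - i) \<oplus> g i \<otimes> h (k - i))"
    by (rule finsum_cong') (use fR gR hR in \<open>auto simp: l_distr\<close>)
  also have "\<dots> = (\<Oplus>i\<in>I. f i \<otimes> h (k - i)) \<oplus> (\<Oplus>i\<in>I. g i \<otimes> h (k - i))"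
    by (rule finsum_addf) (use fR gR hR in auto)
  also have "\<dots> = (f \<otimes>\<^bsub>ls_ring R\<^esub> h \<oplus>\<^bsub>ls_ring R\<^esub> g \<otimes>\<^bsub>ls_ring R\<^esub> h) k"
    unfolding ls_add using z Mf Mg
    by (subst ls_mult_coeff[OF f h fI], force, subst ls_mult_coeff[OF g h fI], force, simp)
  finally show "((f \<oplus>\<^bsub>ls_ring R\<^esub> g) \<otimes>\<^bsub>ls_ring R\<^esub> h) k = (f \<otimes>\<^bsub>ls_ring R\<^esub> h \<oplus>\<^bsub>ls_ring R\<^esub> g \<otimes>\<^bsub>ls_ring R\<^esub> h) k" .
qed

lemma cring_ls_ring: "cring (ls_ring R)"
proof (rule cringI)
  show "abelian_group (ls_ring R)"
  proof (rule abelian_groupI)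
    fix x y z assume x: "x \<in> carrier (ls_ring R)" and y: "y \<in> carrier (ls_ring R)" and z: "z \<in> carrier (ls_ring R)"
    show "x \<oplus>\<^bsub>ls_ring R\<^esub> y \<in> carrier (ls_ring R)" by (rule ls_add_closed[OF x y])
    show "x \<oplus>\<^bsub>ls_ring R\<^esub> y \<oplus>\<^bsub>ls_ring R\<^esub> z = x \<oplus>\<^bsub>ls_ring R\<^esub> (y \<oplus>\<^bsub>ls_ring R\<^esub> z)"
      unfolding ls_add using ls_coeff_closed[OF x] ls_coeff_closed[OF y] ls_coeff_closed[OF z] by (auto simp: a_assoc)
    show "x \<oplus>\<^bsub>ls_ring R\<^esub> y = y \<oplus>\<^bsub>ls_ring R\<^esub> x"
      unfolding ls_add using ls_coeff_closed[OF x] ls_coeff_closed[OF y] by (auto simp: a_comm)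
    show "\<zero>\<^bsub>ls_ring R\<^esub> \<oplus>\<^bsub>ls_ring R\<^esub> x = x"
      unfolding ls_add ls_zero using ls_coeff_closed[OF x] by auto
    obtain M where M: "\<forall>i<M. x i = \<zero>" using ls_bounded_below[OF x] by blast
    show "\<exists>y\<in>carrier (ls_ring R). y \<oplus>\<^bsub>ls_ring R\<^esub> x = \<zero>\<^bsub>ls_ring R\<^esub>"
    proof (intro bexI)
      show "(\<lambda>i. \<ominus> x i) \<in> carrier (ls_ring R)" by (rule ls_carrierI[of _ M]) (use M ls_coeff_closed[OF x] in auto)
      show "(\<lambda>i. \<ominus> x i) \<oplus>\<^bsub>ls_ring R\<^esub> x = \<zero>\<^bsub>ls_ring R\<^esub>"
        unfolding ls_add ls_zero using ls_coeff_closed[OF x] by (auto simp: l_neg)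
    qed
  next
    show "\<zero>\<^bsub>ls_ring R\<^esub> \<in> carrier (ls_ring R)" by (rule ls_zero_closed)
  qed
  show "comm_monoid (ls_ring R)"
    by (rule comm_monoidI) (auto intro: ls_mult_closed ls_one_closed ls_mult_assoc ls_l_one ls_mult_comm)
  show "\<And>x y z. x \<in> carrier (ls_ring R) \<Longrightarrow> y \<in> carrier (ls_ring R) \<Longrightarrow> z \<in> carrier (ls_ring R) \<Longrightarrow>
     (x \<oplus>\<^bsub>ls_ring R\<^esub> y) \<otimes>\<^bsub>ls_ring R\<^esub> z = x \<otimes>\<^bsub>ls_ring R\<^esub> z \<oplus>\<^bsub>ls_ring R\<^esub> y \<otimes>\<^bsub>ls_ring R\<^esub> z"
    by (rule ls_l_distr)
qed

lemma ls_uminus: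
  assumes f: "f \<in> carrier (ls_ring R)"
  shows "a_inv (ls_ring R) f = (\<lambda>i. \<ominus> f i)"
proof -
  interpret L: cring "ls_ring R" by (rule cring_ls_ring)
  obtain M where M: "\<forall>i<M. f i = \<zero>" using ls_bounded_below[OF f] by blast
  have c: "(\<lambda>i. \<ominus> f i) \<in> carrier (ls_ring R)" by (rule ls_carrierI[of _ M]) (use M ls_coeff_closed[OF f] in auto)
  show ?thesis
    by (rule L.minus_equality[OF _ f c]) (use ls_coeff_closed[OF f] in \<open>auto simp: ls_add ls_zero l_neg\<close>)
qed

lemma ps_carrier_iff: "f \<in> ps_carrier R \<longleftrightarrow> f \<in> carrier (ls_ring R) \<and> (\<forall>i<0. f i = \<zero>)"
  unfolding ps_carrier_def by simp

lemma ps_mult_closed: "f \<in> ps_carrier R \<Longrightarrow> g \<in> ps_carrier R \<Longrightarrow> f \<otimes>\<^bsub>ls_ring R\<^esub> g \<in> ps_carrier R"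
  unfolding ps_carrier_iff using ls_mult_closed ls_mult_coeff_below[of f g 0 0] by auto

lemma ps_add_closed: "f \<in> ps_carrier R \<Longrightarrow> g \<in> ps_carrier R \<Longrightarrow> f \<oplus>\<^bsub>ls_ring R\<^esub> g \<in> ps_carrier R"
  unfolding ps_carrier_iff using ls_add_closed by (auto simp: ls_add)

lemma ps_zero: "\<zero>\<^bsub>ls_ring R\<^esub> \<in> ps_carrier R"
  unfolding ps_carrier_iff using ls_zero_closed by (auto simp: ls_zero)

lemma ps_mult_coeff_0:
  assumes f: "f \<in> ps_carrier R" and g: "g \<in> ps_carrier R"
  shows "(f \<otimes>\<^bsub>ls_ring R\<^esub> g) 0 = f 0 \<otimes> g 0"
proof -
  have fc: "f \<in> carrier (ls_ring R)" and gc: "g \<in> carrier (ls_ring R)" using f g ps_carrier_iff by auto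
  have "(f \<otimes>\<^bsub>ls_ring R\<^esub> g) 0 = (\<Oplus>i\<in>{0}. f i \<otimes> g (0 - i))"
  proof (rule ls_mult_coeff[OF fc gc])
    fix i :: int assume "i \<notin> {0}"
    then have "i < 0 \<or> 0 - i < 0" by auto
    then show "f i = \<zero> \<or> g (0 - i) = \<zero>" using f g ps_carrier_iff by blast
  qed simp
  then show ?thesis using ls_coeff_closed[OF fc] ls_coeff_closed[OF gc] by simp
qed

end

lemma ls_map_carrier:
  assumes hc: "ring_hom_cring R S h" and f: "f \<in> carrier (ls_ring R)"
  shows "(\<lambda>i. h (f i)) \<in> carrier (ls_ring S)"
proof -
  interpret H: ring_hom_cring R S h by (rule hc)
  obtain M where M: "\<forall>i<M. f i = \<zero>\<^bsub>R\<^esub>" using H.R.ls_bounded_below[OF f] by blast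
  show ?thesis by (rule H.S.ls_carrierI[of _ M]) (use M H.R.ls_coeff_closed[OF f] in auto)
qed

lemma ls_map_mult:
  assumes hc: "ring_hom_cring R S h" and f: "f \<in> carrier (ls_ring R)" and g: "g \<in> carrier (ls_ring R)"
  shows "(\<lambda>i. h ((f \<otimes>\<^bsub>ls_ring R\<^esub> g) i)) = (\<lambda>i. h (f i)) \<otimes>\<^bsub>ls_ring S\<^esub> (\<lambda>i. h (g i))"
proof
  fix k
  interpret H: ring_hom_cring R S h by (rule hc)
  obtain Mf where Mf: "\<forall>i<Mf. f i = \<zero>\<^bsub>R\<^esub>" using H.R.ls_bounded_below[OF f] by blast
  obtain Mg where Mg: "\<forall>i<Mg. g i = \<zero>\<^bsub>R\<^esub>" using H.R.ls_bounded_below[OF g] by blast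
  define I where "I = {Mf..k - Mg}"
  have fI: "finite I" unfolding I_def by simp
  have z: "i \<notin> I \<Longrightarrow> f i = \<zero>\<^bsub>R\<^esub> \<or> g (k - i) = \<zero>\<^bsub>R\<^esub>" for i using Mf Mg unfolding I_def by auto
  have "(f \<otimes>\<^bsub>ls_ring R\<^esub> g) k = (\<Oplus>\<^bsub>R\<^esub>i\<in>I. f i \<otimes>\<^bsub>R\<^esub> g (k - i))"
    by (rule H.R.ls_mult_coeff[OF f g fI z])
  then have "h ((f \<otimes>\<^bsub>ls_ring R\<^esub> g) k) = (\<Oplus>\<^bsub>S\<^esub>i\<in>I. h (f i) \<otimes>\<^bsub>S\<^esub> h (g (k - i)))"
    using H.R.ls_coeff_closed[OF f] H.R.ls_coeff_closed[OF g] by (simp add: comp_def)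
  also have "\<dots> = ((\<lambda>i. h (f i)) \<otimes>\<^bsub>ls_ring S\<^esub> (\<lambda>i. h (g i))) k"
  proof (rule H.S.ls_mult_coeff[OF ls_map_carrier[OF hc f] ls_map_carrier[OF hc g] fI, symmetric])
    fix i assume "i \<notin> I"
    then have "f i = \<zero>\<^bsub>R\<^esub> \<or> g (k - i) = \<zero>\<^bsub>R\<^esub>" by (rule z)
    then show "h (f i) = \<zero>\<^bsub>S\<^esub> \<or> h (g (k - i)) = \<zero>\<^bsub>S\<^esub>" by auto
  qed
  finally show "h ((f \<otimes>\<^bsub>ls_ring R\<^esub> g) k) = ((\<lambda>i. h (f i)) \<otimes>\<^bsub>ls_ring S\<^esub> (\<lambda>i. h (g i))) k" .
qed

lemma ls_map_add:
  assumes hc: "ring_hom_cring R S h" and f: "f \<in> carrier (ls_ring R)" and g: "g \<in> carrier (ls_ring R)"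
  shows "(\<lambda>i. h ((f \<oplus>\<^bsub>ls_ring R\<^esub> g) i)) = (\<lambda>i. h (f i)) \<oplus>\<^bsub>ls_ring S\<^esub> (\<lambda>i. h (g i))"
proof -
  interpret H: ring_hom_cring R S h by (rule hc)
  show ?thesis using H.R.ls_coeff_closed[OF f] H.R.ls_coeff_closed[OF g] by (simp add: H.R.ls_add H.S.ls_add)
qed

lemma Fin_in_places: "prime p \<Longrightarrow> Fin p \<in> places"
  unfolding places_def by auto

lemma is_absval_Fin: "prime p \<Longrightarrow> is_absval (rat_absv (Fin p))"
  by (rule is_absval_rat_absv[OF Fin_in_places])

lemma Zv_subset: "Zv v \<subseteq> carrier (Qv v)"
  unfolding Zv_def by auto

lemma ZvE:
  assumes "prime p" "a \<in> Zv (Fin p)"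
  obtains X where "vcauchy (Fin p) X" "a = vclass (Fin p) X" "\<forall>k. rat_absv (Fin p) (X k) \<le> 1"
proof -
  obtain X0 where X0: "vcauchy (Fin p) X0" "a = vclass (Fin p) X0"
    using assms Qv_carrierE[OF is_absval_Fin[OF assms(1)]] unfolding Zv_def by blast
  obtain X where X: "X \<in> a" "\<forall>k. rat_absv (Fin p) (X k) \<le> 1" using assms unfolding Zv_def by blast
  have "vcauchy (Fin p) X" using X(1) X0(2) unfolding vclass_def by auto
  moreover have "a = vclass (Fin p) X" using vclass_mem_eq[OF is_absval_Fin[OF assms(1)]] X(1) X0 by metis
  ultimately show ?thesis using that X(2) by blast
qed

lemma vclass_in_Zv:
  assumes "prime p" "vcauchy (Fin p) X" "\<forall>k. rat_absv (Fin p) (X k) \<le> 1"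
  shows "vclass (Fin p) X \<in> Zv (Fin p)"
  unfolding Zv_def using assms vclass_in_Qv[OF is_absval_Fin[OF assms(1)]] vclass_self[OF is_absval_Fin[OF assms(1)]] by blast

lemma Zv_vrat:
  assumes "prime p" "rat_absv (Fin p) q \<le> 1"
  shows "vrat (Fin p) q \<in> Zv (Fin p)"
  unfolding vrat_def using assms by (intro vclass_in_Zv vcauchy_const is_absval_Fin) auto

lemma Zv_zero: "prime p \<Longrightarrow> \<zero>\<^bsub>Qv (Fin p)\<^esub> \<in> Zv (Fin p)"
  using Zv_vrat[of p 0] by (simp add: vrat_zero)

lemma Zv_one: "prime p \<Longrightarrow> \<one>\<^bsub>Qv (Fin p)\<^esub> \<in> Zv (Fin p)"
  using Zv_vrat[of p 1] is_absval_Fin[of p] by (simp add: vrat_def Qv_one is_absval_def)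

lemma Zv_add:
  assumes p: "prime p" and a: "a \<in> Zv (Fin p)" and b: "b \<in> Zv (Fin p)"
  shows "a \<oplus>\<^bsub>Qv (Fin p)\<^esub> b \<in> Zv (Fin p)"
proof -
  note av = is_absval_Fin[OF p]
  obtain X where X: "vcauchy (Fin p) X" "a = vclass (Fin p) X" "\<forall>k. rat_absv (Fin p) (X k) \<le> 1"
    using ZvE[OF p a] by blast
  obtain Y where Y: "vcauchy (Fin p) Y" "b = vclass (Fin p) Y" "\<forall>k. rat_absv (Fin p) (Y k) \<le> 1"
    using ZvE[OF p b] by blast
  have "rat_absv (Fin p) (X k + Y k) \<le> 1" for k
    using rat_absv_Fin_ultrametric[OF p, of "X k" "Y k"] X(3) Y(3) by (smt (verit))
  then show ?thesis using X Y Qv_add_vclass[OF av] vcauchy_add[OF av] vclass_in_Zv[OF p] by simp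
qed

lemma Zv_mult:
  assumes p: "prime p" and a: "a \<in> Zv (Fin p)" and b: "b \<in> Zv (Fin p)"
  shows "a \<otimes>\<^bsub>Qv (Fin p)\<^esub> b \<in> Zv (Fin p)"
proof -
  note av = is_absval_Fin[OF p]
  obtain X where X: "vcauchy (Fin p) X" "a = vclass (Fin p) X" "\<forall>k. rat_absv (Fin p) (X k) \<le> 1"
    using ZvE[OF p a] by blast
  obtain Y where Y: "vcauchy (Fin p) Y" "b = vclass (Fin p) Y" "\<forall>k. rat_absv (Fin p) (Y k) \<le> 1"
    using ZvE[OF p b] by blast
  have "rat_absv (Fin p) (X k * Y k) \<le> 1" for k
    using X(3) Y(3) absval_mult[OF av] absval_nonneg[OF av] by (metis mult_le_one)
  then show ?thesis using X Y Qv_mult_vclass[OF av] vcauchy_mult[OF av] vclass_in_Zv[OF p] by simp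
qed

lemma Zv_neg:
  assumes p: "prime p" and a: "a \<in> Zv (Fin p)"
  shows "a_inv (Qv (Fin p)) a \<in> Zv (Fin p)"
proof -
  note av = is_absval_Fin[OF p]
  obtain X where X: "vcauchy (Fin p) X" "a = vclass (Fin p) X" "\<forall>k. rat_absv (Fin p) (X k) \<le> 1"
    using ZvE[OF p a] by blast
  have "rat_absv (Fin p) (- X k) \<le> 1" for k using X(3) absval_minus[OF av] by simp
  then show ?thesis using X Qv_uminus_vclass[OF av] vcauchy_neg[OF av] vclass_in_Zv[OF p] by simp
qed

lemma Zv_finsum:
  assumes p: "prime p" and F: "\<And>i. i \<in> A \<Longrightarrow> F i \<in> Zv (Fin p)"
  shows "finsum (Qv (Fin p)) F A \<in> Zv (Fin p)"
proof -
  interpret Q: cring "Qv (Fin p)" by (rule cring_Qv[OF is_absval_Fin[OF p]])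
  show ?thesis
  proof (cases "finite A")
    case True
    then show ?thesis using F
    proof (induction A rule: finite_induct)
      case empty then show ?case using Zv_zero[OF p] by simp
    next
      case (insert a A)
      have "finsum (Qv (Fin p)) F (insert a A) = F a \<oplus>\<^bsub>Qv (Fin p)\<^esub> finsum (Qv (Fin p)) F A"
        using insert Zv_subset by (intro Q.finsum_insert) auto
      then show ?case using insert Zv_add[OF p] by auto
    qed
  next
    case False then show ?thesis using Zv_zero[OF p] by simp
  qed
qed

section \<open>The restricted product \<open>\<bbbA>\<langle>t\<rangle>\<close>\<close>

definition pointwise_ring :: "'i set \<Rightarrow> ('i \<Rightarrow> ('a, 'm) ring_scheme) \<Rightarrow> ('i \<Rightarrow> 'a) set \<Rightarrow> ('i \<Rightarrow> 'a) ring" where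
  "pointwise_ring I R C = \<lparr>carrier = C,
     mult = (\<lambda>a b v. if v \<in> I then a v \<otimes>\<^bsub>R v\<^esub> b v else \<zero>\<^bsub>R v\<^esub>),
     one = (\<lambda>v. if v \<in> I then \<one>\<^bsub>R v\<^esub> else \<zero>\<^bsub>R v\<^esub>),
     zero = (\<lambda>v. \<zero>\<^bsub>R v\<^esub>),
     add = (\<lambda>a b v. if v \<in> I then a v \<oplus>\<^bsub>R v\<^esub> b v else \<zero>\<^bsub>R v\<^esub>)\<rparr>"

lemma cring_pointwise_ring:
  assumes R: "\<And>v. v \<in> I \<Longrightarrow> cring (R v)"
    and C: "\<And>a. a \<in> C \<Longrightarrow> (\<forall>v\<in>I. a v \<in> carrier (R v)) \<and> (\<forall>v. v \<notin> I \<longrightarrow> a v = \<zero>\<^bsub>R v\<^esub>)"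
    and zero: "(\<lambda>v. \<zero>\<^bsub>R v\<^esub>) \<in> C"
    and one: "(\<lambda>v. if v \<in> I then \<one>\<^bsub>R v\<^esub> else \<zero>\<^bsub>R v\<^esub>) \<in> C"
    and add: "\<And>a b. a \<in> C \<Longrightarrow> b \<in> C \<Longrightarrow> (\<lambda>v. if v \<in> I then a v \<oplus>\<^bsub>R v\<^esub> b v else \<zero>\<^bsub>R v\<^esub>) \<in> C"
    and mult: "\<And>a b. a \<in> C \<Longrightarrow> b \<in> C \<Longrightarrow> (\<lambda>v. if v \<in> I then a v \<otimes>\<^bsub>R v\<^esub> b v else \<zero>\<^bsub>R v\<^esub>) \<in> C"
    and uminus: "\<And>a. a \<in> C \<Longrightarrow> (\<lambda>v. if v \<in> I then \<ominus>\<^bsub>R v\<^esub> a v else \<zero>\<^bsub>R v\<^esub>) \<in> C"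
  shows "cring (pointwise_ring I R C)"
proof -
  note simps = cring.cring_simprules[OF R] monoid.r_one[OF ring.is_monoid[OF cring.axioms(1)[OF R]]]
    pointwise_ring_def fun_eq_iff
  show ?thesis
  proof (rule cringI)
    show "abelian_group (pointwise_ring I R C)"
    proof (rule abelian_groupI)
      show "\<exists>y\<in>carrier (pointwise_ring I R C). y \<oplus>\<^bsub>pointwise_ring I R C\<^esub> x = \<zero>\<^bsub>pointwise_ring I R C\<^esub>"
        if "x \<in> carrier (pointwise_ring I R C)" for x
        using that uminus C
        by (intro bexI[of _ "\<lambda>v. if v \<in> I then \<ominus>\<^bsub>R v\<^esub> x v else \<zero>\<^bsub>R v\<^esub>"]) (auto simp: simps)
    qed (use zero add C in \<open>auto simp: simps\<close>)
    show "comm_monoid (pointwise_ring I R C)"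
      by (rule comm_monoidI) (use one mult C in \<open>auto simp: simps\<close>)
  qed (use C in \<open>auto simp: simps\<close>)
qed

lemma cring_LSv: "v \<in> places \<Longrightarrow> cring (LSv v)"
  unfolding LSv_def by (rule cring.cring_ls_ring[OF cring_Qv[OF is_absval_rat_absv]])

definition nonintegral_primes :: "adt \<Rightarrow> nat set" where
  "nonintegral_primes a = {p. prime p \<and> \<not> (\<forall>i. a (Fin p) i \<in> Zv (Fin p))}"

lemma At_carrier_iff: "a \<in> carrier At \<longleftrightarrow> (\<forall>v\<in>places. a v \<in> carrier (LSv v)) \<and> (\<forall>v. v \<notin> places \<longrightarrow> a v = \<zero>\<^bsub>LSv v\<^esub>) \<and> finite (nonintegral_primes a)"
  unfolding At_def nonintegral_primes_def by simp

lemma At_mult: "a \<otimes>\<^bsub>At\<^esub> b = (\<lambda>v. if v \<in> places then a v \<otimes>\<^bsub>LSv v\<^esub> b v else \<zero>\<^bsub>LSv v\<^esub>)"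
  and At_add: "a \<oplus>\<^bsub>At\<^esub> b = (\<lambda>v. if v \<in> places then a v \<oplus>\<^bsub>LSv v\<^esub> b v else \<zero>\<^bsub>LSv v\<^esub>)"
  and At_one: "\<one>\<^bsub>At\<^esub> = (\<lambda>v. if v \<in> places then \<one>\<^bsub>LSv v\<^esub> else \<zero>\<^bsub>LSv v\<^esub>)"
  and At_zero: "\<zero>\<^bsub>At\<^esub> = (\<lambda>v. \<zero>\<^bsub>LSv v\<^esub>)"
  unfolding At_def by simp_all

lemma LSv_add: "f \<oplus>\<^bsub>LSv v\<^esub> g = (\<lambda>i. f i \<oplus>\<^bsub>Qv v\<^esub> g i)"
  and LSv_zero: "\<zero>\<^bsub>LSv v\<^esub> = (\<lambda>i. \<zero>\<^bsub>Qv v\<^esub>)"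
  and LSv_one: "\<one>\<^bsub>LSv v\<^esub> = (\<lambda>i. if i = 0 then \<one>\<^bsub>Qv v\<^esub> else \<zero>\<^bsub>Qv v\<^esub>)"
  and LSv_mult: "f \<otimes>\<^bsub>LSv v\<^esub> g = (\<lambda>k. finsum (Qv v) (\<lambda>i. f i \<otimes>\<^bsub>Qv v\<^esub> g (k - i))
                        {i. f i \<noteq> \<zero>\<^bsub>Qv v\<^esub> \<and> g (k - i) \<noteq> \<zero>\<^bsub>Qv v\<^esub>})"
  unfolding LSv_def ls_ring_def by simp_all

lemma nonintegral_primes_add: "nonintegral_primes (a \<oplus>\<^bsub>At\<^esub> b) \<subseteq> nonintegral_primes a \<union> nonintegral_primes b"
proof
  fix p assume "p \<in> nonintegral_primes (a \<oplus>\<^bsub>At\<^esub> b)"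
  then have p: "prime p" and n: "\<not> (\<forall>i. (a \<oplus>\<^bsub>At\<^esub> b) (Fin p) i \<in> Zv (Fin p))" unfolding nonintegral_primes_def by auto
  show "p \<in> nonintegral_primes a \<union> nonintegral_primes b"
  proof (rule ccontr)
    assume "p \<notin> nonintegral_primes a \<union> nonintegral_primes b"
    then have a: "\<forall>i. a (Fin p) i \<in> Zv (Fin p)" and b: "\<forall>i. b (Fin p) i \<in> Zv (Fin p)" using p unfolding nonintegral_primes_def by auto
    have "(a \<oplus>\<^bsub>At\<^esub> b) (Fin p) i \<in> Zv (Fin p)" for i
      unfolding At_add LSv_add using Fin_in_places[OF p] Zv_add[OF p] a b by auto
    then show False using n by blast
  qed
qed

lemma LSv_closed:
  assumes "v \<in> places" "f \<in> carrier (LSv v)" "g \<in> carrier (LSv v)"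
  shows "f \<oplus>\<^bsub>LSv v\<^esub> g \<in> carrier (LSv v)" "f \<otimes>\<^bsub>LSv v\<^esub> g \<in> carrier (LSv v)"
    "a_inv (LSv v) f \<in> carrier (LSv v)"
proof -
  interpret L: cring "LSv v" by (rule cring_LSv[OF assms(1)])
  show "f \<oplus>\<^bsub>LSv v\<^esub> g \<in> carrier (LSv v)" "f \<otimes>\<^bsub>LSv v\<^esub> g \<in> carrier (LSv v)"
    "a_inv (LSv v) f \<in> carrier (LSv v)" using assms by auto
qed

lemma nonintegral_primes_mult: "nonintegral_primes (a \<otimes>\<^bsub>At\<^esub> b) \<subseteq> nonintegral_primes a \<union> nonintegral_primes b"
proof
  fix p assume "p \<in> nonintegral_primes (a \<otimes>\<^bsub>At\<^esub> b)"
  then have p: "prime p" and n: "\<not> (\<forall>i. (a \<otimes>\<^bsub>At\<^esub> b) (Fin p) i \<in> Zv (Fin p))" unfolding nonintegral_primes_def by auto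
  show "p \<in> nonintegral_primes a \<union> nonintegral_primes b"
  proof (rule ccontr)
    assume "p \<notin> nonintegral_primes a \<union> nonintegral_primes b"
    then have a: "\<forall>i. a (Fin p) i \<in> Zv (Fin p)" and b: "\<forall>i. b (Fin p) i \<in> Zv (Fin p)" using p unfolding nonintegral_primes_def by auto
    have "(a \<otimes>\<^bsub>At\<^esub> b) (Fin p) i \<in> Zv (Fin p)" for i
      unfolding At_mult LSv_mult using Fin_in_places[OF p]
      by (auto intro!: Zv_finsum[OF p] Zv_mult[OF p] a[rule_format] b[rule_format])
    then show False using n by blast
  qed
qed

lemma nonintegral_primes_uminus:
  assumes a: "a \<in> carrier At"
  shows "nonintegral_primes (\<lambda>v. if v \<in> places then \<ominus>\<^bsub>LSv v\<^esub> a v else \<zero>\<^bsub>LSv v\<^esub>) \<subseteq> nonintegral_primes a"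
proof
  fix p assume "p \<in> nonintegral_primes (\<lambda>v. if v \<in> places then \<ominus>\<^bsub>LSv v\<^esub> a v else \<zero>\<^bsub>LSv v\<^esub>)"
  then have p: "prime p"
    and n: "\<not> (\<forall>i. (\<ominus>\<^bsub>LSv (Fin p)\<^esub> a (Fin p)) i \<in> Zv (Fin p))"
    using Fin_in_places unfolding nonintegral_primes_def by auto
  have "a (Fin p) \<in> carrier (ls_ring (Qv (Fin p)))"
    using a Fin_in_places[OF p] unfolding At_carrier_iff LSv_def by auto
  then have "(\<ominus>\<^bsub>LSv (Fin p)\<^esub> a (Fin p)) i = \<ominus>\<^bsub>Qv (Fin p)\<^esub> a (Fin p) i" for i
    using cring.ls_uminus[OF cring_Qv[OF is_absval_Fin[OF p]]] unfolding LSv_def by simp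
  then show "p \<in> nonintegral_primes a"
    using n Zv_neg[OF p] p unfolding nonintegral_primes_def by auto
qed

lemma At_eq_pointwise_ring: "At = pointwise_ring places LSv (carrier At)"
  by (simp add: At_def pointwise_ring_def)

lemma cring_At: "cring At"
proof -
  have "cring (pointwise_ring places LSv (carrier At))"
  proof (rule cring_pointwise_ring)
    fix a b assume a: "a \<in> carrier At" and b: "b \<in> carrier At"
    show "(\<forall>v\<in>places. a v \<in> carrier (LSv v)) \<and> (\<forall>v. v \<notin> places \<longrightarrow> a v = \<zero>\<^bsub>LSv v\<^esub>)"
      using a unfolding At_carrier_iff by blast
    show "(\<lambda>v. if v \<in> places then a v \<oplus>\<^bsub>LSv v\<^esub> b v else \<zero>\<^bsub>LSv v\<^esub>) \<in> carrier At"
      using a b nonintegral_primes_add[of a b] finite_subset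
      by (auto simp: At_carrier_iff At_add intro: LSv_closed)
    show "(\<lambda>v. if v \<in> places then a v \<otimes>\<^bsub>LSv v\<^esub> b v else \<zero>\<^bsub>LSv v\<^esub>) \<in> carrier At"
      using a b nonintegral_primes_mult[of a b] finite_subset
      by (auto simp: At_carrier_iff At_mult intro: LSv_closed)
    show "(\<lambda>v. if v \<in> places then \<ominus>\<^bsub>LSv v\<^esub> a v else \<zero>\<^bsub>LSv v\<^esub>) \<in> carrier At"
      using a nonintegral_primes_uminus[OF a] finite_subset
      by (auto simp: At_carrier_iff intro: LSv_closed)
  next
    have "nonintegral_primes \<zero>\<^bsub>At\<^esub> = {}" "nonintegral_primes \<one>\<^bsub>At\<^esub> = {}"
      unfolding nonintegral_primes_def At_zero At_one LSv_zero LSv_one using Zv_zero Zv_one Fin_in_places by auto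
    moreover have "\<zero>\<^bsub>LSv v\<^esub> \<in> carrier (LSv v)" "\<one>\<^bsub>LSv v\<^esub> \<in> carrier (LSv v)" if "v \<in> places" for v
      using cring.ls_zero_closed[OF cring_Qv] cring.ls_one_closed[OF cring_Qv] is_absval_rat_absv[OF that]
      unfolding LSv_def by blast+
    ultimately show "(\<lambda>v. \<zero>\<^bsub>LSv v\<^esub>) \<in> carrier At"
      and "(\<lambda>v. if v \<in> places then \<one>\<^bsub>LSv v\<^esub> else \<zero>\<^bsub>LSv v\<^esub>) \<in> carrier At"
      unfolding At_carrier_iff by (simp_all add: At_zero At_one)
  qed (rule cring_LSv)
  then show ?thesis using At_eq_pointwise_ring by simp
qed

lemma At_uminus:
  assumes a: "a \<in> carrier At"
  shows "\<ominus>\<^bsub>At\<^esub> a = (\<lambda>v. if v \<in> places then (\<lambda>i. \<ominus>\<^bsub>Qv v\<^esub> a v i) else \<zero>\<^bsub>LSv v\<^esub>)"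
proof -
  interpret At: cring At by (rule cring_At)
  let ?y = "\<lambda>v. if v \<in> places then \<ominus>\<^bsub>LSv v\<^esub> a v else \<zero>\<^bsub>LSv v\<^esub>"
  have yc: "?y \<in> carrier At"
    using a nonintegral_primes_uminus[OF a] finite_subset by (auto simp: At_carrier_iff intro: LSv_closed)
  have "?y \<oplus>\<^bsub>At\<^esub> a = \<zero>\<^bsub>At\<^esub>"
    using a by (auto simp: At_add At_zero At_carrier_iff fun_eq_iff cring.cring_simprules[OF cring_LSv])
  then have "\<ominus>\<^bsub>At\<^esub> a = ?y" by (rule At.minus_equality[OF _ a yc])
  also have "\<dots> = (\<lambda>v. if v \<in> places then (\<lambda>i. \<ominus>\<^bsub>Qv v\<^esub> a v i) else \<zero>\<^bsub>LSv v\<^esub>)"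
    using a cring.ls_uminus[OF cring_Qv[OF is_absval_rat_absv]] unfolding At_carrier_iff LSv_def by auto
  finally show ?thesis .
qed

lemma cring_ratR: "cring ratR"
proof (rule cringI)
  show "abelian_group ratR"
    by (rule abelian_groupI) (auto simp: ratR_def intro: exI[of _ "- x" for x])
  show "comm_monoid ratR"
    by (rule comm_monoidI) (auto simp: ratR_def)
  show "\<And>x y z. x \<in> carrier ratR \<Longrightarrow> y \<in> carrier ratR \<Longrightarrow> z \<in> carrier ratR \<Longrightarrow>
     (x \<oplus>\<^bsub>ratR\<^esub> y) \<otimes>\<^bsub>ratR\<^esub> z = x \<otimes>\<^bsub>ratR\<^esub> z \<oplus>\<^bsub>ratR\<^esub> y \<otimes>\<^bsub>ratR\<^esub> z"
    by (simp add: ratR_def distrib_right)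
qed

lemma ratR_simps [simp]: "carrier ratR = UNIV" "mult ratR = (*)" "add ratR = (+)" "one ratR = 1" "zero ratR = 0"
  by (simp_all add: ratR_def)

lemma cring_QLS: "cring QLS"
  unfolding QLS_def by (rule cring.cring_ls_ring[OF cring_ratR])

lemma vrat_hom_cring: "v \<in> places \<Longrightarrow> ring_hom_cring ratR (Qv v) (vrat v)"
  by (intro ring_hom_cring.intro ring_hom_cring_axioms.intro cring_ratR cring_Qv is_absval_rat_absv vrat_hom)

lemma QLS_carrier: "carrier QLS = {f. \<exists>M. \<forall>i<M. f i = 0}"
  unfolding QLS_def ls_ring_def by simp

lemma QLS_zero: "\<zero>\<^bsub>QLS\<^esub> = (\<lambda>i. 0)" and QLS_one: "\<one>\<^bsub>QLS\<^esub> = (\<lambda>i. if i = 0 then 1 else 0)"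
  and QLS_add: "f \<oplus>\<^bsub>QLS\<^esub> g = (\<lambda>i. f i + g i)"
  unfolding QLS_def ls_ring_def by (simp_all cong del: if_cong)

lemma diagQ_mult:
  assumes f: "f \<in> carrier QLS" and g: "g \<in> carrier QLS"
  shows "diagQ (f \<otimes>\<^bsub>QLS\<^esub> g) = diagQ f \<otimes>\<^bsub>At\<^esub> diagQ g"
proof
  fix v show "diagQ (f \<otimes>\<^bsub>QLS\<^esub> g) v = (diagQ f \<otimes>\<^bsub>At\<^esub> diagQ g) v"
  proof (cases "v \<in> places")
    case True
    show ?thesis using ls_map_mult[OF vrat_hom_cring[OF True], of f g] f g True
      unfolding diagQ_def At_mult LSv_def QLS_def by simp
  qed (simp add: diagQ_def At_mult)
qed

lemma diagQ_add:
  assumes f: "f \<in> carrier QLS" and g: "g \<in> carrier QLS"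
  shows "diagQ (f \<oplus>\<^bsub>QLS\<^esub> g) = diagQ f \<oplus>\<^bsub>At\<^esub> diagQ g"
proof
  fix v show "diagQ (f \<oplus>\<^bsub>QLS\<^esub> g) v = (diagQ f \<oplus>\<^bsub>At\<^esub> diagQ g) v"
  proof (cases "v \<in> places")
    case True
    show ?thesis using ls_map_add[OF vrat_hom_cring[OF True], of f g] f g True
      unfolding diagQ_def At_add LSv_def QLS_def by simp
  qed (simp add: diagQ_def At_add)
qed

lemma diagQ_zero: "diagQ \<zero>\<^bsub>QLS\<^esub> = \<zero>\<^bsub>At\<^esub>"
  unfolding diagQ_def QLS_zero At_zero LSv_zero vrat_zero by auto

lemma diagQ_one: "diagQ \<one>\<^bsub>QLS\<^esub> = \<one>\<^bsub>At\<^esub>"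
  unfolding diagQ_def QLS_one At_one LSv_one by (simp add: fun_eq_iff vrat_zero vrat_one)

lemma diagQ_in_At:
  assumes f: "f \<in> carrier QLS" and fin: "finite {p. prime p \<and> \<not> (\<forall>i. vrat (Fin p) (f i) \<in> Zv (Fin p))}"
  shows "diagQ f \<in> carrier At"
proof -
  obtain M where M: "\<forall>i<M. f i = 0" using f unfolding QLS_carrier by auto
  have "v \<in> places \<Longrightarrow> (\<lambda>i. vrat v (f i)) \<in> carrier (LSv v)" for v
    unfolding LSv_def
  proof (rule cring.ls_carrierI[OF cring_Qv[OF is_absval_rat_absv], of v _ M])
    assume v: "v \<in> places"
    show "vrat v (f i) \<in> carrier (Qv v)" for i
      unfolding vrat_def by (rule vclass_in_Qv[OF is_absval_rat_absv[OF v] vcauchy_const[OF is_absval_rat_absv[OF v]]])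
    show "i < M \<Longrightarrow> vrat v (f i) = \<zero>\<^bsub>Qv v\<^esub>" for i using M by (simp add: vrat_zero)
  qed
  moreover have "nonintegral_primes (diagQ f) = {p. prime p \<and> \<not> (\<forall>i. vrat (Fin p) (f i) \<in> Zv (Fin p))}"
    unfolding nonintegral_primes_def diagQ_def using Fin_in_places by auto
  ultimately show ?thesis unfolding At_carrier_iff using fin by (auto simp: diagQ_def)
qed

lemma Qt_subset: "Qt \<subseteq> carrier QLS" unfolding Qt_def by auto

lemma Qt_mult: "f \<in> Qt \<Longrightarrow> g \<in> Qt \<Longrightarrow> f \<otimes>\<^bsub>QLS\<^esub> g \<in> Qt"
  unfolding Qt_def using diagQ_mult cring.ls_mult_closed[OF cring_ratR] QLS_def
    monoid.m_closed[OF cring.axioms(1)[OF cring_At, THEN ring.is_monoid]] by auto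

lemma Qt_add: "f \<in> Qt \<Longrightarrow> g \<in> Qt \<Longrightarrow> f \<oplus>\<^bsub>QLS\<^esub> g \<in> Qt"
proof -
  interpret At: cring At by (rule cring_At)
  show "f \<in> Qt \<Longrightarrow> g \<in> Qt \<Longrightarrow> f \<oplus>\<^bsub>QLS\<^esub> g \<in> Qt"
    unfolding Qt_def using diagQ_add cring.ls_add_closed[OF cring_ratR] QLS_def by auto
qed

lemma Qt_zero: "\<zero>\<^bsub>QLS\<^esub> \<in> Qt"
  unfolding Qt_def using diagQ_zero cring.ls_zero_closed[OF cring_ratR] cring.cring_simprules(2)[OF cring_At]
  by (simp add: QLS_def)

lemma At_plus_iff: "a \<in> At_plus \<longleftrightarrow> a \<in> carrier At \<and> (\<forall>v\<in>places. \<forall>i<0. a v i = \<zero>\<^bsub>Qv v\<^esub>)"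
  unfolding At_plus_def ps_carrier_def At_carrier_iff LSv_def by auto

lemma At_plus_subset: "At_plus \<subseteq> carrier At" unfolding At_plus_def by auto

lemma At_plus_add: "a \<in> At_plus \<Longrightarrow> b \<in> At_plus \<Longrightarrow> a \<oplus>\<^bsub>At\<^esub> b \<in> At_plus"
proof -
  interpret At: cring At by (rule cring_At)
  assume a: "a \<in> At_plus" and b: "b \<in> At_plus"
  have "a \<oplus>\<^bsub>At\<^esub> b \<in> carrier At" using a b At_plus_subset by auto
  moreover have "(a \<oplus>\<^bsub>At\<^esub> b) v i = \<zero>\<^bsub>Qv v\<^esub>" if v: "v \<in> places" and i: "i < 0" for v i
  proof -
    interpret Q: cring "Qv v" by (rule cring_Qv[OF is_absval_rat_absv[OF v]])
    have "a v i = \<zero>\<^bsub>Qv v\<^esub>" "b v i = \<zero>\<^bsub>Qv v\<^esub>" using a b v i unfolding At_plus_iff by auto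
    then show ?thesis using v by (simp add: At_add LSv_add)
  qed
  ultimately show ?thesis unfolding At_plus_iff by blast
qed

lemma At_plus_mult: "a \<in> At_plus \<Longrightarrow> b \<in> At_plus \<Longrightarrow> a \<otimes>\<^bsub>At\<^esub> b \<in> At_plus"
proof -
  interpret At: cring At by (rule cring_At)
  assume a: "a \<in> At_plus" and b: "b \<in> At_plus"
  have "a \<otimes>\<^bsub>At\<^esub> b \<in> carrier At" using a b At_plus_subset by auto
  moreover have "(a \<otimes>\<^bsub>At\<^esub> b) v \<in> ps_carrier (Qv v)" if v: "v \<in> places" for v
    using a b v unfolding At_plus_def LSv_def by (simp add: At_mult LSv_def cring.ps_mult_closed[OF cring_Qv[OF is_absval_rat_absv]])
  ultimately show ?thesis unfolding At_plus_def by blast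
qed

lemma At_plus_uminus: "a \<in> At_plus \<Longrightarrow> a_inv At a \<in> At_plus"
proof -
  interpret At: cring At by (rule cring_At)
  assume a: "a \<in> At_plus"
  then have ac: "a \<in> carrier At" using At_plus_subset by auto
  have "a_inv At a \<in> carrier At" using ac by simp
  moreover have "a_inv At a v i = \<zero>\<^bsub>Qv v\<^esub>" if v: "v \<in> places" and i: "i < 0" for v i
  proof -
    interpret Q: cring "Qv v" by (rule cring_Qv[OF is_absval_rat_absv[OF v]])
    have "a v i = \<zero>\<^bsub>Qv v\<^esub>" using a v i unfolding At_plus_iff by auto
    then show ?thesis using v by (simp add: At_uminus[OF ac])
  qed
  ultimately show ?thesis unfolding At_plus_iff by blast
qed

lemma At_plus_zero: "\<zero>\<^bsub>At\<^esub> \<in> At_plus"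
  using cring.cring_simprules(2)[OF cring_At] unfolding At_plus_iff by (simp add: At_zero LSv_zero)

lemma ps_carrier_ratR: "f \<in> ps_carrier ratR \<longleftrightarrow> f \<in> carrier QLS \<and> (\<forall>i<0. f i = 0)"
  unfolding ps_carrier_def QLS_def by simp

lemma diagQ_At_plus: "f \<in> Qt_plus \<Longrightarrow> diagQ f \<in> At_plus"
proof -
  assume f: "f \<in> Qt_plus"
  then have "diagQ f \<in> carrier At" and "f \<in> ps_carrier ratR" unfolding Qt_plus_def Qt_def by auto
  moreover from this(2) have f0: "\<forall>i<0. f i = 0" by (simp add: ps_carrier_ratR)
  moreover have "\<forall>v\<in>places. \<forall>i<0. diagQ f v i = \<zero>\<^bsub>Qv v\<^esub>" using f0 by (simp add: diagQ_def vrat_zero)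
  ultimately show ?thesis unfolding At_plus_iff by blast
qed

lemma Qt_plus_mult: "f \<in> Qt_plus \<Longrightarrow> g \<in> Qt_plus \<Longrightarrow> f \<otimes>\<^bsub>QLS\<^esub> g \<in> Qt_plus"
  unfolding Qt_plus_def QLS_def using Qt_mult[unfolded QLS_def] cring.ps_mult_closed[OF cring_ratR] by auto

lemma Qt_plus_add: "f \<in> Qt_plus \<Longrightarrow> g \<in> Qt_plus \<Longrightarrow> f \<oplus>\<^bsub>QLS\<^esub> g \<in> Qt_plus"
  unfolding Qt_plus_def QLS_def using Qt_add[unfolded QLS_def] cring.ps_add_closed[OF cring_ratR] by auto

lemma Qt_plus_zero: "\<zero>\<^bsub>QLS\<^esub> \<in> Qt_plus"
  unfolding Qt_plus_def QLS_def using Qt_zero cring.ps_zero[OF cring_ratR] unfolding QLS_def by auto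

lemma Qt_plus_subset: "Qt_plus \<subseteq> Qt" unfolding Qt_plus_def by auto

lemma QLS_mult_coeff:
  assumes f: "f \<in> carrier QLS" and g: "g \<in> carrier QLS" and A: "finite A"
    and z: "\<And>i. i \<notin> A \<Longrightarrow> f i = 0 \<or> g (k - i) = 0"
  shows "(f \<otimes>\<^bsub>QLS\<^esub> g) k = (\<Sum>i\<in>A. f i * g (k - i))"
proof -
  have "(f \<otimes>\<^bsub>QLS\<^esub> g) k = finsum ratR (\<lambda>i. f i \<otimes>\<^bsub>ratR\<^esub> g (k - i)) A"
    using cring.ls_mult_coeff[OF cring_ratR, of f g A] f g A z unfolding QLS_def by simp
  also have "\<dots> = (\<Sum>i\<in>A. f i * g (k - i))"
  proof -
    interpret Rr: cring ratR by (rule cring_ratR)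
    show ?thesis using A by (induction A rule: finite_induct) (simp_all add: Rr.finsum_insert)
  qed
  finally show ?thesis .
qed

lemma nonintegral_primes_diagQ: "nonintegral_primes (diagQ f) = {p. prime p \<and> \<not> (\<forall>i. vrat (Fin p) (f i) \<in> Zv (Fin p))}"
  unfolding nonintegral_primes_def diagQ_def using Fin_in_places by auto

lemma Zv_vrat_0_1: "prime p \<Longrightarrow> q = 0 \<or> q = 1 \<Longrightarrow> vrat (Fin p) q \<in> Zv (Fin p)"
  using Zv_vrat[of p q] absval_0[OF is_absval_Fin[of p]] absval_1[OF is_absval_Fin[of p]] by auto

lemma tpow_Qt: "tpow N \<in> Qt"
proof -
  have c: "tpow N \<in> carrier QLS" unfolding QLS_carrier mem_Collect_eq tpow_def by (intro exI[of _ N]) auto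
  have "{p. prime p \<and> \<not> (\<forall>i. vrat (Fin p) (tpow N i) \<in> Zv (Fin p))} = {}"
    using Zv_vrat_0_1 unfolding tpow_def by auto
  then have "finite {p. prime p \<and> \<not> (\<forall>i. vrat (Fin p) (tpow N i) \<in> Zv (Fin p))}" by (simp only: finite.emptyI)
  then show ?thesis unfolding Qt_def using diagQ_in_At[OF c] c by simp
qed

lemma tpow_1_Qt_plus: "tpow 1 \<in> Qt_plus"
proof -
  have "tpow 1 \<in> carrier QLS" using tpow_Qt Qt_subset by auto
  then have "tpow 1 \<in> ps_carrier ratR" by (simp add: ps_carrier_ratR tpow_def)
  then show ?thesis unfolding Qt_plus_def using tpow_Qt by simp
qed

lemma const_Qt_plus: "const_ls q \<in> Qt_plus"
proof -
  have c: "const_ls q \<in> carrier QLS" unfolding QLS_carrier mem_Collect_eq const_ls_def by (intro exI[of _ 0]) auto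
  have "{p. prime p \<and> \<not> (\<forall>i. vrat (Fin p) (const_ls q i) \<in> Zv (Fin p))} \<subseteq> {p. prime p \<and> 1 < rat_absv (Fin p) q}"
  proof
    fix p assume "p \<in> {p. prime p \<and> \<not> (\<forall>i. vrat (Fin p) (const_ls q i) \<in> Zv (Fin p))}"
    then obtain i where p: "prime p" and n: "vrat (Fin p) (const_ls q i) \<notin> Zv (Fin p)" by auto
    show "p \<in> {p. prime p \<and> 1 < rat_absv (Fin p) q}"
    proof (cases "i = 0")
      case True
      then have "\<not> rat_absv (Fin p) q \<le> 1" using n Zv_vrat[OF p] by (auto simp: const_ls_def)
      then show ?thesis using p by simp
    next
      case False then show ?thesis using n Zv_vrat_0_1[OF p] by (simp add: const_ls_def)
    qed
  qed
  then have "diagQ (const_ls q) \<in> carrier At" using diagQ_in_At[OF c] finite_primes_rat_absv_gt_1 finite_subset by blast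
  moreover have "const_ls q \<in> ps_carrier ratR" using c by (simp add: ps_carrier_ratR const_ls_def)
  ultimately show ?thesis unfolding Qt_plus_def Qt_def using c by simp
qed

lemma const_Qt: "const_ls q \<in> Qt" using const_Qt_plus Qt_plus_subset by auto

lemma const_ls_carrier: "const_ls q \<in> carrier QLS" using const_Qt Qt_subset by auto

lemma Adeles_subset_At_plus: "Adeles \<subseteq> At_plus"
proof
  fix a assume "a \<in> Adeles"
  then have "a \<in> carrier At" "\<forall>v\<in>places. \<forall>i<0. a v i = \<zero>\<^bsub>Qv v\<^esub>" unfolding Adeles_def by auto
  then show "a \<in> At_plus" unfolding At_plus_iff by blast
qed

lemma const_ls_mult: "const_ls (a * b) = const_ls a \<otimes>\<^bsub>QLS\<^esub> const_ls b"
proof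
  fix k
  have ca: "const_ls a \<in> carrier QLS" and cb: "const_ls b \<in> carrier QLS"
    using const_Qt_plus Qt_plus_subset Qt_subset by auto
  have "(const_ls a \<otimes>\<^bsub>QLS\<^esub> const_ls b) k = (\<Sum>i\<in>{0}. const_ls a i * const_ls b (k - i))"
    by (rule QLS_mult_coeff[OF ca cb]) (auto simp: const_ls_def)
  then show "const_ls (a * b) k = (const_ls a \<otimes>\<^bsub>QLS\<^esub> const_ls b) k" by (simp add: const_ls_def)
qed

lemma const_ls_add: "const_ls (a + b) = const_ls a \<oplus>\<^bsub>QLS\<^esub> const_ls b"
  by (auto simp: QLS_add const_ls_def)

lemma const_ls_0: "const_ls 0 = \<zero>\<^bsub>QLS\<^esub>"
  by (auto simp: QLS_zero const_ls_def)

lemma tpow_1_mult_coeff: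
  assumes g: "g \<in> carrier QLS"
  shows "(tpow 1 \<otimes>\<^bsub>QLS\<^esub> g) k = g (k - 1)"
proof -
  have c: "tpow 1 \<in> carrier QLS" using tpow_Qt Qt_subset by auto
  have "(tpow 1 \<otimes>\<^bsub>QLS\<^esub> g) k = (\<Sum>i\<in>{1}. tpow 1 i * g (k - i))"
    by (rule QLS_mult_coeff[OF c g]) (auto simp: tpow_def)
  then show ?thesis by (simp add: tpow_def)
qed

text \<open>For a power series \<open>f\<close>, \<open>div_t f = (f - f(0)) / t\<close>.\<close>

definition div_t :: "(int \<Rightarrow> rat) \<Rightarrow> (int \<Rightarrow> rat)" where
  "div_t f = (\<lambda>i. if i < 0 then 0 else f (i + 1))"

lemma div_t_Qt_plus:
  assumes f: "f \<in> Qt_plus" shows "div_t f \<in> Qt_plus"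
proof -
  have fq: "f \<in> Qt" using f Qt_plus_subset by auto
  have c: "div_t f \<in> carrier QLS" unfolding QLS_carrier mem_Collect_eq div_t_def by (intro exI[of _ 0]) auto
  have "{p. prime p \<and> \<not> (\<forall>i. vrat (Fin p) (div_t f i) \<in> Zv (Fin p))} \<subseteq> nonintegral_primes (diagQ f)"
    unfolding nonintegral_primes_diagQ div_t_def using Zv_vrat_0_1 by auto
  moreover have "finite (nonintegral_primes (diagQ f))" using fq unfolding Qt_def At_carrier_iff by auto
  ultimately have "diagQ (div_t f) \<in> carrier At" using diagQ_in_At[OF c] finite_subset by blast
  moreover have "div_t f \<in> ps_carrier ratR" using c by (simp add: ps_carrier_ratR div_t_def)
  ultimately show ?thesis unfolding Qt_plus_def Qt_def using c by simp
qed

lemma Qt_plus_decomp: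
  assumes f: "f \<in> Qt_plus"
  shows "f = const_ls (f 0) \<oplus>\<^bsub>QLS\<^esub> (tpow 1 \<otimes>\<^bsub>QLS\<^esub> div_t f)"
proof
  fix k
  have c: "div_t f \<in> carrier QLS" using div_t_Qt_plus[OF f] Qt_plus_subset Qt_subset by auto
  have "f \<in> ps_carrier ratR" using f unfolding Qt_plus_def by auto
  then have f0: "\<forall>i<0. f i = 0" by (simp add: ps_carrier_ratR)
  show "f k = (const_ls (f 0) \<oplus>\<^bsub>QLS\<^esub> (tpow 1 \<otimes>\<^bsub>QLS\<^esub> div_t f)) k"
    unfolding QLS_add tpow_1_mult_coeff[OF c] using f0 by (auto simp: const_ls_def div_t_def)
qed

lemma Qt_plus_mult_coeff_0: "f \<in> Qt_plus \<Longrightarrow> g \<in> Qt_plus \<Longrightarrow> (f \<otimes>\<^bsub>QLS\<^esub> g) 0 = f 0 * g 0"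
  using cring.ps_mult_coeff_0[OF cring_ratR, of f g] unfolding Qt_plus_def QLS_def by simp

section \<open>Matrices over a commutative ring\<close>

definition mat_ring :: "('a, 'm) ring_scheme \<Rightarrow> nat \<Rightarrow> (nat \<Rightarrow> nat \<Rightarrow> 'a) ring" where
  "mat_ring R n = \<lparr>carrier = mats R n (carrier R), mult = mmul R n, one = mone R n,
     zero = (\<lambda>i j. \<zero>\<^bsub>R\<^esub>), add = madd R n\<rparr>"

context cring begin

lemma finsum_in_subset:
  assumes S: "S \<subseteq> carrier R" "\<zero> \<in> S" "\<And>x y. x \<in> S \<Longrightarrow> y \<in> S \<Longrightarrow> x \<oplus> y \<in> S"
    and F: "\<And>i. i \<in> A \<Longrightarrow> F i \<in> S"
  shows "finsum R F A \<in> S"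
proof (cases "finite A")
  case True
  then show ?thesis using F
  proof (induction A rule: finite_induct)
    case empty then show ?case using S by simp
  next
    case (insert a A)
    have "finsum R F (insert a A) = F a \<oplus> finsum R F A"
      using insert S by (intro finsum_insert) auto
    then show ?case using insert S by auto
  qed
next
  case False then show ?thesis using S by simp
qed

lemma mats_iff: "A \<in> mats R n S \<longleftrightarrow> (\<forall>i j. i < n \<longrightarrow> j < n \<longrightarrow> A i j \<in> carrier R \<and> A i j \<in> S)
                  \<and> (\<forall>i j. \<not> (i < n \<and> j < n) \<longrightarrow> A i j = \<zero>)"
  unfolding mats_def by simp

lemma mats_closed: "A \<in> mats R n S \<Longrightarrow> i < n \<Longrightarrow> j < n \<Longrightarrow> A i j \<in> carrier R"
  and mats_member: "A \<in> mats R n S \<Longrightarrow> i < n \<Longrightarrow> j < n \<Longrightarrow> A i j \<in> S"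
  and mats_outside: "A \<in> mats R n S \<Longrightarrow> \<not> (i < n \<and> j < n) \<Longrightarrow> A i j = \<zero>"
  unfolding mats_def by auto

lemma mats_closed': assumes A: "A \<in> mats R n S" shows "A i j \<in> carrier R"
proof (cases "i < n \<and> j < n")
  case True then show ?thesis using mats_closed[OF A] by auto
next
  case False then have "A i j = \<zero>" by (intro mats_outside[OF A])
  then show ?thesis by simp
qed

lemma mats_carrier: "A \<in> mats R n S \<Longrightarrow> A \<in> mats R n (carrier R)"
  unfolding mats_def by auto

lemma mats_ext:
  assumes "A \<in> mats R n S" "B \<in> mats R n S'" "\<And>i j. i < n \<Longrightarrow> j < n \<Longrightarrow> A i j = B i j"
  shows "A = B"
proof (intro ext)
  fix i j show "A i j = B i j"
    using assms mats_outside[OF assms(1)] mats_outside[OF assms(2)] by (cases "i < n \<and> j < n") auto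
qed

lemma mmul_outside: "\<not> (i < n \<and> j < n) \<Longrightarrow> mmul R n A B i j = \<zero>"
  by (auto simp: mmul_def)

lemma madd_outside: "\<not> (i < n \<and> j < n) \<Longrightarrow> madd R n A B i j = \<zero>"
  by (auto simp: madd_def)

lemma mmul_mats:
  assumes S: "S \<subseteq> carrier R" "\<zero> \<in> S" "\<And>x y. x \<in> S \<Longrightarrow> y \<in> S \<Longrightarrow> x \<oplus> y \<in> S"
     "\<And>x y. x \<in> S \<Longrightarrow> y \<in> S \<Longrightarrow> x \<otimes> y \<in> S"
    and A: "A \<in> mats R n S" and B: "B \<in> mats R n S"
  shows "mmul R n A B \<in> mats R n S"
  unfolding mats_iff mmul_def
  using S A B by (auto intro!: finsum_in_subset[OF S(1-3)] finsum_closed simp: mats_closed mats_member)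

lemma madd_mats:
  assumes S: "\<And>x y. x \<in> S \<Longrightarrow> y \<in> S \<Longrightarrow> x \<oplus> y \<in> S"
    and A: "A \<in> mats R n S" and B: "B \<in> mats R n S"
  shows "madd R n A B \<in> mats R n S"
  unfolding mats_iff madd_def using S A B by (auto simp: mats_closed mats_member)

lemma msmul_mats:
  assumes S: "\<And>x y. x \<in> S \<Longrightarrow> y \<in> S \<Longrightarrow> x \<otimes> y \<in> S" and c: "c \<in> S" "c \<in> carrier R"
    and A: "A \<in> mats R n S"
  shows "msmul R n c A \<in> mats R n S"
  unfolding mats_iff msmul_def using S A c by (auto simp: mats_closed mats_member)

lemma mone_mats:
  assumes "\<zero> \<in> S" "\<one> \<in> S" shows "mone R n \<in> mats R n S"
  unfolding mats_iff mone_def using assms by auto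

lemma finsum_delta:
  assumes "i < (n::nat)" "\<And>k. k < n \<Longrightarrow> F k \<in> carrier R"
  shows "(\<Oplus>k\<in>{..<n}. if i = k then F k else \<zero>) = F i"
  by (rule add.finprod_singleton) (use assms in auto)

lemma finsum_delta':
  assumes "i < (n::nat)" "\<And>k. k < n \<Longrightarrow> F k \<in> carrier R"
  shows "(\<Oplus>k\<in>{..<n}. if k = i then F k else \<zero>) = F i"
  using finsum_delta[OF assms] by (simp add: eq_commute)

lemma mmul_closed:
  "A \<in> mats R n (carrier R) \<Longrightarrow> B \<in> mats R n (carrier R) \<Longrightarrow> mmul R n A B \<in> mats R n (carrier R)"
  by (rule mmul_mats) auto

lemma mmul_assoc:
  assumes x: "x \<in> mats R n (carrier R)" and y: "y \<in> mats R n (carrier R)" and z: "z \<in> mats R n (carrier R)"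
  shows "mmul R n (mmul R n x y) z = mmul R n x (mmul R n y z)"
proof (intro ext)
  fix i j show "mmul R n (mmul R n x y) z i j = mmul R n x (mmul R n y z) i j"
  proof (cases "i < n \<and> j < n")
    case True
    have "mmul R n (mmul R n x y) z i j = (\<Oplus>k\<in>{..<n}. (\<Oplus>l\<in>{..<n}. x i l \<otimes> y l k) \<otimes> z k j)"
      using True x y z by (auto simp: mmul_def mats_closed intro!: finsum_cong' finsum_closed)
    also have "\<dots> = (\<Oplus>k\<in>{..<n}. \<Oplus>l\<in>{..<n}. x i l \<otimes> y l k \<otimes> z k j)"
      using x y z True by (intro finsum_cong') (auto simp: mats_closed finsum_ldistr)
    also have "\<dots> = (\<Oplus>l\<in>{..<n}. \<Oplus>k\<in>{..<n}. x i l \<otimes> y l k \<otimes> z k j)"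
      by (rule finsum_swap) (use x y z True in \<open>auto simp: mats_closed\<close>)
    also have "\<dots> = (\<Oplus>l\<in>{..<n}. x i l \<otimes> (\<Oplus>k\<in>{..<n}. y l k \<otimes> z k j))"
      using x y z True by (intro finsum_cong') (auto simp: mats_closed finsum_rdistr m_assoc intro!: finsum_cong')
    also have "\<dots> = mmul R n x (mmul R n y z) i j"
      using True x y z by (auto simp: mmul_def mats_closed intro!: finsum_cong' finsum_closed)
    finally show ?thesis .
  qed (simp add: mmul_outside)
qed

lemma mmul_mone_left:
  assumes x: "x \<in> mats R n (carrier R)"
  shows "mmul R n (mone R n) x = x"
proof (intro ext)
  fix i j show "mmul R n (mone R n) x i j = x i j"
  proof (cases "i < n \<and> j < n")
    case True
    have "mmul R n (mone R n) x i j = (\<Oplus>k\<in>{..<n}. if i = k then x k j else \<zero>)"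
      using True x by (auto simp: mmul_def mone_def mats_closed intro!: finsum_cong')
    also have "\<dots> = x i j" using True x by (intro finsum_delta) (auto simp: mats_closed)
    finally show ?thesis .
  qed (use x in \<open>auto simp: mmul_def mats_outside\<close>)
qed

lemma mmul_mone_right:
  assumes x: "x \<in> mats R n (carrier R)"
  shows "mmul R n x (mone R n) = x"
proof (intro ext)
  fix i j show "mmul R n x (mone R n) i j = x i j"
  proof (cases "i < n \<and> j < n")
    case True
    have "mmul R n x (mone R n) i j = (\<Oplus>k\<in>{..<n}. if k = j then x i k else \<zero>)"
      using True x by (auto simp: mmul_def mone_def mats_closed intro!: finsum_cong')
    also have "\<dots> = x i j" using True x by (intro finsum_delta') (auto simp: mats_closed)
    finally show ?thesis .
  qed (use x in \<open>auto simp: mmul_def mats_outside\<close>)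
qed

lemma mmul_madd_distrib_right:
  assumes x: "x \<in> mats R n (carrier R)" and y: "y \<in> mats R n (carrier R)" and z: "z \<in> mats R n (carrier R)"
  shows "mmul R n (madd R n x y) z = madd R n (mmul R n x z) (mmul R n y z)"
proof (intro ext)
  fix i j show "mmul R n (madd R n x y) z i j = madd R n (mmul R n x z) (mmul R n y z) i j"
  proof (cases "i < n \<and> j < n")
    case True
    have "mmul R n (madd R n x y) z i j = (\<Oplus>k\<in>{..<n}. madd R n x y i k \<otimes> z k j)"
      using True by (simp add: mmul_def[of R n "madd R n x y" z])
    also have "\<dots> = (\<Oplus>k\<in>{..<n}. x i k \<otimes> z k j \<oplus> y i k \<otimes> z k j)"
      using True x y z by (intro finsum_cong') (auto simp: madd_def mats_closed l_distr)
    also have "\<dots> = madd R n (mmul R n x z) (mmul R n y z) i j"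
      using True x y z by (auto simp: madd_def mmul_def mats_closed intro!: finsum_addf)
    finally show ?thesis .
  qed (simp add: mmul_outside madd_outside)
qed

lemma mmul_madd_distrib_left:
  assumes x: "x \<in> mats R n (carrier R)" and y: "y \<in> mats R n (carrier R)" and z: "z \<in> mats R n (carrier R)"
  shows "mmul R n z (madd R n x y) = madd R n (mmul R n z x) (mmul R n z y)"
proof (intro ext)
  fix i j show "mmul R n z (madd R n x y) i j = madd R n (mmul R n z x) (mmul R n z y) i j"
  proof (cases "i < n \<and> j < n")
    case True
    have "mmul R n z (madd R n x y) i j = (\<Oplus>k\<in>{..<n}. z i k \<otimes> madd R n x y k j)"
      using True by (simp add: mmul_def[of R n z "madd R n x y"])
    also have "\<dots> = (\<Oplus>k\<in>{..<n}. z i k \<otimes> x k j \<oplus> z i k \<otimes> y k j)"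
      using True x y z by (intro finsum_cong') (auto simp: madd_def mats_closed r_distr)
    also have "\<dots> = madd R n (mmul R n z x) (mmul R n z y) i j"
      using True x y z by (auto simp: madd_def mmul_def mats_closed intro!: finsum_addf)
    finally show ?thesis .
  qed (simp add: mmul_outside madd_outside)
qed

lemma ring_mat_ring: "ring (mat_ring R n)"
proof (rule ringI)
  show "abelian_group (mat_ring R n)"
  proof (rule abelian_groupI)
    fix x y z assume "x \<in> carrier (mat_ring R n)" "y \<in> carrier (mat_ring R n)" "z \<in> carrier (mat_ring R n)"
    then have x: "x \<in> mats R n (carrier R)" and y: "y \<in> mats R n (carrier R)" and z: "z \<in> mats R n (carrier R)"
      unfolding mat_ring_def by auto
    show "x \<oplus>\<^bsub>mat_ring R n\<^esub> y \<in> carrier (mat_ring R n)"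
      unfolding mat_ring_def using madd_mats[OF _ x y] by simp
    show "x \<oplus>\<^bsub>mat_ring R n\<^esub> y \<oplus>\<^bsub>mat_ring R n\<^esub> z = x \<oplus>\<^bsub>mat_ring R n\<^esub> (y \<oplus>\<^bsub>mat_ring R n\<^esub> z)"
      unfolding mat_ring_def using x y z by (auto simp: madd_def fun_eq_iff mats_closed a_assoc)
    show "x \<oplus>\<^bsub>mat_ring R n\<^esub> y = y \<oplus>\<^bsub>mat_ring R n\<^esub> x"
      unfolding mat_ring_def using x y by (auto simp: madd_def fun_eq_iff mats_closed a_comm)
    show "\<zero>\<^bsub>mat_ring R n\<^esub> \<oplus>\<^bsub>mat_ring R n\<^esub> x = x"
      unfolding mat_ring_def using x by (auto simp: madd_def fun_eq_iff mats_closed mats_outside)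
    let ?y = "\<lambda>i j. if i < n \<and> j < n then \<ominus> x i j else \<zero>"
    have "?y \<in> mats R n (carrier R)" unfolding mats_iff using mats_closed[OF x] by simp
    then show "\<exists>y\<in>carrier (mat_ring R n). y \<oplus>\<^bsub>mat_ring R n\<^esub> x = \<zero>\<^bsub>mat_ring R n\<^esub>"
      unfolding mat_ring_def using x by (intro bexI[of _ ?y]) (auto simp: madd_def fun_eq_iff mats_closed l_neg)
  qed (simp add: mat_ring_def mats_iff)
  show "monoid (mat_ring R n)"
    by (rule monoidI) (auto simp: mat_ring_def mmul_assoc mmul_mone_left mmul_mone_right intro: mmul_mats mone_mats)
  show "(x \<oplus>\<^bsub>mat_ring R n\<^esub> y) \<otimes>\<^bsub>mat_ring R n\<^esub> z = x \<otimes>\<^bsub>mat_ring R n\<^esub> z \<oplus>\<^bsub>mat_ring R n\<^esub> y \<otimes>\<^bsub>mat_ring R n\<^esub> z"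
    and "z \<otimes>\<^bsub>mat_ring R n\<^esub> (x \<oplus>\<^bsub>mat_ring R n\<^esub> y) = z \<otimes>\<^bsub>mat_ring R n\<^esub> x \<oplus>\<^bsub>mat_ring R n\<^esub> z \<otimes>\<^bsub>mat_ring R n\<^esub> y"
    if "x \<in> carrier (mat_ring R n)" "y \<in> carrier (mat_ring R n)" "z \<in> carrier (mat_ring R n)" for x y z
    using that by (simp_all add: mat_ring_def mmul_madd_distrib_left mmul_madd_distrib_right)
qed

lemma mat_ring_simps: "carrier (mat_ring R n) = mats R n (carrier R)" "mult (mat_ring R n) = mmul R n"
  "add (mat_ring R n) = madd R n" "one (mat_ring R n) = mone R n" "zero (mat_ring R n) = (\<lambda>i j. \<zero>)"
  unfolding mat_ring_def by simp_all

lemma mat_ring_uminus: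
  assumes B: "B \<in> mats R n (carrier R)"
  shows "a_inv (mat_ring R n) B = (\<lambda>i j. if i < n \<and> j < n then \<ominus> B i j else \<zero>)"
proof -
  interpret M: ring "mat_ring R n" by (rule ring_mat_ring)
  let ?y = "\<lambda>i j. if i < n \<and> j < n then \<ominus> B i j else \<zero>"
  have yc: "?y \<in> carrier (mat_ring R n)" unfolding mat_ring_simps mats_iff using mats_closed[OF B] by simp
  have "?y \<oplus>\<^bsub>mat_ring R n\<^esub> B = \<zero>\<^bsub>mat_ring R n\<^esub>"
    unfolding mat_ring_simps using B by (auto simp: madd_def fun_eq_iff mats_closed l_neg)
  then show ?thesis by (rule M.minus_equality) (use B yc in \<open>simp_all add: mat_ring_simps\<close>)
qed

lemma gl_eq_Units: "gl R n (carrier R) = Units (mat_ring R n)"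
  unfolding gl_def Units_def mat_ring_simps by auto

lemma msub_eq_minus:
  assumes A: "A \<in> mats R n (carrier R)" and B: "B \<in> mats R n (carrier R)"
  shows "msub R n A B = a_minus (mat_ring R n) A B"
  unfolding a_minus_def mat_ring_uminus[OF B] mat_ring_simps
  by (auto simp: msub_def madd_def fun_eq_iff mats_closed minus_eq)

lemma msmul_outside: "\<not> (i < n \<and> j < n) \<Longrightarrow> msmul R n c A i j = \<zero>"
  by (auto simp: msmul_def)

definition scalar_mat :: "nat \<Rightarrow> 'a \<Rightarrow> nat \<Rightarrow> nat \<Rightarrow> 'a" where
  "scalar_mat n c = msmul R n c (mone R n)"

lemma scalar_mat_mats: "c \<in> carrier R \<Longrightarrow> c \<in> S \<Longrightarrow> \<zero> \<in> S \<Longrightarrow> scalar_mat n c \<in> mats R n S"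
  unfolding scalar_mat_def mats_iff msmul_def mone_def by auto

lemma msmul_eq_scalar_mat_left:
  assumes c: "c \<in> carrier R" and A: "A \<in> mats R n S"
  shows "msmul R n c A = mmul R n (scalar_mat n c) A"
proof (intro ext)
  fix i j show "msmul R n c A i j = mmul R n (scalar_mat n c) A i j"
  proof (cases "i < n \<and> j < n")
    case True
    have "mmul R n (scalar_mat n c) A i j = (\<Oplus>k\<in>{..<n}. if i = k then c \<otimes> A k j else \<zero>)"
      using True c mats_closed'[OF A] by (auto simp: mmul_def scalar_mat_def msmul_def mone_def intro!: finsum_cong')
    also have "\<dots> = c \<otimes> A i j" using True c mats_closed'[OF A] by (intro finsum_delta) auto
    finally show ?thesis using True by (simp add: msmul_def)
  qed (simp add: msmul_outside mmul_outside)
qed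

lemma msmul_eq_scalar_mat_right:
  assumes c: "c \<in> carrier R" and A: "A \<in> mats R n S"
  shows "msmul R n c A = mmul R n A (scalar_mat n c)"
proof (intro ext)
  fix i j show "msmul R n c A i j = mmul R n A (scalar_mat n c) i j"
  proof (cases "i < n \<and> j < n")
    case True
    have "mmul R n A (scalar_mat n c) i j = (\<Oplus>k\<in>{..<n}. if k = j then c \<otimes> A i k else \<zero>)"
      using True c mats_closed'[OF A] by (auto simp: mmul_def scalar_mat_def msmul_def mone_def m_comm intro!: finsum_cong')
    also have "\<dots> = c \<otimes> A i j" using True c mats_closed'[OF A] by (intro finsum_delta') auto
    finally show ?thesis using True by (simp add: msmul_def)
  qed (simp add: msmul_outside mmul_outside)
qed

lemma scalar_mat_comm:
  assumes c: "c \<in> carrier R" and A: "A \<in> mats R n S"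
  shows "mmul R n (scalar_mat n c) A = mmul R n A (scalar_mat n c)"
  using msmul_eq_scalar_mat_left[OF c A] msmul_eq_scalar_mat_right[OF c A] by simp

end

lemma mmap_outside: "\<not> (i < n \<and> j < n) \<Longrightarrow> mmap z n f A i j = z"
  by (auto simp: mmap_def)

locale subring_hom = R?: cring R + S?: cring S for R (structure) and S (structure) +
  fixes h Sub
  assumes Sub_subset: "Sub \<subseteq> carrier R" and Sub_zero: "\<zero>\<^bsub>R\<^esub> \<in> Sub"
    and Sub_add: "x \<in> Sub \<Longrightarrow> y \<in> Sub \<Longrightarrow> x \<oplus>\<^bsub>R\<^esub> y \<in> Sub"
    and Sub_mult: "x \<in> Sub \<Longrightarrow> y \<in> Sub \<Longrightarrow> x \<otimes>\<^bsub>R\<^esub> y \<in> Sub"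
    and h_closed: "x \<in> Sub \<Longrightarrow> h x \<in> carrier S"
    and h_add: "x \<in> Sub \<Longrightarrow> y \<in> Sub \<Longrightarrow> h (x \<oplus>\<^bsub>R\<^esub> y) = h x \<oplus>\<^bsub>S\<^esub> h y"
    and h_mult: "x \<in> Sub \<Longrightarrow> y \<in> Sub \<Longrightarrow> h (x \<otimes>\<^bsub>R\<^esub> y) = h x \<otimes>\<^bsub>S\<^esub> h y"
    and h_zero: "h \<zero>\<^bsub>R\<^esub> = \<zero>\<^bsub>S\<^esub>"
begin

lemma h_finsum:
  assumes K: "finite K" and F: "\<And>k. k \<in> K \<Longrightarrow> F k \<in> Sub"
  shows "h (finsum R F K) = finsum S (\<lambda>k. h (F k)) K"
  using K F
proof (induction K rule: finite_induct)
  case empty then show ?case using h_zero by simp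
next
  case (insert a K)
  have FK: "finsum R F K \<in> Sub" using insert Sub_subset Sub_zero Sub_add by (intro R.finsum_in_subset) auto
  have "finsum R F (insert a K) = F a \<oplus>\<^bsub>R\<^esub> finsum R F K"
    using insert Sub_subset by (intro R.finsum_insert) auto
  then have "h (finsum R F (insert a K)) = h (F a) \<oplus>\<^bsub>S\<^esub> h (finsum R F K)"
    using h_add insert FK by simp
  also have "\<dots> = h (F a) \<oplus>\<^bsub>S\<^esub> finsum S (\<lambda>k. h (F k)) K" using insert by simp
  also have "\<dots> = finsum S (\<lambda>k. h (F k)) (insert a K)"
    using insert h_closed by (intro S.finsum_insert[symmetric]) auto
  finally show ?case .
qed

lemma mmap_mats: "A \<in> mats R n Sub \<Longrightarrow> h ` Sub \<subseteq> T \<Longrightarrow> mmap \<zero>\<^bsub>S\<^esub> n h A \<in> mats S n T"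
  unfolding mats_def mmap_def using h_closed by auto

lemma mmap_mmul:
  assumes A: "A \<in> mats R n Sub" and B: "B \<in> mats R n Sub"
  shows "mmap \<zero>\<^bsub>S\<^esub> n h (mmul R n A B) = mmul S n (mmap \<zero>\<^bsub>S\<^esub> n h A) (mmap \<zero>\<^bsub>S\<^esub> n h B)"
proof (intro ext)
  fix i j show "mmap \<zero>\<^bsub>S\<^esub> n h (mmul R n A B) i j = mmul S n (mmap \<zero>\<^bsub>S\<^esub> n h A) (mmap \<zero>\<^bsub>S\<^esub> n h B) i j"
  proof (cases "i < n \<and> j < n")
    case True
    have "mmap \<zero>\<^bsub>S\<^esub> n h (mmul R n A B) i j = h (\<Oplus>\<^bsub>R\<^esub>k\<in>{..<n}. A i k \<otimes>\<^bsub>R\<^esub> B k j)"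
      using True by (simp add: mmap_def mmul_def)
    also have "\<dots> = (\<Oplus>\<^bsub>S\<^esub>k\<in>{..<n}. h (A i k \<otimes>\<^bsub>R\<^esub> B k j))"
      using True A B by (intro h_finsum) (auto intro: Sub_mult R.mats_member)
    also have "\<dots> = (\<Oplus>\<^bsub>S\<^esub>k\<in>{..<n}. h (A i k) \<otimes>\<^bsub>S\<^esub> h (B k j))"
      using True A B h_closed by (intro S.finsum_cong') (auto simp: h_mult R.mats_member)
    also have "\<dots> = (\<Oplus>\<^bsub>S\<^esub>k\<in>{..<n}. mmap \<zero>\<^bsub>S\<^esub> n h A i k \<otimes>\<^bsub>S\<^esub> mmap \<zero>\<^bsub>S\<^esub> n h B k j)"
      using True A B h_closed by (intro S.finsum_cong') (auto simp: mmap_def R.mats_member)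
    also have "\<dots> = mmul S n (mmap \<zero>\<^bsub>S\<^esub> n h A) (mmap \<zero>\<^bsub>S\<^esub> n h B) i j"
      using True by (simp add: mmul_def[of S n "mmap \<zero>\<^bsub>S\<^esub> n h A" "mmap \<zero>\<^bsub>S\<^esub> n h B"])
    finally show ?thesis .
  qed (simp add: mmap_outside S.mmul_outside)
qed

lemma mmap_madd:
  assumes A: "A \<in> mats R n Sub" and B: "B \<in> mats R n Sub"
  shows "mmap \<zero>\<^bsub>S\<^esub> n h (madd R n A B) = madd S n (mmap \<zero>\<^bsub>S\<^esub> n h A) (mmap \<zero>\<^bsub>S\<^esub> n h B)"
  using A B by (auto simp: fun_eq_iff mmap_def madd_def h_add R.mats_member)

lemma mmap_msmul:
  assumes c: "c \<in> Sub" and A: "A \<in> mats R n Sub"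
  shows "mmap \<zero>\<^bsub>S\<^esub> n h (msmul R n c A) = msmul S n (h c) (mmap \<zero>\<^bsub>S\<^esub> n h A)"
  using c A by (auto simp: fun_eq_iff mmap_def msmul_def h_mult R.mats_member)

lemma mmap_mone:
  assumes "h \<one>\<^bsub>R\<^esub> = \<one>\<^bsub>S\<^esub>"
  shows "mmap \<zero>\<^bsub>S\<^esub> n h (mone R n) = mone S n"
  using assms h_zero by (auto simp: fun_eq_iff mmap_def mone_def)

end

lemma mats_mono: "S \<subseteq> S' \<Longrightarrow> mats R n S \<subseteq> mats R n S'"
  unfolding mats_def by blast

section \<open>The lattice condition in an abstract ring\<close>

locale lattice_condition = ring M for M (structure) +
  fixes P and t and tN
  assumes P_subset: "P \<subseteq> carrier M"
    and P_add: "x \<in> P \<Longrightarrow> y \<in> P \<Longrightarrow> x \<oplus> y \<in> P"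
    and P_mult: "x \<in> P \<Longrightarrow> y \<in> P \<Longrightarrow> x \<otimes> y \<in> P"
    and P_uminus: "x \<in> P \<Longrightarrow> \<ominus> x \<in> P"
    and t_in_P: "t \<in> P" and tN_closed: "tN \<in> carrier M"
    and t_central: "x \<in> carrier M \<Longrightarrow> t \<otimes> x = x \<otimes> t"
    and tN_central: "x \<in> carrier M \<Longrightarrow> tN \<otimes> x = x \<otimes> tN"
begin

definition defect_lattice :: "'a \<Rightarrow> 'a set" where
  "defect_lattice R = {R \<otimes> (t \<otimes> X) \<oplus> tN \<otimes> Y | X Y. X \<in> P \<and> Y \<in> P}"

definition stabilised :: "'a \<Rightarrow> 'a set \<Rightarrow> bool" where
  "stabilised R U \<longleftrightarrow> (\<forall>u\<in>U. R \<otimes> u \<ominus> R \<in> defect_lattice R)"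

lemma P_closed: "x \<in> P \<Longrightarrow> x \<in> carrier M"
  using P_subset by auto

lemma P_minus: "x \<in> P \<Longrightarrow> y \<in> P \<Longrightarrow> x \<ominus> y \<in> P"
  unfolding minus_eq using P_add P_uminus by auto

lemma t_closed: "t \<in> carrier M"
  using P_closed[OF t_in_P] .

lemma stabilised_mult_left:
  assumes R: "R \<in> carrier M" and G: "G \<in> P" and U: "U \<subseteq> carrier M" and S: "stabilised R U"
  shows "stabilised (G \<otimes> R) U"
  unfolding stabilised_def
proof
  fix u assume u: "u \<in> U"
  then have uc: "u \<in> carrier M" using U by auto
  obtain X Y where XY: "X \<in> P" "Y \<in> P" and h: "R \<otimes> u \<ominus> R = R \<otimes> (t \<otimes> X) \<oplus> tN \<otimes> Y"
    using S u unfolding stabilised_def defect_lattice_def by blast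
  have Gc: "G \<in> carrier M" using P_closed[OF G] .
  have Xc: "X \<in> carrier M" and Yc: "Y \<in> carrier M" using P_closed XY by auto
  have "G \<otimes> R \<otimes> u \<ominus> G \<otimes> R = G \<otimes> (R \<otimes> u \<ominus> R)"
    using R Gc uc by (simp add: ring_simprules)
  also have "\<dots> = G \<otimes> (R \<otimes> (t \<otimes> X) \<oplus> tN \<otimes> Y)" by (simp only: h)
  also have "\<dots> = G \<otimes> R \<otimes> (t \<otimes> X) \<oplus> G \<otimes> (tN \<otimes> Y)"
    using R Gc Xc Yc t_closed tN_closed by (simp add: ring_simprules)
  also have "G \<otimes> (tN \<otimes> Y) = tN \<otimes> (G \<otimes> Y)"
    using tN_central[OF Gc] Gc Yc tN_closed by (metis m_assoc)
  finally show "G \<otimes> R \<otimes> u \<ominus> G \<otimes> R \<in> defect_lattice (G \<otimes> R)"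
    unfolding defect_lattice_def using XY G P_mult by blast
qed

lemma stabilised_mult_left_iff:
  assumes R: "R \<in> carrier M" and G: "G \<in> P" and Gi: "Gi \<in> P" and inv: "Gi \<otimes> G = \<one>"
    and U: "U \<subseteq> carrier M"
  shows "stabilised (G \<otimes> R) U \<longleftrightarrow> stabilised R U"
proof
  assume "stabilised (G \<otimes> R) U"
  then have "stabilised (Gi \<otimes> (G \<otimes> R)) U"
    using R P_closed[OF G] by (intro stabilised_mult_left[OF _ Gi U]) auto
  moreover have "Gi \<otimes> (G \<otimes> R) = R"
    using R P_closed[OF G] P_closed[OF Gi] inv by (simp flip: m_assoc)
  ultimately show "stabilised R U" by simp
qed (rule stabilised_mult_left[OF R G U])

lemma stabilised_add:
  assumes R: "R \<in> carrier M" and A: "A \<in> P" and U: "U \<subseteq> P" and S: "stabilised R U"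
  shows "stabilised (R \<oplus> tN \<otimes> A) U"
  unfolding stabilised_def
proof
  fix u assume u: "u \<in> U"
  then have uP: "u \<in> P" and uc: "u \<in> carrier M" using U P_closed by auto
  obtain X Y where XY: "X \<in> P" "Y \<in> P" and h: "R \<otimes> u \<ominus> R = R \<otimes> (t \<otimes> X) \<oplus> tN \<otimes> Y"
    using S u unfolding stabilised_def defect_lattice_def by blast
  have Ac: "A \<in> carrier M" using P_closed[OF A] .
  have Xc: "X \<in> carrier M" and Yc: "Y \<in> carrier M" using P_closed XY by auto
  let ?R = "R \<oplus> tN \<otimes> A"
  let ?Y = "Y \<oplus> A \<otimes> u \<ominus> A \<ominus> A \<otimes> (t \<otimes> X)"
  have "?R \<otimes> u \<ominus> ?R = (R \<otimes> u \<ominus> R) \<oplus> (tN \<otimes> A \<otimes> u \<ominus> tN \<otimes> A)"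
    using R Ac uc tN_closed by (simp add: ring_simprules)
  also have "\<dots> = (R \<otimes> (t \<otimes> X) \<oplus> tN \<otimes> Y) \<oplus> (tN \<otimes> A \<otimes> u \<ominus> tN \<otimes> A)" by (simp only: h)
  also have "\<dots> = ?R \<otimes> (t \<otimes> X) \<oplus> tN \<otimes> ?Y"
    using R Ac uc Xc Yc t_closed tN_closed by (simp add: ring_simprules)
  finally have e: "?R \<otimes> u \<ominus> ?R = ?R \<otimes> (t \<otimes> X) \<oplus> tN \<otimes> ?Y" .
  have "?Y \<in> P" using XY A uP t_in_P by (intro P_minus P_add P_mult)
  then show "?R \<otimes> u \<ominus> ?R \<in> defect_lattice ?R"
    unfolding defect_lattice_def using XY e by blast
qed

lemma stabilised_add_iff:
  assumes R: "R \<in> carrier M" and A: "A \<in> P" and U: "U \<subseteq> P"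
  shows "stabilised (R \<oplus> tN \<otimes> A) U \<longleftrightarrow> stabilised R U"
proof
  assume "stabilised (R \<oplus> tN \<otimes> A) U"
  then have "stabilised (R \<oplus> tN \<otimes> A \<oplus> tN \<otimes> (\<ominus> A)) U"
    using R P_closed[OF A] tN_closed by (intro stabilised_add[OF _ P_uminus[OF A] U]) auto
  moreover have "R \<oplus> tN \<otimes> A \<oplus> tN \<otimes> (\<ominus> A) = R"
    using R P_closed[OF A] tN_closed r_neg[of "tN \<otimes> A"] by (simp add: r_minus a_assoc)
  ultimately show "stabilised R U" by simp
qed (rule stabilised_add[OF R A U])

lemma mult_t_right_inverse:
  assumes R: "R \<in> carrier M" and G: "G \<in> carrier M" and Gi: "Gi \<in> carrier M" and Z: "Z \<in> carrier M"
    and inv: "G \<otimes> Gi = \<one>"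
  shows "R \<otimes> (t \<otimes> Z) = R \<otimes> G \<otimes> (t \<otimes> (Gi \<otimes> Z))"
proof -
  have "R \<otimes> G \<otimes> (t \<otimes> (Gi \<otimes> Z)) = R \<otimes> ((G \<otimes> t) \<otimes> (Gi \<otimes> Z))"
    using R G Gi Z t_closed by (simp add: m_assoc)
  also have "G \<otimes> t = t \<otimes> G" using t_central[OF G] by simp
  also have "R \<otimes> ((t \<otimes> G) \<otimes> (Gi \<otimes> Z)) = R \<otimes> (t \<otimes> ((G \<otimes> Gi) \<otimes> Z))"
    using R G Gi Z t_closed by (simp add: m_assoc)
  finally show ?thesis using inv Z by simp
qed

text \<open>Writing \<open>G = G\<^sub>0 + t H\<close> with \<open>G\<^sub>0 u = u' G\<^sub>0\<close>, one has
  \<open>R G u - R G = (R u' - R) G\<^sub>0 + R t (H u - H)\<close>; the factor \<open>R\<close> in front of \<open>t\<close> is rewritten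
  as \<open>R G G\<^sup>-\<^sup>1\<close> to land in the defect lattice of \<open>R G\<close>.\<close>

lemma stabilised_mult_right:
  assumes R: "R \<in> carrier M" and G0: "G0 \<in> P" and H: "H \<in> P" and Gi: "Gi \<in> P"
    and GGi: "(G0 \<oplus> t \<otimes> H) \<otimes> Gi = \<one>"
    and U: "U \<subseteq> carrier M" and U': "U' \<subseteq> P"
    and conj: "\<And>u. u \<in> U' \<Longrightarrow> \<exists>u'\<in>U. G0 \<otimes> u = u' \<otimes> G0"
    and S: "stabilised R U"
  shows "stabilised (R \<otimes> (G0 \<oplus> t \<otimes> H)) U'"
  unfolding stabilised_def
proof
  fix u assume u: "u \<in> U'"
  then have uP: "u \<in> P" using U' by auto
  then have uc: "u \<in> carrier M" using P_closed by auto
  obtain u' where u': "u' \<in> U" and cj: "G0 \<otimes> u = u' \<otimes> G0" using conj[OF u] by blast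
  have u'c: "u' \<in> carrier M" using u' U by auto
  obtain X Y where XY: "X \<in> P" "Y \<in> P" and h: "R \<otimes> u' \<ominus> R = R \<otimes> (t \<otimes> X) \<oplus> tN \<otimes> Y"
    using S u' unfolding stabilised_def defect_lattice_def by blast
  have G0c: "G0 \<in> carrier M" and Hc: "H \<in> carrier M" and Gic: "Gi \<in> carrier M"
    using P_closed G0 H Gi by auto
  have Xc: "X \<in> carrier M" and Yc: "Y \<in> carrier M" using P_closed XY by auto
  let ?G = "G0 \<oplus> t \<otimes> H"
  have Gc: "?G \<in> carrier M" using G0c Hc t_closed by simp
  let ?Z = "X \<otimes> G0 \<oplus> H \<otimes> u \<ominus> H"
  have Zc: "?Z \<in> carrier M" using Xc G0c Hc uc by simp
  have cj': "R \<otimes> (G0 \<otimes> u) = R \<otimes> (u' \<otimes> G0)" using cj by simp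
  have "R \<otimes> ?G \<otimes> u \<ominus> R \<otimes> ?G = (R \<otimes> (G0 \<otimes> u) \<ominus> R \<otimes> G0) \<oplus> R \<otimes> (t \<otimes> (H \<otimes> u \<ominus> H))"
    using R G0c Hc uc t_closed by (simp add: ring_simprules)
  also have "\<dots> = (R \<otimes> (u' \<otimes> G0) \<ominus> R \<otimes> G0) \<oplus> R \<otimes> (t \<otimes> (H \<otimes> u \<ominus> H))" by (simp only: cj')
  also have "\<dots> = (R \<otimes> u' \<ominus> R) \<otimes> G0 \<oplus> R \<otimes> (t \<otimes> (H \<otimes> u \<ominus> H))"
    using R G0c Hc uc u'c t_closed by (simp add: ring_simprules)
  also have "\<dots> = (R \<otimes> (t \<otimes> X) \<oplus> tN \<otimes> Y) \<otimes> G0 \<oplus> R \<otimes> (t \<otimes> (H \<otimes> u \<ominus> H))" by (simp only: h)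
  also have "\<dots> = R \<otimes> (t \<otimes> ?Z) \<oplus> tN \<otimes> (Y \<otimes> G0)"
    using R G0c Hc uc Xc Yc t_closed tN_closed by (simp add: ring_simprules)
  also have "R \<otimes> (t \<otimes> ?Z) = R \<otimes> ?G \<otimes> (t \<otimes> (Gi \<otimes> ?Z))"
    using R Gc Gic Zc GGi by (rule mult_t_right_inverse)
  finally have e: "R \<otimes> ?G \<otimes> u \<ominus> R \<otimes> ?G = R \<otimes> ?G \<otimes> (t \<otimes> (Gi \<otimes> ?Z)) \<oplus> tN \<otimes> (Y \<otimes> G0)" .
  have "Gi \<otimes> ?Z \<in> P" using XY G0 H Gi uP by (intro P_minus P_add P_mult)
  moreover have "Y \<otimes> G0 \<in> P" using XY G0 by (intro P_mult)
  ultimately show "R \<otimes> ?G \<otimes> u \<ominus> R \<otimes> ?G \<in> defect_lattice (R \<otimes> ?G)"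
    unfolding defect_lattice_def using e by blast
qed

end

section \<open>Matrices over \<open>\<bbbA>\<langle>t\<rangle>\<close>\<close>

abbreviation diag_mat :: "nat \<Rightarrow> (nat \<Rightarrow> nat \<Rightarrow> int \<Rightarrow> rat) \<Rightarrow> nat \<Rightarrow> nat \<Rightarrow> adt" where
  "diag_mat n A \<equiv> mmap \<zero>\<^bsub>At\<^esub> n diagQ A"

abbreviation const_mat :: "nat \<Rightarrow> (nat \<Rightarrow> nat \<Rightarrow> rat) \<Rightarrow> nat \<Rightarrow> nat \<Rightarrow> adt" where
  "const_mat n x \<equiv> mmap \<zero>\<^bsub>At\<^esub> n (diagQ \<circ> const_ls) x"

lemma subring_hom_diagQ: "subring_hom QLS At diagQ Qt"
proof -
  interpret Q: cring QLS by (rule cring_QLS)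
  interpret A: cring At by (rule cring_At)
  show ?thesis
    by (unfold_locales) (use Qt_subset Qt_zero Qt_add Qt_mult diagQ_add diagQ_mult diagQ_zero Qt_subset in
        \<open>auto simp: Qt_def\<close>)
qed

lemma subring_hom_const_diagQ: "subring_hom ratR At (diagQ \<circ> const_ls) UNIV"
proof -
  interpret Q: cring ratR by (rule cring_ratR)
  interpret A: cring At by (rule cring_At)
  show ?thesis
  proof (unfold_locales)
    show "x \<in> UNIV \<Longrightarrow> (diagQ \<circ> const_ls) x \<in> carrier At" for x using const_Qt by (simp add: Qt_def)
    show "(diagQ \<circ> const_ls) (x \<oplus>\<^bsub>ratR\<^esub> y) = (diagQ \<circ> const_ls) x \<oplus>\<^bsub>At\<^esub> (diagQ \<circ> const_ls) y" for x y
      using const_ls_add diagQ_add const_ls_carrier by simp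
    show "(diagQ \<circ> const_ls) (x \<otimes>\<^bsub>ratR\<^esub> y) = (diagQ \<circ> const_ls) x \<otimes>\<^bsub>At\<^esub> (diagQ \<circ> const_ls) y" for x y
      using const_ls_mult diagQ_mult const_ls_carrier by simp
    show "(diagQ \<circ> const_ls) \<zero>\<^bsub>ratR\<^esub> = \<zero>\<^bsub>At\<^esub>" using const_ls_0 diagQ_zero by simp
  qed auto
qed

lemma subring_hom_coeff_0: "subring_hom QLS ratR (\<lambda>f. f 0) Qt_plus"
proof -
  interpret Q: cring QLS by (rule cring_QLS)
  interpret A: cring ratR by (rule cring_ratR)
  show ?thesis
    by (unfold_locales) (use Qt_plus_subset Qt_subset Qt_plus_zero Qt_plus_add Qt_plus_mult Qt_plus_mult_coeff_0 in
        \<open>auto simp: QLS_add QLS_zero\<close>)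
qed

abbreviation tA_pow :: "int \<Rightarrow> adt" where "tA_pow N \<equiv> diagQ (tpow N)"

abbreviation t_mat :: "nat \<Rightarrow> int \<Rightarrow> nat \<Rightarrow> nat \<Rightarrow> adt" where
  "t_mat n N \<equiv> cring.scalar_mat At n (tA_pow N)"

lemma tA_pow_1_At_plus: "(tA_pow 1) \<in> At_plus" using diagQ_At_plus[OF tpow_1_Qt_plus] .

lemma tA_pow_carrier: "tA_pow N \<in> carrier At" using tpow_Qt unfolding Qt_def by auto

lemma lattice_condition_At: "lattice_condition (mat_ring At n) (mats At n At_plus) (t_mat n 1) (t_mat n N)"
proof -
  interpret A: cring At by (rule cring_At)
  interpret M: ring "mat_ring At n" by (rule A.ring_mat_ring)
  have Ps: "At_plus \<subseteq> carrier At" by (rule At_plus_subset)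
  show ?thesis
  proof (unfold_locales)
    show "mats At n At_plus \<subseteq> carrier (mat_ring At n)" unfolding A.mat_ring_simps by (intro mats_mono Ps)
    show "x \<oplus>\<^bsub>mat_ring At n\<^esub> y \<in> mats At n At_plus" if "x \<in> mats At n At_plus" "y \<in> mats At n At_plus" for x y
      unfolding A.mat_ring_simps using that by (intro A.madd_mats At_plus_add)
    show "x \<otimes>\<^bsub>mat_ring At n\<^esub> y \<in> mats At n At_plus" if "x \<in> mats At n At_plus" "y \<in> mats At n At_plus" for x y
      unfolding A.mat_ring_simps using that Ps At_plus_zero At_plus_add At_plus_mult by (intro A.mmul_mats) auto
    show "\<ominus>\<^bsub>mat_ring At n\<^esub> x \<in> mats At n At_plus" if x: "x \<in> mats At n At_plus" for x
    proof -
      have "x \<in> mats At n (carrier At)" using x A.mats_carrier by blast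
      then show ?thesis unfolding A.mat_ring_uminus[OF \<open>x \<in> mats At n (carrier At)\<close>] mats_def
        using x At_plus_uminus At_plus_zero A.mats_member[OF x] A.mats_closed[OF x] by auto
    qed
    show "t_mat n 1 \<in> mats At n At_plus"
      using tA_pow_1_At_plus Ps At_plus_zero by (intro A.scalar_mat_mats) auto
    show "t_mat n N \<in> carrier (mat_ring At n)"
      unfolding A.mat_ring_simps using tA_pow_carrier by (intro A.scalar_mat_mats) auto
    show "t_mat n 1 \<otimes>\<^bsub>mat_ring At n\<^esub> x = x \<otimes>\<^bsub>mat_ring At n\<^esub> t_mat n 1"
      if "x \<in> carrier (mat_ring At n)" for x
      using that tA_pow_1_At_plus Ps unfolding A.mat_ring_simps by (intro A.scalar_mat_comm) auto
    show "t_mat n N \<otimes>\<^bsub>mat_ring At n\<^esub> x = x \<otimes>\<^bsub>mat_ring At n\<^esub> t_mat n N"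
      if "x \<in> carrier (mat_ring At n)" for x
      using that tA_pow_carrier unfolding A.mat_ring_simps by (intro A.scalar_mat_comm) auto
  qed
qed

abbreviation stable_mod :: "nat \<Rightarrow> int \<Rightarrow> (nat \<Rightarrow> nat \<Rightarrow> adt) \<Rightarrow> (nat \<Rightarrow> nat \<Rightarrow> adt) set \<Rightarrow> bool" where
  "stable_mod n N \<equiv>
  lattice_condition.stabilised (mat_ring At n) (mats At n At_plus) (t_mat n 1) (t_mat n N)"

lemma stable_mod_iff:
  assumes R: "R \<in> mats At n (carrier At)" and U: "U \<subseteq> mats At n (carrier At)"
  shows "(\<forall>u\<in>U. msub At n (mmul At n R u) R \<in>
            {madd At n (mmul At n R (msmul At n (tA_pow 1) X)) (msmul At n (tA_pow N) Y)
               | X Y. X \<in> mats At n At_plus \<and> Y \<in> mats At n At_plus}) \<longleftrightarrow> stable_mod n N R U"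
proof -
  interpret A: cring At by (rule cring_At)
  interpret AS: lattice_condition "mat_ring At n" "mats At n At_plus" "t_mat n 1" "t_mat n N"
    by (rule lattice_condition_At)
  have "msub At n (mmul At n R u) R = mmul At n R u \<ominus>\<^bsub>mat_ring At n\<^esub> R" if "u \<in> U" for u
    using that U R by (intro A.msub_eq_minus A.mmul_mats) auto
  moreover have "madd At n (mmul At n R (msmul At n (tA_pow 1) X)) (msmul At n (tA_pow N) Y)
      = R \<otimes>\<^bsub>mat_ring At n\<^esub> (t_mat n 1 \<otimes>\<^bsub>mat_ring At n\<^esub> X) \<oplus>\<^bsub>mat_ring At n\<^esub> t_mat n N \<otimes>\<^bsub>mat_ring At n\<^esub> Y"
    if "X \<in> mats At n At_plus" "Y \<in> mats At n At_plus" for X Y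
    using that tA_pow_1_At_plus At_plus_subset tA_pow_carrier
    by (simp add: A.mat_ring_simps A.msmul_eq_scalar_mat_left[symmetric] subsetD)
  then have "{madd At n (mmul At n R (msmul At n (tA_pow 1) X)) (msmul At n (tA_pow N) Y)
               | X Y. X \<in> mats At n At_plus \<and> Y \<in> mats At n At_plus} = AS.defect_lattice R"
    unfolding AS.defect_lattice_def by (intro Collect_cong iffI) (elim exE conjE; metis)+
  ultimately show ?thesis unfolding AS.stabilised_def by (simp add: A.mat_ring_simps)
qed

lemma diag_mat_carrier: "A \<in> mats QLS n Qt \<Longrightarrow> diag_mat n A \<in> mats At n (carrier At)"
  by (rule subring_hom.mmap_mats[OF subring_hom_diagQ]) (auto simp: Qt_def)

lemma diag_mat_At_plus:
  assumes A: "A \<in> mats QLS n Qt_plus"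
  shows "diag_mat n A \<in> mats At n At_plus"
proof -
  have "diagQ (A i j) \<in> At_plus" if "i < n" "j < n" for i j
    using diagQ_At_plus cring.mats_member[OF cring_QLS A that] by blast
  then show ?thesis using At_plus_subset by (auto simp: mats_def mmap_def)
qed

lemma diag_mat_gl:
  assumes "g \<in> gl QLS n Qt_plus"
  obtains gi where "gi \<in> mats QLS n Qt_plus" "mmul QLS n g gi = mone QLS n" "mmul QLS n gi g = mone QLS n"
    "mmul At n (diag_mat n g) (diag_mat n gi) = mone At n" "mmul At n (diag_mat n gi) (diag_mat n g) = mone At n"
proof -
  interpret D: subring_hom QLS At diagQ Qt by (rule subring_hom_diagQ)
  obtain gi where g: "g \<in> mats QLS n Qt_plus" and gi: "gi \<in> mats QLS n Qt_plus"
    and e1: "mmul QLS n g gi = mone QLS n" and e2: "mmul QLS n gi g = mone QLS n"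
    using assms unfolding gl_def by blast
  have "g \<in> mats QLS n Qt" "gi \<in> mats QLS n Qt" using g gi Qt_plus_subset mats_mono by blast+
  then have "mmul At n (diag_mat n g) (diag_mat n gi) = mone At n"
    and "mmul At n (diag_mat n gi) (diag_mat n g) = mone At n"
    using e1 e2 D.mmap_mone[OF diagQ_one] by (simp_all flip: D.mmap_mmul)
  then show ?thesis using that[OF gi e1 e2] by blast
qed

lemma const_mat_mats: "x \<in> mats ratR n UNIV \<Longrightarrow> const_mat n x \<in> mats At n At_plus"
proof -
  interpret C: subring_hom ratR At "diagQ \<circ> const_ls" UNIV by (rule subring_hom_const_diagQ)
  assume x: "x \<in> mats ratR n UNIV"
  show ?thesis by (rule C.mmap_mats[OF x]) (use diagQ_At_plus const_Qt_plus in auto)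
qed

lemma unip_A_subset: "x \<in> mats ratR n UNIV \<Longrightarrow> unip_A n x b \<subseteq> mats At n At_plus"
proof
  interpret A: cring At by (rule cring_At)
  fix u assume x: "x \<in> mats ratR n UNIV" and "u \<in> unip_A n x b"
  then obtain u0 y where u: "u = mmul At n (mmul At n (const_mat n x) u0) (const_mat n y)"
    and u0: "u0 \<in> std_unip n b Adeles" and y: "y \<in> mats ratR n UNIV" unfolding unip_A_def by blast
  have u0': "u0 \<in> mats At n At_plus" using u0 Adeles_subset_At_plus mats_mono unfolding std_unip_def by blast
  have S: "At_plus \<subseteq> carrier At" "\<zero>\<^bsub>At\<^esub> \<in> At_plus"
    "\<And>x y. x \<in> At_plus \<Longrightarrow> y \<in> At_plus \<Longrightarrow> x \<oplus>\<^bsub>At\<^esub> y \<in> At_plus"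
    "\<And>x y. x \<in> At_plus \<Longrightarrow> y \<in> At_plus \<Longrightarrow> x \<otimes>\<^bsub>At\<^esub> y \<in> At_plus"
    using At_plus_subset At_plus_zero At_plus_add At_plus_mult by auto
  show "u \<in> mats At n At_plus" unfolding u
    by (intro A.mmul_mats[OF S] const_mat_mats x y u0')
qed

lemma mat_ring_ratR_simps: "carrier (mat_ring ratR n) = mats ratR n UNIV" "mult (mat_ring ratR n) = mmul ratR n"
  "one (mat_ring ratR n) = mone ratR n"
  using cring.mat_ring_simps[OF cring_ratR] by simp_all

lemma const_mat_mmul:
  "a \<in> mats ratR n UNIV \<Longrightarrow> c \<in> mats ratR n UNIV \<Longrightarrow>
    const_mat n (mmul ratR n a c) = mmul At n (const_mat n a) (const_mat n c)"
  by (rule subring_hom.mmap_mmul[OF subring_hom_const_diagQ])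

lemma const_mat_carrier: "x \<in> mats ratR n UNIV \<Longrightarrow> const_mat n x \<in> mats At n (carrier At)"
  using const_mat_mats mats_mono[OF At_plus_subset] by blast

lemma unip_A_conj:
  assumes g0: "g0 \<in> mats ratR n UNIV" and g0i: "g0i \<in> mats ratR n UNIV"
    and e1: "mmul ratR n g0 g0i = mone ratR n" and e2: "mmul ratR n g0i g0 = mone ratR n"
    and x: "x \<in> mats ratR n UNIV" and u: "u \<in> unip_A n (mmul ratR n g0i x) b"
  shows "\<exists>u'\<in>unip_A n x b. mmul At n (const_mat n g0) u = mmul At n u' (const_mat n g0)"
proof -
  interpret A: cring At by (rule cring_At)
  interpret MR: ring "mat_ring ratR n" by (rule cring.ring_mat_ring[OF cring_ratR])
  obtain u0 y where uu: "u = mmul At n (mmul At n (const_mat n (mmul ratR n g0i x)) u0) (const_mat n y)"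
    and u0: "u0 \<in> std_unip n b Adeles" and y: "y \<in> mats ratR n UNIV"
    and xy: "mmul ratR n (mmul ratR n g0i x) y = mone ratR n" using u unfolding unip_A_def by blast
  have u0c: "u0 \<in> mats At n (carrier At)" using u0 A.mats_carrier unfolding std_unip_def by blast
  define y' where "y' = mmul ratR n y g0i"
  note RS = mat_ring_ratR_simps[symmetric]
  have g0ix: "mmul ratR n g0i x \<in> mats ratR n UNIV" and y': "y' \<in> mats ratR n UNIV"
    using g0 g0i x y MR.m_closed unfolding y'_def by (simp_all add: RS)
  have "mmul ratR n x y' = mmul ratR n (mmul ratR n g0 g0i) (mmul ratR n x y')"
    using e1 x y' by (simp add: RS)
  also have "\<dots> = mmul ratR n g0 (mmul ratR n (mmul ratR n (mmul ratR n g0i x) y) g0i)"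
    using g0 g0i x y unfolding y'_def by (simp add: RS MR.m_assoc)
  finally have xy': "mmul ratR n x y' = mone ratR n" using xy e1 g0 g0i by (simp add: RS)
  have x_eq: "mmul ratR n g0 (mmul ratR n g0i x) = x"
    using g0 g0i x e1 by (simp add: RS flip: MR.m_assoc)
  have y_eq: "mmul ratR n y' g0 = y"
    using g0 g0i y e2 unfolding y'_def by (simp add: RS MR.m_assoc)
  let ?C = "const_mat n"
  have "mmul At n (?C g0) u = mmul At n (?C g0) (mmul At n (mmul At n (?C (mmul ratR n g0i x)) u0)
      (mmul At n (?C y') (?C g0)))"
    unfolding uu using const_mat_mmul[OF y' g0] y_eq by simp
  also have "\<dots> = mmul At n (mmul At n (mmul At n (mmul At n (?C g0) (?C (mmul ratR n g0i x))) u0) (?C y')) (?C g0)"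
    using const_mat_carrier[OF g0] const_mat_carrier[OF g0ix] const_mat_carrier[OF y'] u0c
    by (simp add: A.mmul_assoc A.mmul_closed)
  also have "mmul At n (?C g0) (?C (mmul ratR n g0i x)) = ?C x"
    using const_mat_mmul[OF g0 g0ix] x_eq by simp
  finally show ?thesis unfolding unip_A_def using u0 y' xy' by blast
qed

lemma gl_ratR_mult:
  "a \<in> gl ratR n UNIV \<Longrightarrow> b \<in> gl ratR n UNIV \<Longrightarrow> mmul ratR n a b \<in> gl ratR n UNIV"
  using monoid.Units_m_closed[OF ring.is_monoid[OF cring.ring_mat_ring[OF cring_ratR]]]
    cring.gl_eq_Units[OF cring_ratR] by (simp add: mat_ring_ratR_simps)

abbreviation coeff0_mat :: "nat \<Rightarrow> (nat \<Rightarrow> nat \<Rightarrow> int \<Rightarrow> rat) \<Rightarrow> nat \<Rightarrow> nat \<Rightarrow> rat" where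
  "coeff0_mat n g \<equiv> mmap \<zero>\<^bsub>ratR\<^esub> n (\<lambda>f. f 0) g"

lemma gl_coeff0_mat:
  assumes g: "g \<in> gl QLS n Qt_plus"
  shows "coeff0_mat n g \<in> gl ratR n UNIV"
proof -
  interpret E: subring_hom QLS ratR "\<lambda>f. f 0" Qt_plus by (rule subring_hom_coeff_0)
  obtain gi where g: "g \<in> mats QLS n Qt_plus" and gi: "gi \<in> mats QLS n Qt_plus"
    and e1: "mmul QLS n g gi = mone QLS n" and e2: "mmul QLS n gi g = mone QLS n"
    using assms unfolding gl_def by blast
  have one: "\<one>\<^bsub>QLS\<^esub> 0 = \<one>\<^bsub>ratR\<^esub>" by (simp add: QLS_one)
  have "mmul ratR n (coeff0_mat n g) (coeff0_mat n gi) = mone ratR n"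
    unfolding E.mmap_mmul[OF g gi, symmetric] e1 by (rule E.mmap_mone[OF one])
  moreover have "mmul ratR n (coeff0_mat n gi) (coeff0_mat n g) = mone ratR n"
    unfolding E.mmap_mmul[OF gi g, symmetric] e2 by (rule E.mmap_mone[OF one])
  moreover have "coeff0_mat n g \<in> mats ratR n UNIV" "coeff0_mat n gi \<in> mats ratR n UNIV"
    by (rule E.mmap_mats[OF g], simp, rule E.mmap_mats[OF gi], simp)
  ultimately show ?thesis unfolding gl_def by blast
qed

lemma mats_Qt_plus_decomp:
  assumes g: "g \<in> mats QLS n Qt_plus"
  obtains H where "H \<in> mats QLS n Qt_plus"
    and "diag_mat n g = madd At n (const_mat n (coeff0_mat n g)) (mmul At n (t_mat n 1) (diag_mat n H))"
proof -
  interpret Q: cring QLS by (rule cring_QLS)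
  interpret A: cring At by (rule cring_At)
  interpret D: subring_hom QLS At diagQ Qt by (rule subring_hom_diagQ)
  define H where "H = mmap \<zero>\<^bsub>QLS\<^esub> n div_t g"
  define Cg where "Cg = mmap \<zero>\<^bsub>QLS\<^esub> n const_ls (coeff0_mat n g)"
  have "div_t f \<in> carrier QLS" if "f \<in> Qt_plus" for f
    using div_t_Qt_plus[OF that] Qt_plus_subset Qt_subset by blast
  then have Hp: "H \<in> mats QLS n Qt_plus"
    unfolding H_def mats_def mmap_def using Q.mats_member[OF g] div_t_Qt_plus by auto
  have Hq: "H \<in> mats QLS n Qt" and gq: "g \<in> mats QLS n Qt" using Hp g Qt_plus_subset mats_mono by blast+
  have Cgq: "Cg \<in> mats QLS n Qt" unfolding Cg_def mats_def mmap_def using const_Qt Qt_subset by auto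
  have tH: "msmul QLS n (tpow 1) H \<in> mats QLS n Qt"
    using Hq tpow_Qt Qt_mult Qt_subset by (intro Q.msmul_mats) auto
  have "g = madd QLS n Cg (msmul QLS n (tpow 1) H)"
  proof (rule Q.mats_ext[OF gq])
    show "madd QLS n Cg (msmul QLS n (tpow 1) H) \<in> mats QLS n Qt"
      using Cgq tH Qt_add by (intro Q.madd_mats) auto
    fix i j assume ij: "i < n" "j < n"
    then show "g i j = madd QLS n Cg (msmul QLS n (tpow 1) H) i j"
      using Qt_plus_decomp[OF Q.mats_member[OF g ij]] by (simp add: madd_def msmul_def Cg_def H_def mmap_def)
  qed
  then have "diag_mat n g = madd At n (diag_mat n Cg) (msmul At n (tA_pow 1) (diag_mat n H))"
    using D.mmap_madd[OF Cgq tH] D.mmap_msmul[OF tpow_Qt Hq] by simp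
  moreover have "diag_mat n Cg = const_mat n (coeff0_mat n g)" unfolding Cg_def by (auto simp: fun_eq_iff mmap_def)
  moreover have "msmul At n (tA_pow 1) (diag_mat n H) = mmul At n (t_mat n 1) (diag_mat n H)"
    using tA_pow_1_At_plus At_plus_subset diag_mat_At_plus[OF Hp] by (intro A.msmul_eq_scalar_mat_left) auto
  ultimately show ?thesis using that Hp by simp
qed

lemma stable_mod_mult_right:
  assumes g: "g \<in> gl QLS n Qt_plus" and R: "R \<in> mats At n (carrier At)" and x: "x \<in> gl ratR n UNIV"
    and S: "stable_mod n N R (unip_A n x b)"
  shows "\<exists>x'. x' \<in> gl ratR n UNIV \<and> stable_mod n N (mmul At n R (diag_mat n g)) (unip_A n x' b)"
proof -
  interpret MR: ring "mat_ring ratR n" by (rule cring.ring_mat_ring[OF cring_ratR])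
  interpret A: cring At by (rule cring_At)
  interpret AS: lattice_condition "mat_ring At n" "mats At n At_plus" "t_mat n 1" "t_mat n N"
    by (rule lattice_condition_At)
  let ?g0 = "coeff0_mat n g"
  obtain gi where gi: "gi \<in> mats QLS n Qt_plus" and inv: "mmul At n (diag_mat n g) (diag_mat n gi) = mone At n"
    using diag_mat_gl[OF g] by blast
  obtain H where H: "H \<in> mats QLS n Qt_plus"
    and dec: "diag_mat n g = madd At n (const_mat n ?g0) (mmul At n (t_mat n 1) (diag_mat n H))"
    using mats_Qt_plus_decomp g unfolding gl_def by blast
  obtain g0i where g0: "?g0 \<in> mats ratR n UNIV" and g0i: "g0i \<in> mats ratR n UNIV"
    and e1: "mmul ratR n ?g0 g0i = mone ratR n" and e2: "mmul ratR n g0i ?g0 = mone ratR n"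
    using gl_coeff0_mat[OF g] unfolding gl_def by blast
  have xm: "x \<in> mats ratR n UNIV" using x unfolding gl_def by auto
  have "AS.stabilised (R \<otimes>\<^bsub>mat_ring At n\<^esub> (const_mat n ?g0 \<oplus>\<^bsub>mat_ring At n\<^esub> t_mat n 1 \<otimes>\<^bsub>mat_ring At n\<^esub> diag_mat n H))
      (unip_A n (mmul ratR n g0i x) b)"
  proof (rule AS.stabilised_mult_right[OF _ const_mat_mats[OF g0] diag_mat_At_plus[OF H] diag_mat_At_plus[OF gi]])
    show "R \<in> carrier (mat_ring At n)" using R by (simp add: A.mat_ring_simps)
    show "(const_mat n ?g0 \<oplus>\<^bsub>mat_ring At n\<^esub> t_mat n 1 \<otimes>\<^bsub>mat_ring At n\<^esub> diag_mat n H) \<otimes>\<^bsub>mat_ring At n\<^esub> diag_mat n gi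
        = \<one>\<^bsub>mat_ring At n\<^esub>"
      using inv dec by (simp add: A.mat_ring_simps)
    show "unip_A n x b \<subseteq> carrier (mat_ring At n)"
      using unip_A_subset[OF xm] AS.P_subset by blast
    have "mmul ratR n g0i x \<in> mats ratR n UNIV"
      using g0i xm MR.m_closed by (simp add: mat_ring_ratR_simps[symmetric])
    then show "unip_A n (mmul ratR n g0i x) b \<subseteq> mats At n At_plus" by (rule unip_A_subset)
    show "\<exists>u'\<in>unip_A n x b. const_mat n ?g0 \<otimes>\<^bsub>mat_ring At n\<^esub> u = u' \<otimes>\<^bsub>mat_ring At n\<^esub> const_mat n ?g0"
      if "u \<in> unip_A n (mmul ratR n g0i x) b" for u
      using unip_A_conj[OF g0 g0i e1 e2 xm that] by (simp add: A.mat_ring_simps)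
  qed (rule S)
  moreover have "R \<otimes>\<^bsub>mat_ring At n\<^esub> (const_mat n ?g0 \<oplus>\<^bsub>mat_ring At n\<^esub> t_mat n 1 \<otimes>\<^bsub>mat_ring At n\<^esub> diag_mat n H)
      = mmul At n R (diag_mat n g)"
    using dec by (simp add: A.mat_ring_simps)
  moreover have "g0i \<in> gl ratR n UNIV" unfolding gl_def using g0 g0i e1 e2 by blast
  ultimately show ?thesis using gl_ratR_mult[OF _ x] by auto
qed

definition parabolic_stabilised :: "nat \<Rightarrow> int \<Rightarrow> (nat \<Rightarrow> nat \<Rightarrow> adt) \<Rightarrow> bool" where
  "parabolic_stabilised n N R \<longleftrightarrow>
     (\<exists>x b. x \<in> gl ratR n UNIV \<and> proper_blocks n b \<and> stable_mod n N R (unip_A n x b))"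

lemma C_N_iff:
  assumes r: "r \<in> mats QLS n Qt"
  shows "r \<in> C_N n N \<longleftrightarrow> \<not> parabolic_stabilised n N (diag_mat n r)"
proof -
  interpret A: cring At by (rule cring_At)
  interpret D: subring_hom QLS At diagQ Qt by (rule subring_hom_diagQ)
  have R: "diag_mat n r \<in> mats At n (carrier At)" by (rule D.mmap_mats[OF r]) (use Qt_def in auto)
  have U: "unip_A n x b \<subseteq> mats At n (carrier At)" if "x \<in> gl ratR n UNIV" for x b
  proof -
    have "x \<in> mats ratR n UNIV" using that unfolding gl_def by auto
    then show ?thesis using unip_A_subset mats_mono[OF At_plus_subset] by blast
  qed
  have "(\<forall>u \<in> unip_A n x b.
             (let R = mmap \<zero>\<^bsub>At\<^esub> n diagQ r in
              msub At n (mmul At n R u) R \<in>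
                {madd At n (mmul At n R (msmul At n (diagQ (tpow 1)) X))
                           (msmul At n (diagQ (tpow N)) Y)
                 | X Y. X \<in> mats At n At_plus \<and> Y \<in> mats At n At_plus})) \<longleftrightarrow> stable_mod n N (diag_mat n r) (unip_A n x b)"
    if "x \<in> gl ratR n UNIV" for x b
    unfolding Let_def by (rule stable_mod_iff[OF R U[OF that]])
  then show ?thesis unfolding C_N_def parabolic_stabilised_def using r by blast
qed

lemma parabolic_stabilised_mult_left_iff:
  assumes R: "R \<in> mats At n (carrier At)" and G: "G \<in> mats At n At_plus" and Gi: "Gi \<in> mats At n At_plus"
    and inv: "mmul At n Gi G = mone At n"
  shows "parabolic_stabilised n N (mmul At n G R) \<longleftrightarrow> parabolic_stabilised n N R"
proof -
  interpret A: cring At by (rule cring_At)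
  interpret AS: lattice_condition "mat_ring At n" "mats At n At_plus" "t_mat n 1"
    "t_mat n N"
    by (rule lattice_condition_At)
  have "stable_mod n N (mmul At n G R) (unip_A n x b) \<longleftrightarrow> stable_mod n N R (unip_A n x b)"
    if "x \<in> gl ratR n UNIV" for x b
    using AS.stabilised_mult_left_iff[of R G Gi "unip_A n x b"] R G Gi inv
      unip_A_subset[of x n b] AS.P_subset that
    by (auto simp: A.mat_ring_simps gl_def)
  then show ?thesis unfolding parabolic_stabilised_def by blast
qed

lemma parabolic_stabilised_add_iff:
  assumes R: "R \<in> mats At n (carrier At)" and A: "A \<in> mats At n At_plus"
  shows "parabolic_stabilised n N (madd At n R (msmul At n (tA_pow N) A)) \<longleftrightarrow> parabolic_stabilised n N R"
proof -
  interpret A: cring At by (rule cring_At)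
  interpret AS: lattice_condition "mat_ring At n" "mats At n At_plus" "t_mat n 1"
    "t_mat n N"
    by (rule lattice_condition_At)
  have "msmul At n (tA_pow N) A = mmul At n (t_mat n N) A"
    by (rule A.msmul_eq_scalar_mat_left[OF tA_pow_carrier A])
  then have "stable_mod n N (madd At n R (msmul At n (tA_pow N) A)) (unip_A n x b)
      \<longleftrightarrow> stable_mod n N R (unip_A n x b)"
    if "x \<in> gl ratR n UNIV" for x b
    using AS.stabilised_add_iff[of R A "unip_A n x b"] R A unip_A_subset[of x n b] that
    by (auto simp: A.mat_ring_simps gl_def)
  then show ?thesis unfolding parabolic_stabilised_def by blast
qed

lemma parabolic_stabilised_mult_right_iff:
  assumes R: "R \<in> mats At n (carrier At)" and g: "g \<in> gl QLS n Qt_plus"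
  shows "parabolic_stabilised n N (mmul At n R (diag_mat n g)) \<longleftrightarrow> parabolic_stabilised n N R"
proof -
  interpret A: cring At by (rule cring_At)
  obtain gi where gi: "gi \<in> mats QLS n Qt_plus" and e1: "mmul QLS n g gi = mone QLS n"
    and e2: "mmul QLS n gi g = mone QLS n" and inv: "mmul At n (diag_mat n g) (diag_mat n gi) = mone At n"
    using diag_mat_gl[OF g] by blast
  have gi_gl: "gi \<in> gl QLS n Qt_plus" using g gi e1 e2 unfolding gl_def by blast
  have carrier: "diag_mat n g \<in> mats At n (carrier At)" "diag_mat n gi \<in> mats At n (carrier At)"
    using g gi diag_mat_carrier Qt_plus_subset mats_mono unfolding gl_def by blast+
  have RG: "mmul At n R (diag_mat n g) \<in> mats At n (carrier At)"
    using A.mmul_closed R carrier by blast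
  have "mmul At n (mmul At n R (diag_mat n g)) (diag_mat n gi) = R"
    using R carrier inv by (simp add: A.mmul_assoc A.mmul_mone_right)
  then show ?thesis
    using stable_mod_mult_right[OF g R] stable_mod_mult_right[OF gi_gl RG]
    unfolding parabolic_stabilised_def by metis
qed

lemma transform_diag_mat:
  fixes N :: int
  assumes r: "r \<in> mats QLS n Qt" and g1: "g1 \<in> mats QLS n Qt_plus" and g2: "g2 \<in> mats QLS n Qt_plus"
    and m: "m \<in> mats QLS n Qt_plus"
  defines "r' \<equiv> madd QLS n (mmul QLS n (mmul QLS n g1 r) g2) (msmul QLS n (tpow N) m)"
  shows "r' \<in> mats QLS n Qt"
    and "diag_mat n r' = madd At n (mmul At n (diag_mat n g1) (mmul At n (diag_mat n r) (diag_mat n g2)))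
                                   (msmul At n (tA_pow N) (diag_mat n m))"
proof -
  interpret Q: cring QLS by (rule cring_QLS)
  interpret A: cring At by (rule cring_At)
  interpret D: subring_hom QLS At diagQ Qt by (rule subring_hom_diagQ)
  have Qt: "Qt \<subseteq> carrier QLS" "\<zero>\<^bsub>QLS\<^esub> \<in> Qt" "\<And>x y. x \<in> Qt \<Longrightarrow> y \<in> Qt \<Longrightarrow> x \<oplus>\<^bsub>QLS\<^esub> y \<in> Qt"
    "\<And>x y. x \<in> Qt \<Longrightarrow> y \<in> Qt \<Longrightarrow> x \<otimes>\<^bsub>QLS\<^esub> y \<in> Qt"
    using Qt_subset Qt_zero Qt_add Qt_mult by auto
  have g1': "g1 \<in> mats QLS n Qt" and g2': "g2 \<in> mats QLS n Qt" and m': "m \<in> mats QLS n Qt"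
    using g1 g2 m Qt_plus_subset mats_mono by blast+
  have g1r: "mmul QLS n g1 r \<in> mats QLS n Qt" by (rule Q.mmul_mats[OF Qt g1' r])
  have g1rg2: "mmul QLS n (mmul QLS n g1 r) g2 \<in> mats QLS n Qt" by (rule Q.mmul_mats[OF Qt g1r g2'])
  have tm: "msmul QLS n (tpow N) m \<in> mats QLS n Qt"
    using tpow_Qt Qt by (intro Q.msmul_mats[OF _ _ _ m']) auto
  show "r' \<in> mats QLS n Qt" unfolding r'_def using Qt(3) by (rule Q.madd_mats[OF _ g1rg2 tm])
  have "diag_mat n r' = madd At n (mmul At n (mmul At n (diag_mat n g1) (diag_mat n r)) (diag_mat n g2))
                                  (msmul At n (tA_pow N) (diag_mat n m))"
    unfolding r'_def
    by (simp add: D.mmap_madd[OF g1rg2 tm] D.mmap_mmul[OF g1r g2'] D.mmap_mmul[OF g1' r]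
        D.mmap_msmul[OF tpow_Qt m'])
  then show "diag_mat n r' = madd At n (mmul At n (diag_mat n g1) (mmul At n (diag_mat n r) (diag_mat n g2)))
                                   (msmul At n (tA_pow N) (diag_mat n m))"
    using A.mmul_assoc diag_mat_carrier g1' r g2' by simp
qed

theorem lemma6p2p3:
  fixes n :: nat and N :: int
    and r g1 g2 m :: "nat \<Rightarrow> nat \<Rightarrow> (int \<Rightarrow> rat)"
  assumes "n \<ge> 2"
    and "r \<in> mats QLS n Qt"
    and "g1 \<in> gl QLS n Qt_plus"
    and "g2 \<in> gl QLS n Qt_plus"
    and "m \<in> mats QLS n Qt_plus"
  shows "r \<in> C_N n N \<longleftrightarrow>
         madd QLS n (mmul QLS n (mmul QLS n g1 r) g2) (msmul QLS n (tpow N) m) \<in> C_N n N"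
proof -
  let ?R = "diag_mat n r" and ?G1 = "diag_mat n g1" and ?G2 = "diag_mat n g2"
    and ?r' = "madd QLS n (mmul QLS n (mmul QLS n g1 r) g2) (msmul QLS n (tpow N) m)"
  obtain g1i where g1i: "g1i \<in> mats QLS n Qt_plus"
    and inv: "mmul At n (diag_mat n g1i) ?G1 = mone At n"
    using diag_mat_gl[OF assms(3)] by blast
  have g1: "g1 \<in> mats QLS n Qt_plus" and g2: "g2 \<in> mats QLS n Qt_plus"
    using assms(3,4) unfolding gl_def by blast+
  have R: "?R \<in> mats At n (carrier At)" using diag_mat_carrier[OF assms(2)] .
  have RG2: "mmul At n ?R ?G2 \<in> mats At n (carrier At)"
    using cring.mmul_closed[OF cring_At R] diag_mat_carrier g2 Qt_plus_subset mats_mono by blast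
  have G1RG2: "mmul At n ?G1 (mmul At n ?R ?G2) \<in> mats At n (carrier At)"
    using cring.mmul_closed[OF cring_At _ RG2] diag_mat_carrier g1 Qt_plus_subset mats_mono by blast
  note r' = transform_diag_mat[OF assms(2) g1 g2 assms(5), of N]
  have "r \<in> C_N n N \<longleftrightarrow> \<not> parabolic_stabilised n N ?R" by (rule C_N_iff[OF assms(2)])
  also have "\<dots> \<longleftrightarrow> \<not> parabolic_stabilised n N (mmul At n ?R ?G2)"
    using parabolic_stabilised_mult_right_iff[OF R assms(4)] by simp
  also have "\<dots> \<longleftrightarrow> \<not> parabolic_stabilised n N (mmul At n ?G1 (mmul At n ?R ?G2))"
    using parabolic_stabilised_mult_left_iff[OF RG2 diag_mat_At_plus[OF g1] diag_mat_At_plus[OF g1i] inv]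
    by simp
  also have "\<dots> \<longleftrightarrow> \<not> parabolic_stabilised n N (diag_mat n ?r')"
    unfolding r'(2) using parabolic_stabilised_add_iff[OF G1RG2 diag_mat_At_plus[OF assms(5)]] by simp
  also have "\<dots> \<longleftrightarrow> ?r' \<in> C_N n N"
    by (rule C_N_iff[OF r'(1), symmetric])
  finally show ?thesis .
qed

end
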